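(* Let $K$ be w-simple and write $K=W_KK_JW_K^{-1}$ with $K_J$ an upper-triangular Jordan form of $K$ whose first diagonal entry $\mathsf k_1$ is nonzero, i.e. $K_J e_1=\mathsf k_1e_1$, $\mathsf k_1\ne0$, where $e_1=(1,0,\dots,0)^T$. Put $|t_0\rangle=\Gamma_W|0\rangle$ with $|0\rangle=e_1^{\otimes N}\in\mathcal H$ and $\Gamma_W=\bigotimes_{a=1}^NW_{K,a}$. Then $|t_0\rangle$ is a common eigenvector of all $T^{(K)}_m(\lambda)$: $T^{(K)}_1(\lambda)|t_0\rangle=t_{1,0}(\lambda)|t_0\rangle$ with $$t_{1,0}(\lambda)=\mathsf k_1\prod_{a=1}^N(\lambda-\xi_a+\eta)+(\mathrm{tr}K-\mathsf k_1)\prod_{a=1}^N(\lambda-\xi_a),$$ and $T^{(K)}_m(\lambda)|t_0\rangle=t_{m,0}(\lambda)|t_0\rangle$ where $$t_{m+1,0}(\lambda)=\prod_{b=1}^N\prod_{r=1}^m(\lambda-\xi_b-r\eta)\Big[T^{(K,\infty)}_{m+1}\prod_{b=1}^N(\lambda-\xi_b)+\sum_{a=1}^Ng_a^{(m+1)}(\lambda)\,t_{1,0}(\xi_a)\,t_{m,0}(\xi_a-\eta)\Big].$$ Moreover, with $t_{0,0}\equiv1$ and $t_{n,0}(\lambda)=\mathrm{q\text{-}det}\,M^{(K)}(\lambda)$, these eigenvalues satisfy the quantum spectral curve equation with constant $\varphi$: $\sum_{b=0}^n\alpha_b(\lambda)\,t_{n-b,0}(\lambda-b\eta)=0$, for the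 choice $\bar\alpha=\mathsf k_1$.
   Context: Fix integers $n\ge 2$, $N\ge1$, $\eta\in\mathbb C$ and generic inhomogeneities $\xi_1,\dots,\xi_N$. Let $\mathcal H=\bigotimes_{l=1}^N\mathbb C^n$, $R_{a,b}(\lambda)=\lambda I+\eta\,\mathbb P_{a,b}$ ($\mathbb P$ the permutation), $M^{(K)}_a(\lambda)=K_aR_{a,N}(\lambda-\xi_N)\cdots R_{a,1}(\lambda-\xi_1)$ with auxiliary $V_a\cong\mathbb C^n$, and fused transfer matrices $T^{(K)}_m(\lambda)=\mathrm{tr}_{1,\dots,m}[P^-_{1,\dots,m}M_1^{(K)}(\lambda)M_2^{(K)}(\lambda-\eta)\cdots M_m^{(K)}(\lambda-(m-1)\eta)]$, $P^-_{1,\dots,m}=\frac1{m!}\sum_{\pi\in S_m}\mathrm{sgn}(\pi)P_\pi$. $\mathrm{q\text{-}det}\,M^{(K)}(\lambda)=T^{(K)}_n(\lambda)=\det K\prod_{b=1}^N[(\lambda-\xi_b+\eta)\prod_{m=1}^{n-1}(\lambda-\xi_b-m\eta)]$. $T_m^{(K,\infty)}=\mathrm{tr}_{1,\dots,m}[P^-_{1,\dots,m}K_1\cdots K_m]$. $g_a^{(m)}(\lambda)=\prod_{b\ne a}\frac{\lambda-\xi_b}{\xi_a-\xi_b}\prod_{b=1}^N\prod_{r=1}^{m-1}\frac1{\xi_a-\xi_b-r\eta}$. A matrix is w-simple if each eigenvalue has a one-dimensional eigenspace. The coefficients are $\alpha_0(\lambda)=-1$, $\alpha_1(\lambda)=\bar\alpha\prod_{a=1}^N(\lambda+\eta-\xi_a)$,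 $\alpha_{1+j}(\lambda)=(-1)^j\prod_{h=0}^j\alpha_1(\lambda-h\eta)$, $j=1,\dots,n-1$. The recursion for $t_{m+1,0}$ is over $m\in\{1,\dots,n-1\}$. *)

theory Defs
  imports "Jordan_Normal_Form.Jordan_Normal_Form" "HOL-Combinatorics.Permutations"
begin

text \<open>A basis vector of a tensor product of L copies of C^n is labelled by a
list of length L with entries in {0..<n} (position i = i-th tensor factor).\<close>

type_synonym cfg = "nat list"
type_synonym op = "cfg \<Rightarrow> cfg \<Rightarrow> complex"
type_synonym tvec = "cfg \<Rightarrow> complex"

definition cfgs :: "nat \<Rightarrow> nat \<Rightarrow> cfg set" where
  "cfgs n L = {xs. length xs = L \<and> set xs \<subseteq> {..<n}}"

definition op_mult :: "nat \<Rightarrow> nat \<Rightarrow> op \<Rightarrow> op \<Rightarrow> op" where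
  "op_mult n L A B = (\<lambda>x y. \<Sum>z\<in>cfgs n L. A x z * B z y)"

definition op_id :: op where
  "op_id x y = (if x = y then 1 else 0)"

definition op_prod :: "nat \<Rightarrow> nat \<Rightarrow> op list \<Rightarrow> op" where
  "op_prod n L As = foldr (op_mult n L) As op_id"

definition op_app :: "nat \<Rightarrow> nat \<Rightarrow> op \<Rightarrow> tvec \<Rightarrow> tvec" where
  "op_app n L A v = (\<lambda>x. \<Sum>y\<in>cfgs n L. A x y * v y)"

text \<open>permutation of tensor factors: P_pi maps e_{y_0}\<otimes>...\<otimes>e_{y_{L-1}} to the basis
vector whose i-th label is y_{pi i}\<close>
definition perm_op :: "(nat \<Rightarrow> nat) \<Rightarrow> op" where
  "perm_op \<pi> x y = (if length x = length y \<and> x = map (\<lambda>i. y ! \<pi> i) [0..<length y] then 1 else 0)"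

definition swap_op :: "nat \<Rightarrow> nat \<Rightarrow> op" where
  "swap_op a b = perm_op (Transposition.transpose a b)"

definition loc_op :: "complex mat \<Rightarrow> nat \<Rightarrow> op" where
  "loc_op K a x y = (if length x = length y \<and> (\<forall>i<length x. i \<noteq> a \<longrightarrow> x ! i = y ! i)
                     then K $$ (x ! a, y ! a) else 0)"

definition tensor_op :: "complex mat \<Rightarrow> op" where
  "tensor_op W x y = (if length x = length y then (\<Prod>l<length x. W $$ (x ! l, y ! l)) else 0)"

text \<open>the reference vector |0> = e_1 \<otimes> ... \<otimes> e_1 (e_1 has label 0)\<close>
definition vac :: tvec where
  "vac x = (if set x \<subseteq> {0} then 1 else 0)"

definition ptrace :: "nat \<Rightarrow> nat \<Rightarrow> op \<Rightarrow> op" where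
  "ptrace n m A = (\<lambda>x y. \<Sum>a\<in>cfgs n m. A (a @ x) (a @ y))"

definition antisym :: "nat \<Rightarrow> op" where
  "antisym m = (\<lambda>x y. (1 / of_nat (fact m)) *
      (\<Sum>\<pi>\<in>{\<pi>. \<pi> permutes {..<m}}. of_int (sign \<pi>) * perm_op \<pi> x y))"

text \<open>Layout of the space V_1 \<otimes> ... \<otimes> V_m \<otimes> H: auxiliary space V_j (j=1..m) is
factor j-1, quantum site l (l=1..N) is factor m+l-1.\<close>

definition Rop :: "complex \<Rightarrow> nat \<Rightarrow> nat \<Rightarrow> complex \<Rightarrow> op" where
  "Rop \<eta> a b \<mu> = (\<lambda>x y. \<mu> * op_id x y + \<eta> * swap_op a b x y)"

definition Mon :: "nat \<Rightarrow> complex mat \<Rightarrow> complex \<Rightarrow> (nat \<Rightarrow> complex) \<Rightarrow> nat \<Rightarrow> nat \<Rightarrow> nat \<Rightarrow> complex \<Rightarrow> op" where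
  "Mon n K \<eta> \<xi> N m a lam = op_prod n (m + N)
     (loc_op K a # map (\<lambda>l. Rop \<eta> a (m + l - 1) (lam - \<xi> l)) (rev [1..<N+1]))"

definition Tm :: "nat \<Rightarrow> complex mat \<Rightarrow> complex \<Rightarrow> (nat \<Rightarrow> complex) \<Rightarrow> nat \<Rightarrow> nat \<Rightarrow> complex \<Rightarrow> op" where
  "Tm n K \<eta> \<xi> N m lam = ptrace n m (op_prod n (m + N)
     (antisym m # map (\<lambda>j. Mon n K \<eta> \<xi> N m j (lam - of_nat j * \<eta>)) [0..<m]))"

definition Tinf :: "nat \<Rightarrow> complex mat \<Rightarrow> nat \<Rightarrow> complex" where
  "Tinf n K m = (\<Sum>a\<in>cfgs n m. op_prod n m (antisym m # map (loc_op K) [0..<m]) a a)"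

definition t10 :: "nat \<Rightarrow> complex \<Rightarrow> (nat \<Rightarrow> complex) \<Rightarrow> complex \<Rightarrow> complex \<Rightarrow> complex \<Rightarrow> complex" where
  "t10 N \<eta> \<xi> k1 trK lam = k1 * (\<Prod>a=1..N. lam - \<xi> a + \<eta>) + (trK - k1) * (\<Prod>a=1..N. lam - \<xi> a)"

definition gfun :: "nat \<Rightarrow> complex \<Rightarrow> (nat \<Rightarrow> complex) \<Rightarrow> nat \<Rightarrow> nat \<Rightarrow> complex \<Rightarrow> complex" where
  "gfun N \<eta> \<xi> m a lam = (\<Prod>b\<in>{1..N} - {a}. (lam - \<xi> b) / (\<xi> a - \<xi> b)) *
     (\<Prod>b=1..N. \<Prod>r=1..m-1. 1 / (\<xi> a - \<xi> b - of_nat r * \<eta>))"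

text \<open>t_{m,0}; Tinfty is the function m \<mapsto> T_m^{(K,infinity)}\<close>
fun tm0 :: "nat \<Rightarrow> complex \<Rightarrow> (nat \<Rightarrow> complex) \<Rightarrow> complex \<Rightarrow> complex \<Rightarrow> (nat \<Rightarrow> complex) \<Rightarrow> nat \<Rightarrow> complex \<Rightarrow> complex" where
  "tm0 N \<eta> \<xi> k1 trK Tinfty 0 lam = 1"
| "tm0 N \<eta> \<xi> k1 trK Tinfty (Suc 0) lam = t10 N \<eta> \<xi> k1 trK lam"
| "tm0 N \<eta> \<xi> k1 trK Tinfty (Suc (Suc m)) lam =
     (\<Prod>b=1..N. \<Prod>r=1..Suc m. lam - \<xi> b - of_nat r * \<eta>) *
     (Tinfty (Suc (Suc m)) * (\<Prod>b=1..N. lam - \<xi> b) +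
      (\<Sum>a=1..N. gfun N \<eta> \<xi> (Suc (Suc m)) a lam * t10 N \<eta> \<xi> k1 trK (\<xi> a) *
                  tm0 N \<eta> \<xi> k1 trK Tinfty (Suc m) (\<xi> a - \<eta>)))"

definition alpha1 :: "nat \<Rightarrow> complex \<Rightarrow> (nat \<Rightarrow> complex) \<Rightarrow> complex \<Rightarrow> complex \<Rightarrow> complex" where
  "alpha1 N \<eta> \<xi> abar lam = abar * (\<Prod>a=1..N. lam + \<eta> - \<xi> a)"

definition alpha :: "nat \<Rightarrow> complex \<Rightarrow> (nat \<Rightarrow> complex) \<Rightarrow> complex \<Rightarrow> nat \<Rightarrow> complex \<Rightarrow> complex" where
  "alpha N \<eta> \<xi> abar b lam = (if b = 0 then -1
     else (-1) ^ (b - 1) * (\<Prod>h=0..b-1. alpha1 N \<eta> \<xi> abar (lam - of_nat h * \<eta>)))"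

definition mat_trace :: "complex mat \<Rightarrow> complex" where
  "mat_trace K = (\<Sum>i<dim_row K. K $$ (i, i))"

definition w_simple :: "complex mat \<Rightarrow> bool" where
  "w_simple K \<longleftrightarrow> (\<forall>k. \<forall>v\<in>carrier_vec (dim_col K). \<forall>w\<in>carrier_vec (dim_col K).
      K *\<^sub>v v = k \<cdot>\<^sub>v v \<and> K *\<^sub>v w = k \<cdot>\<^sub>v w \<and> v \<noteq> 0\<^sub>v (dim_col K) \<longrightarrow> (\<exists>c. w = c \<cdot>\<^sub>v v))"

end

theory Submission
  imports Defs "HOL-Combinatorics.Multiset_Permutations" "HOL-Computational_Algebra.Polynomial"
begin

text \<open>Conjugation by \<open>\<Gamma>\<^sub>W = W\<^sup>\<otimes>\<^sup>N\<close> turns \<open>T\<^sub>m(K)\<close> into \<open>T\<^sub>m(K\<^sub>J)\<close>, so it suffices to diagonalise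
  \<open>T\<^sub>m(K\<^sub>J)\<close> on \<open>|0\<rangle>\<close>. Since \<open>K\<^sub>J\<close> is upper triangular and the R-matrices only permute labels,
  \<open>T\<^sub>m(K\<^sub>J)\<close> never increases the weight (sum of labels) of a configuration; on \<open>|0\<rangle>\<close>, the unique
  state of weight zero, only its weight-preserving part survives, in which \<open>K\<^sub>J\<close> acts through its
  diagonal \<open>k\<^sub>1, d\<^sub>2, \<dots>, d\<^sub>n\<close>. For a diagonal twist the R-matrices attached to one site fuse, against
  the antisymmetrizer, into \<open>\<mu> + \<eta> \<Sum>\<^sub>p P\<^sub>p\<^sub>s\<close>, which acts on \<open>|0\<rangle>\<close> by a scalar. This gives
  \<open>t\<^sub>m\<^sub>,\<^sub>0(\<lambda>) = \<Prod>\<^sub>j\<^sub>=\<^sub>1\<^sup>m\<^sup>-\<^sup>1 D(\<lambda> - j\<eta>) (k\<^sub>1 e\<^sub>m\<^sub>-\<^sub>1 D(\<lambda> + \<eta>) + e\<^sub>m D(\<lambda>))\<close> with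
  \<open>D(\<mu>) = \<Prod>\<^sub>b (\<mu> - \<xi>\<^sub>b)\<close> and \<open>e\<^sub>k\<close> the elementary symmetric polynomials in \<open>d\<^sub>2, \<dots>, d\<^sub>n\<close>.
  The recursion for \<open>t\<^sub>m\<^sub>+\<^sub>1\<^sub>,\<^sub>0\<close> is Lagrange interpolation of \<open>D(\<lambda> + \<eta>) - D(\<lambda>)\<close> at the nodes
  \<open>\<xi>\<^sub>a\<close>, the quantum determinant is the case \<open>m = n\<close> (where \<open>e\<^sub>n = 0\<close>), and the quantum spectral
  curve telescopes.\<close>

lemma cfgs_finite[simp]: "finite (cfgs n L)"
proof -
  have "cfgs n L = {xs. set xs \<subseteq> {..<n} \<and> length xs = L}" unfolding cfgs_def by auto
  thus ?thesis using finite_lists_length_eq[of "{..<n}" L] by simp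
qed

lemma cfgs_len: "x \<in> cfgs n L \<Longrightarrow> length x = L" unfolding cfgs_def by auto

lemma cfgs_nth: "x \<in> cfgs n L \<Longrightarrow> i < L \<Longrightarrow> x ! i < n"
  unfolding cfgs_def using nth_mem by fastforce

lemma cfgs_iff: "x \<in> cfgs n L \<longleftrightarrow> length x = L \<and> (\<forall>i<L. x ! i < n)"
  unfolding cfgs_def by (auto simp: set_conv_nth)

lemma append_cfgs: "a \<in> cfgs n m \<Longrightarrow> b \<in> cfgs n N \<Longrightarrow> a @ b \<in> cfgs n (m + N)"
  unfolding cfgs_def by auto


lemma cfgs_split: "x \<in> cfgs n (m + N) \<Longrightarrow> \<exists>a b. x = a @ b \<and> a \<in> cfgs n m \<and> b \<in> cfgs n N"
  unfolding cfgs_def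
  by (rule exI[of _ "take m x"], rule exI[of _ "drop m x"])
     (auto dest: in_set_takeD in_set_dropD)

lemma cfgs_0[simp]: "cfgs n 0 = {[]}" unfolding cfgs_def by auto

lemma sum_cfgs_append:
  "(\<Sum>x\<in>cfgs n (m + N). f x) = (\<Sum>a\<in>cfgs n m. \<Sum>b\<in>cfgs n N. f (a @ b))"
proof -
  have inj: "inj_on (\<lambda>(a,b). a @ b) (cfgs n m \<times> cfgs n N)"
    by (auto simp: inj_on_def cfgs_def)
  have img: "(\<lambda>(a,b). a @ b) ` (cfgs n m \<times> cfgs n N) = cfgs n (m + N)"
    using append_cfgs cfgs_split by fastforce
  have "(\<Sum>x\<in>cfgs n (m + N). f x) = (\<Sum>p\<in>cfgs n m \<times> cfgs n N. f ((\<lambda>(a,b). a @ b) p))"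
    by (subst img[symmetric], subst sum.reindex[OF inj]) (simp add: o_def)
  also have "\<dots> = (\<Sum>a\<in>cfgs n m. \<Sum>b\<in>cfgs n N. f (a @ b))"
    by (simp add: sum.cartesian_product case_prod_unfold)
  finally show ?thesis .
qed

lemma cfgs_Suc: "cfgs n (Suc L) = (\<lambda>(k,z). k # z) ` ({..<n} \<times> cfgs n L)"
proof
  show "cfgs n (Suc L) \<subseteq> (\<lambda>(k,z). k # z) ` ({..<n} \<times> cfgs n L)"
  proof
    fix x assume "x \<in> cfgs n (Suc L)"
    then obtain k z where "x = k # z" unfolding cfgs_def by (cases x) auto
    with \<open>x \<in> cfgs n (Suc L)\<close> show "x \<in> (\<lambda>(k,z). k # z) ` ({..<n} \<times> cfgs n L)"
      unfolding cfgs_def by auto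
  qed
qed (auto simp: cfgs_def)

lemma sum_prod_cfgs: fixes f :: "nat \<Rightarrow> nat \<Rightarrow> complex" shows
  "(\<Sum>z\<in>cfgs n L. \<Prod>l<L. f l (z ! l)) = (\<Prod>l<L. \<Sum>k<n. f l k)"
proof (induction L arbitrary: f)
  case 0 thus ?case by simp
next
  case (Suc L)
  have inj: "inj_on (\<lambda>(k,z). k # z) ({..<n} \<times> cfgs n L)" by (auto simp: inj_on_def)
  have "(\<Sum>z\<in>cfgs n (Suc L). \<Prod>l<Suc L. f l (z ! l))
      = (\<Sum>p\<in>{..<n} \<times> cfgs n L. \<Prod>l<Suc L. f l (((\<lambda>(k,z). k # z) p) ! l))"
    by (subst cfgs_Suc, subst sum.reindex[OF inj]) (simp add: o_def)
  also have "\<dots> = (\<Sum>k<n. \<Sum>z\<in>cfgs n L. f 0 k * (\<Prod>l<L. f (Suc l) (z ! l)))"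
    by (simp add: sum.cartesian_product case_prod_unfold prod.lessThan_Suc_shift del: prod.lessThan_Suc)
  also have "\<dots> = (\<Sum>k<n. f 0 k) * (\<Prod>l<L. \<Sum>k<n. f (Suc l) k)"
  proof -
    have "(\<Sum>k<n. \<Sum>z\<in>cfgs n L. f 0 k * (\<Prod>l<L. f (Suc l) (z ! l)))
        = (\<Sum>k<n. f 0 k * (\<Sum>z\<in>cfgs n L. (\<Prod>l<L. f (Suc l) (z ! l))))"
      by (simp only: sum_distrib_left)
    also have "\<dots> = (\<Sum>k<n. f 0 k) * (\<Sum>z\<in>cfgs n L. (\<Prod>l<L. f (Suc l) (z ! l)))"
      by (simp only: sum_distrib_right)
    finally show ?thesis using Suc.IH[of "\<lambda>l. f (Suc l)"] by simp
  qed
  also have "\<dots> = (\<Prod>l<Suc L. \<Sum>k<n. f l k)" by (simp only: prod.lessThan_Suc_shift)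
  finally show ?case .
qed

text \<open>Operators are only ever applied to configurations in \<open>cfgs n L\<close>; their entries elsewhere are
  junk, so operator identities are stated as agreement on configurations.\<close>
definition op_eq :: "nat \<Rightarrow> nat \<Rightarrow> op \<Rightarrow> op \<Rightarrow> bool" where
  "op_eq n L A B \<longleftrightarrow> (\<forall>x\<in>cfgs n L. \<forall>y\<in>cfgs n L. A x y = B x y)"

lemma op_eq_refl[simp]: "op_eq n L A A" unfolding op_eq_def by auto
lemma op_eq_sym: "op_eq n L A B \<Longrightarrow> op_eq n L B A" unfolding op_eq_def by auto
lemma op_eq_trans[trans]: "op_eq n L A B \<Longrightarrow> op_eq n L B C \<Longrightarrow> op_eq n L A C" unfolding op_eq_def by auto
lemma op_eq_eq_trans[trans]: "op_eq n L A B \<Longrightarrow> B = C \<Longrightarrow> op_eq n L A C" by simp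
lemma eq_op_eq_trans[trans]: "A = B \<Longrightarrow> op_eq n L B C \<Longrightarrow> op_eq n L A C" by simp
lemma op_eqD: "op_eq n L A B \<Longrightarrow> x \<in> cfgs n L \<Longrightarrow> y \<in> cfgs n L \<Longrightarrow> A x y = B x y"
  unfolding op_eq_def by auto

lemma op_mult_assoc:
  "op_mult n L A (op_mult n L B C) = op_mult n L (op_mult n L A B) C"
  unfolding op_mult_def
  by (auto simp: fun_eq_iff sum_distrib_left sum_distrib_right mult.assoc intro: sum.swap)

lemma op_mult_cong: "op_eq n L A A' \<Longrightarrow> op_eq n L B B' \<Longrightarrow> op_eq n L (op_mult n L A B) (op_mult n L A' B')"
  unfolding op_eq_def op_mult_def by auto

lemma op_mult_cong_l: "op_eq n L A A' \<Longrightarrow> op_eq n L (op_mult n L A B) (op_mult n L A' B)"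
  by (rule op_mult_cong) auto
lemma op_mult_cong_r: "op_eq n L B B' \<Longrightarrow> op_eq n L (op_mult n L A B) (op_mult n L A B')"
  by (rule op_mult_cong) auto

lemma op_id_left: assumes "x \<in> cfgs n L" shows "op_mult n L op_id A x y = A x y"
proof -
  have "op_mult n L op_id A x y = (\<Sum>z\<in>cfgs n L. if z = x then A x y else 0)"
    unfolding op_mult_def op_id_def by (rule sum.cong) auto
  thus ?thesis using assms by simp
qed

lemma op_id_right: assumes "y \<in> cfgs n L" shows "op_mult n L A op_id x y = A x y"
proof -
  have "op_mult n L A op_id x y = (\<Sum>z\<in>cfgs n L. if z = y then A x y else 0)"
    unfolding op_mult_def op_id_def by (rule sum.cong) auto
  thus ?thesis using assms by simp
qed

lemma op_eq_id_left: "op_eq n L (op_mult n L op_id A) A" unfolding op_eq_def by (simp add: op_id_left)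
lemma op_eq_id_right: "op_eq n L (op_mult n L A op_id) A" unfolding op_eq_def by (simp add: op_id_right)

lemma op_prod_Nil[simp]: "op_prod n L [] = op_id" unfolding op_prod_def by simp
lemma op_prod_Cons[simp]: "op_prod n L (A # As) = op_mult n L A (op_prod n L As)"
  unfolding op_prod_def by simp

lemma op_prod_append: "op_eq n L (op_prod n L (As @ Bs)) (op_mult n L (op_prod n L As) (op_prod n L Bs))"
proof (induction As)
  case Nil thus ?case by (simp add: op_eq_sym[OF op_eq_id_left])
next
  case (Cons A As)
  have "op_eq n L (op_prod n L ((A # As) @ Bs)) (op_mult n L A (op_mult n L (op_prod n L As) (op_prod n L Bs)))"
    using Cons by (simp add: op_mult_cong_r)
  thus ?case by (simp add: op_mult_assoc)
qed

lemma op_mult_add_left: "op_mult n L (\<lambda>x y. A x y + B x y) C = (\<lambda>x y. op_mult n L A C x y + op_mult n L B C x y)"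
  unfolding op_mult_def by (simp add: algebra_simps sum.distrib)
lemma op_mult_add_right: "op_mult n L C (\<lambda>x y. A x y + B x y) = (\<lambda>x y. op_mult n L C A x y + op_mult n L C B x y)"
  unfolding op_mult_def by (simp add: algebra_simps sum.distrib)
lemma op_mult_smult_left: "op_mult n L (\<lambda>x y. c * A x y) C = (\<lambda>x y. c * op_mult n L A C x y)"
  unfolding op_mult_def by (simp add: algebra_simps sum_distrib_left)
lemma op_mult_smult_right: "op_mult n L C (\<lambda>x y. c * A x y) = (\<lambda>x y. c * op_mult n L C A x y)"
  unfolding op_mult_def by (simp add: algebra_simps sum_distrib_left)
lemma op_mult_sum_left: "op_mult n L (\<lambda>x y. \<Sum>i\<in>I. A i x y) C = (\<lambda>x y. \<Sum>i\<in>I. op_mult n L (A i) C x y)"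
  unfolding op_mult_def by (auto simp: fun_eq_iff sum_distrib_right intro: sum.swap)
lemma op_mult_sum_right: "op_mult n L C (\<lambda>x y. \<Sum>i\<in>I. A i x y) = (\<lambda>x y. \<Sum>i\<in>I. op_mult n L C (A i) x y)"
  unfolding op_mult_def by (auto simp: fun_eq_iff sum_distrib_left intro: sum.swap)

lemma nth_permute_list[simp]: "i < length y \<Longrightarrow> permute_list \<pi> y ! i = y ! \<pi> i"
  unfolding permute_list_def by simp

lemma perm_op_permute_list: "perm_op \<pi> x y = (if x = permute_list \<pi> y then 1 else 0)"
  unfolding perm_op_def permute_list_def by auto

lemma permutes_lt: "\<pi> permutes {..<L} \<Longrightarrow> i < L \<Longrightarrow> \<pi> i < L"
  using permutes_in_image by fastforce

lemma permute_list_cfgs: "\<pi> permutes {..<L} \<Longrightarrow> y \<in> cfgs n L \<Longrightarrow> permute_list \<pi> y \<in> cfgs n L"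
  unfolding cfgs_iff using permutes_lt by auto

lemma eq_permute_list_iff:
  assumes p: "\<pi> permutes {..<L}" and z: "length z = L"
  shows "(x = permute_list \<pi> z) \<longleftrightarrow> (length x = L \<and> z = permute_list (inv_into UNIV \<pi>) x)"
proof
  have ip: "inv_into UNIV \<pi> permutes {..<L}" using p by (rule permutes_inv)
  assume "x = permute_list \<pi> z"
  moreover have "permute_list (inv_into UNIV \<pi>) (permute_list \<pi> z) = z"
    using ip z permutes_inv_o[OF p] by (simp add: permute_list_compose[symmetric])
  ultimately show "length x = L \<and> z = permute_list (inv_into UNIV \<pi>) x" using z by simp
next
  assume "length x = L \<and> z = permute_list (inv_into UNIV \<pi>) x"
  moreover have "permute_list \<pi> (permute_list (inv_into UNIV \<pi>) x) = x" if "length x = L"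
    using p that permutes_inv_o[OF p] by (simp add: permute_list_compose[symmetric])
  ultimately show "x = permute_list \<pi> z" by simp
qed

lemma op_mult_perm_right:
  assumes p: "\<pi> permutes {..<L}" and y: "y \<in> cfgs n L"
  shows "op_mult n L A (perm_op \<pi>) x y = A x (permute_list \<pi> y)"
proof -
  have "op_mult n L A (perm_op \<pi>) x y = (\<Sum>z\<in>cfgs n L. if z = permute_list \<pi> y then A x (permute_list \<pi> y) else 0)"
    unfolding op_mult_def perm_op_permute_list by (rule sum.cong) auto
  thus ?thesis using permute_list_cfgs[OF p y] by simp
qed

lemma op_mult_perm_left:
  assumes p: "\<pi> permutes {..<L}" and x: "x \<in> cfgs n L"
  shows "op_mult n L (perm_op \<pi>) A x y = A (permute_list (inv_into UNIV \<pi>) x) y"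
proof -
  have ip: "inv_into UNIV \<pi> permutes {..<L}" using p by (rule permutes_inv)
  have "op_mult n L (perm_op \<pi>) A x y = (\<Sum>z\<in>cfgs n L. if z = permute_list (inv_into UNIV \<pi>) x then A (permute_list (inv_into UNIV \<pi>) x) y else 0)"
  proof (unfold op_mult_def perm_op_permute_list, rule sum.cong)
    fix z assume "z \<in> cfgs n L"
    hence "x = permute_list \<pi> z \<longleftrightarrow> z = permute_list (inv_into UNIV \<pi>) x"
      using eq_permute_list_iff[OF p cfgs_len] cfgs_len[OF x] by blast
    thus "(if x = permute_list \<pi> z then 1 else 0) * A z y
        = (if z = permute_list (inv_into UNIV \<pi>) x then A (permute_list (inv_into UNIV \<pi>) x) y else 0)"
      by simp
  qed simp
  thus ?thesis using permute_list_cfgs[OF ip x] by simp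
qed

lemma perm_mult:
  assumes "\<sigma> permutes {..<L}" "\<pi> permutes {..<L}"
  shows "op_eq n L (op_mult n L (perm_op \<sigma>) (perm_op \<pi>)) (perm_op (\<pi> o \<sigma>))"
  unfolding op_eq_def
proof (intro ballI)
  fix x y assume x: "x \<in> cfgs n L" and y: "y \<in> cfgs n L"
  show "op_mult n L (perm_op \<sigma>) (perm_op \<pi>) x y = perm_op (\<pi> o \<sigma>) x y"
    using op_mult_perm_right[OF assms(2) y] permute_list_compose[of \<sigma> y \<pi>, symmetric] assms(1) cfgs_len[OF y]
    by (simp add: perm_op_permute_list)
qed

lemma permute_list_append:
  assumes "\<pi> permutes {..<length b}"
  shows "permute_list \<pi> (b @ y) = permute_list \<pi> b @ y"
proof (rule nth_equalityI)
  fix i assume i: "i < length (permute_list \<pi> (b @ y))"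
  show "permute_list \<pi> (b @ y) ! i = (permute_list \<pi> b @ y) ! i"
  proof (cases "i < length b")
    case True thus ?thesis using permutes_lt[OF assms True] by (simp add: nth_append)
  next
    case False
    hence "\<pi> i = i" using assms by (meson lessThan_iff permutes_not_in)
    thus ?thesis using False i by (simp add: nth_append)
  qed
qed simp

lemma perm_op_append:
  assumes "\<pi> permutes {..<m}" "length a = m" "length b = m"
  shows "perm_op \<pi> (a @ x) (b @ y) = perm_op \<pi> a b * (if x = y then 1 else 0)"
  using assms by (auto simp: perm_op_permute_list permute_list_append)

abbreviation Perms :: "nat \<Rightarrow> (nat \<Rightarrow> nat) set" where
  "Perms m \<equiv> {\<pi>. \<pi> permutes {..<m}}"

lemma finite_Perms[simp]: "finite (Perms m)"
  using finite_permutations[of "{..<m}"] by simp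

lemma card_Perms: "card (Perms m) = fact m"
  using card_permutations[of "{..<m}" m] by simp

lemma permutes_mono: "\<pi> permutes {..<m} \<Longrightarrow> m \<le> (L::nat) \<Longrightarrow> \<pi> permutes {..<L}"
proof -
  assume a: "\<pi> permutes {..<m}" "m \<le> L"
  have "{..<m} \<subseteq> {..<L}" using a(2) by (auto simp: subset_eq)
  thus ?thesis using permutes_subset[of \<pi> "{..<m}" "{..<L}"] a(1) by blast
qed

lemma bij_Perms_comp:
  assumes "\<sigma> permutes {..<m}"
  shows "bij_betw (\<lambda>\<pi>. \<pi> o \<sigma>) (Perms m) (Perms m)"
proof (rule bij_betw_byWitness[where f' = "\<lambda>\<pi>. \<pi> o inv_into UNIV \<sigma>"])
  show "\<forall>a\<in>Perms m. a o \<sigma> o inv_into UNIV \<sigma> = a" using permutes_inv_o(1)[OF assms] by (simp add: o_assoc[symmetric])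
  show "\<forall>a\<in>Perms m. a o inv_into UNIV \<sigma> o \<sigma> = a" using permutes_inv_o(2)[OF assms] by (simp add: o_assoc[symmetric])
  show "(\<lambda>\<pi>. \<pi> o \<sigma>) ` Perms m \<subseteq> Perms m" using assms by (auto intro: permutes_compose)
  show "(\<lambda>\<pi>. \<pi> o inv_into UNIV \<sigma>) ` Perms m \<subseteq> Perms m" using assms by (auto intro: permutes_compose permutes_inv)
qed

lemma sign_sq: "\<sigma> permutes {..<m} \<Longrightarrow> of_int (sign \<sigma>) * of_int (sign \<sigma>) = (1::complex)"
  by (simp add: sign_def)

lemma perm_antisym:
  assumes s: "\<sigma> permutes {..<m}" and mL: "m \<le> L"
  shows "op_eq n L (op_mult n L (perm_op \<sigma>) (antisym m)) (\<lambda>x y. of_int (sign \<sigma>) * antisym m x y)"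
  unfolding op_eq_def
proof (intro ballI)
  fix x y assume x: "x \<in> cfgs n L" and y: "y \<in> cfgs n L"
  have sL: "\<sigma> permutes {..<L}" using permutes_mono[OF s mL] .
  have "op_mult n L (perm_op \<sigma>) (antisym m) x y
      = (1 / of_nat (fact m)) * (\<Sum>\<pi>\<in>Perms m. of_int (sign \<pi>) * op_mult n L (perm_op \<sigma>) (perm_op \<pi>) x y)"
    unfolding antisym_def op_mult_smult_right op_mult_sum_right by simp
  also have "(\<Sum>\<pi>\<in>Perms m. of_int (sign \<pi>) * op_mult n L (perm_op \<sigma>) (perm_op \<pi>) x y)
      = (\<Sum>\<pi>\<in>Perms m. of_int (sign \<sigma>) * (of_int (sign (\<pi> o \<sigma>)) * perm_op (\<pi> o \<sigma>) x y))"
  proof (rule sum.cong[OF refl])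
    fix \<pi> assume "\<pi> \<in> Perms m"
    hence p: "\<pi> permutes {..<m}" by simp
    have "sign (\<pi> o \<sigma>) = sign \<pi> * sign \<sigma>"
    proof -
      have "permutation \<pi>" "permutation \<sigma>" using p s permutation_permutes by blast+
      thus ?thesis by (rule sign_compose)
    qed
    moreover have "op_mult n L (perm_op \<sigma>) (perm_op \<pi>) x y = perm_op (\<pi> o \<sigma>) x y"
      using op_eqD[OF perm_mult[OF sL permutes_mono[OF p mL]] x y] .
    ultimately show "of_int (sign \<pi>) * op_mult n L (perm_op \<sigma>) (perm_op \<pi>) x y
      = of_int (sign \<sigma>) * (of_int (sign (\<pi> o \<sigma>)) * perm_op (\<pi> o \<sigma>) x y)"
      using sign_sq[OF s] by (simp add: algebra_simps)
  qed
  also have "\<dots> = of_int (sign \<sigma>) * (\<Sum>\<pi>\<in>Perms m. of_int (sign \<pi>) * perm_op \<pi> x y)"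
    by (subst sum_distrib_left[symmetric])
       (rule arg_cong[where f="\<lambda>u. _ * u"], rule sum.reindex_bij_betw[OF bij_Perms_comp[OF s]])
  finally show "op_mult n L (perm_op \<sigma>) (antisym m) x y = of_int (sign \<sigma>) * antisym m x y"
    unfolding antisym_def by (simp add: algebra_simps)
qed

lemma antisym_absorb:
  assumes "k \<le> m" "m \<le> L"
  shows "op_eq n L (op_mult n L (antisym k) (antisym m)) (antisym m)"
  unfolding op_eq_def
proof (intro ballI)
  fix x y assume x: "x \<in> cfgs n L" and y: "y \<in> cfgs n L"
  have "op_mult n L (antisym k) (antisym m) x y
     = (1 / of_nat (fact k)) * (\<Sum>\<sigma>\<in>Perms k. of_int (sign \<sigma>) * op_mult n L (perm_op \<sigma>) (antisym m) x y)"
    unfolding antisym_def[of k] op_mult_smult_left op_mult_sum_left by simp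
  also have "(\<Sum>\<sigma>\<in>Perms k. of_int (sign \<sigma>) * op_mult n L (perm_op \<sigma>) (antisym m) x y)
      = (\<Sum>\<sigma>\<in>Perms k. antisym m x y)"
  proof (rule sum.cong[OF refl])
    fix \<sigma> assume "\<sigma> \<in> Perms k"
    hence s: "\<sigma> permutes {..<m}" using permutes_mono assms by auto
    show "of_int (sign \<sigma>) * op_mult n L (perm_op \<sigma>) (antisym m) x y = antisym m x y"
      using op_eqD[OF perm_antisym[OF s assms(2)] x y] sign_sq[OF s]
      by (simp add: mult.assoc[symmetric])
  qed
  also have "\<dots> = of_nat (fact k) * antisym m x y" by (simp add: card_Perms)
  finally show "op_mult n L (antisym k) (antisym m) x y = antisym m x y" by simp
qed

lemma antisym_append:
  assumes "length a = m" "length b = m"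
  shows "antisym m (a @ x) (b @ y) = antisym m a b * (if x = y then 1 else 0)"
proof -
  have "(\<Sum>\<pi>\<in>Perms m. of_int (sign \<pi>) * perm_op \<pi> (a @ x) (b @ y))
     = (\<Sum>\<pi>\<in>Perms m. of_int (sign \<pi>) * perm_op \<pi> a b * (if x = y then 1 else 0))"
    by (rule sum.cong[OF refl]) (use assms perm_op_append in auto)
  thus ?thesis unfolding antisym_def by (simp add: sum_distrib_right)
qed

lemma mat_mult_entry:
  assumes "A \<in> carrier_mat n n" "B \<in> carrier_mat n n" "i < n" "j < n"
  shows "(A * B) $$ (i,j) = (\<Sum>k<n. A $$ (i,k) * B $$ (k,j))"
  using assms by (simp add: scalar_prod_def atLeast0LessThan)

lemma cfgs_upd: "y \<in> cfgs n L \<Longrightarrow> k < n \<Longrightarrow> y[a := k] \<in> cfgs n L"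
  unfolding cfgs_def using set_update_subset_insert[of y a k] by auto

lemma sum_loc_right:
  assumes y: "y \<in> cfgs n L" and a: "a < L"
  shows "(\<Sum>z\<in>cfgs n L. loc_op M a z y * h z) = (\<Sum>k<n. M $$ (k, y ! a) * h (y[a := k]))"
proof -
  have inj: "inj_on (\<lambda>k. y[a := k]) {..<n}"
    using a cfgs_len[OF y] by (auto simp: inj_on_def dest: arg_cong[where f="\<lambda>l. l ! a"])
  have sub: "(\<lambda>k. y[a := k]) ` {..<n} \<subseteq> cfgs n L" using cfgs_upd[OF y] by auto
  have "(\<Sum>z\<in>cfgs n L. loc_op M a z y * h z) = (\<Sum>z\<in>(\<lambda>k. y[a := k]) ` {..<n}. loc_op M a z y * h z)"
  proof (rule sum.mono_neutral_right)
    show "\<forall>z\<in>cfgs n L - (\<lambda>k. y[a := k]) ` {..<n}. loc_op M a z y * h z = 0"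
    proof
      fix z assume z: "z \<in> cfgs n L - (\<lambda>k. y[a := k]) ` {..<n}"
      have "loc_op M a z y = 0"
      proof (rule ccontr)
        assume "loc_op M a z y \<noteq> 0"
        hence agree: "\<forall>i<length z. i \<noteq> a \<longrightarrow> z ! i = y ! i" and len: "length z = length y"
          unfolding loc_op_def by (auto split: if_splits)
        have "z = y[a := z ! a]"
          by (rule nth_equalityI) (use agree len a cfgs_len[OF y] in \<open>auto simp: nth_list_update\<close>)
        moreover have "z ! a < n" using z a by (auto intro: cfgs_nth)
        ultimately show False using z by auto
      qed
      thus "loc_op M a z y * h z = 0" by simp
    qed
  qed (use sub in auto)
  also have "\<dots> = (\<Sum>k<n. loc_op M a (y[a := k]) y * h (y[a := k]))"
    by (rule sum.reindex[OF inj, unfolded o_def])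
  also have "\<dots> = (\<Sum>k<n. M $$ (k, y ! a) * h (y[a := k]))"
    by (rule sum.cong) (use a cfgs_len[OF y] in \<open>auto simp: loc_op_def nth_list_update\<close>)
  finally show ?thesis .
qed

lemma sum_loc_left:
  assumes x: "x \<in> cfgs n L" and a: "a < L"
  shows "(\<Sum>z\<in>cfgs n L. h z * loc_op M a x z) = (\<Sum>k<n. h (x[a := k]) * M $$ (x ! a, k))"
proof -
  have inj: "inj_on (\<lambda>k. x[a := k]) {..<n}"
    using a cfgs_len[OF x] by (auto simp: inj_on_def dest: arg_cong[where f="\<lambda>l. l ! a"])
  have sub: "(\<lambda>k. x[a := k]) ` {..<n} \<subseteq> cfgs n L" using cfgs_upd[OF x] by auto
  have "(\<Sum>z\<in>cfgs n L. h z * loc_op M a x z) = (\<Sum>z\<in>(\<lambda>k. x[a := k]) ` {..<n}. h z * loc_op M a x z)"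
  proof (rule sum.mono_neutral_right)
    show "\<forall>z\<in>cfgs n L - (\<lambda>k. x[a := k]) ` {..<n}. h z * loc_op M a x z = 0"
    proof
      fix z assume z: "z \<in> cfgs n L - (\<lambda>k. x[a := k]) ` {..<n}"
      have "loc_op M a x z = 0"
      proof (rule ccontr)
        assume "loc_op M a x z \<noteq> 0"
        hence agree: "\<forall>i<length x. i \<noteq> a \<longrightarrow> x ! i = z ! i" and len: "length x = length z"
          unfolding loc_op_def by (auto split: if_splits)
        have "z = x[a := z ! a]"
          by (rule nth_equalityI) (use agree len a cfgs_len[OF x] in \<open>auto simp: nth_list_update\<close>)
        moreover have "z ! a < n" using z a by (auto intro: cfgs_nth)
        ultimately show False using z by auto
      qed
      thus "h z * loc_op M a x z = 0" by simp
    qed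
  qed (use sub in auto)
  also have "\<dots> = (\<Sum>k<n. h (x[a := k]) * loc_op M a x (x[a := k]))"
    by (rule sum.reindex[OF inj, unfolded o_def])
  also have "\<dots> = (\<Sum>k<n. h (x[a := k]) * M $$ (x ! a, k))"
    by (rule sum.cong) (use a cfgs_len[OF x] in \<open>auto simp: loc_op_def nth_list_update\<close>)
  finally show ?thesis .
qed

lemma tensor_op_cfgs: "x \<in> cfgs n L \<Longrightarrow> y \<in> cfgs n L \<Longrightarrow> tensor_op W x y = (\<Prod>l<L. W $$ (x ! l, y ! l))"
  unfolding tensor_op_def by (simp add: cfgs_len)

lemma tensor_op_inverse:
  assumes W: "W \<in> carrier_mat n n" and V: "V \<in> carrier_mat n n" and WV: "W * V = 1\<^sub>m n"
  shows "op_eq n L (op_mult n L (tensor_op W) (tensor_op V)) op_id"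
  unfolding op_eq_def
proof (intro ballI)
  fix x y assume x: "x \<in> cfgs n L" and y: "y \<in> cfgs n L"
  have "op_mult n L (tensor_op W) (tensor_op V) x y
      = (\<Sum>z\<in>cfgs n L. \<Prod>l<L. W $$ (x ! l, z ! l) * V $$ (z ! l, y ! l))"
    unfolding op_mult_def
    by (rule sum.cong) (use x y in \<open>auto simp: tensor_op_cfgs prod.distrib\<close>)
  also have "\<dots> = (\<Prod>l<L. \<Sum>k<n. W $$ (x ! l, k) * V $$ (k, y ! l))"
    by (rule sum_prod_cfgs)
  also have "\<dots> = (\<Prod>l<L. if x ! l = y ! l then 1 else 0)"
    by (rule prod.cong) (use x y W V WV in \<open>auto simp: mat_mult_entry[symmetric] cfgs_nth\<close>)
  also have "\<dots> = op_id x y"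
  proof (cases "x = y")
    case True thus ?thesis by (simp add: op_id_def)
  next
    case False
    then obtain l where "l < L" "x ! l \<noteq> y ! l"
      using x y by (metis cfgs_len nth_equalityI)
    thus ?thesis using False by (auto simp: op_id_def intro: prod_zero)
  qed
  finally show "op_mult n L (tensor_op W) (tensor_op V) x y = op_id x y" .
qed

definition intertw :: "nat \<Rightarrow> nat \<Rightarrow> op \<Rightarrow> op \<Rightarrow> op \<Rightarrow> bool" where
  "intertw n L G A B \<longleftrightarrow> op_eq n L (op_mult n L G A) (op_mult n L B G)"

lemma intertw_mult:
  assumes "intertw n L G A B" "intertw n L G A' B'"
  shows "intertw n L G (op_mult n L A A') (op_mult n L B B')"
  unfolding intertw_def
proof -
  have "op_mult n L G (op_mult n L A A') = op_mult n L (op_mult n L G A) A'" by (simp add: op_mult_assoc)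
  also have "op_eq n L \<dots> (op_mult n L (op_mult n L B G) A')"
    using assms(1) unfolding intertw_def by (rule op_mult_cong_l)
  also have "op_mult n L (op_mult n L B G) A' = op_mult n L B (op_mult n L G A')" by (simp add: op_mult_assoc)
  also have "op_eq n L \<dots> (op_mult n L B (op_mult n L B' G))"
    using assms(2) unfolding intertw_def by (rule op_mult_cong_r)
  also have "op_mult n L B (op_mult n L B' G) = op_mult n L (op_mult n L B B') G" by (simp add: op_mult_assoc)
  finally show "op_eq n L (op_mult n L G (op_mult n L A A')) (op_mult n L (op_mult n L B B') G)" .
qed

lemma intertw_id: "intertw n L G op_id op_id"
  unfolding intertw_def op_eq_def by (simp add: op_id_left op_id_right)

lemma intertw_prod: "list_all2 (intertw n L G) As Bs \<Longrightarrow> intertw n L G (op_prod n L As) (op_prod n L Bs)"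
  by (induction As Bs rule: list_all2_induct) (auto intro: intertw_mult intertw_id)

lemma intertw_lin:
  assumes "intertw n L G A B" "intertw n L G A' B'"
  shows "intertw n L G (\<lambda>x y. c * A x y + d * A' x y) (\<lambda>x y. c * B x y + d * B' x y)"
  using assms unfolding intertw_def op_eq_def
  by (simp add: op_mult_add_left op_mult_add_right op_mult_smult_left op_mult_smult_right)

lemma intertw_sum:
  assumes "\<And>i. i \<in> I \<Longrightarrow> intertw n L G (A i) (B i)"
  shows "intertw n L G (\<lambda>x y. c * (\<Sum>i\<in>I. f i * A i x y)) (\<lambda>x y. c * (\<Sum>i\<in>I. f i * B i x y))"
  using assms unfolding intertw_def op_eq_def
  by (simp add: op_mult_sum_left op_mult_sum_right op_mult_smult_left op_mult_smult_right)

lemma tensor_perm_intertw: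
  assumes p: "\<pi> permutes {..<L}"
  shows "intertw n L (tensor_op W) (perm_op \<pi>) (perm_op \<pi>)"
  unfolding intertw_def op_eq_def
proof (intro ballI)
  fix x y assume x: "x \<in> cfgs n L" and y: "y \<in> cfgs n L"
  have ip: "inv_into UNIV \<pi> permutes {..<L}" using p by (rule permutes_inv)
  have "op_mult n L (tensor_op W) (perm_op \<pi>) x y = (\<Prod>l<L. W $$ (x ! l, y ! \<pi> l))"
    using op_mult_perm_right[OF p y] tensor_op_cfgs[OF x permute_list_cfgs[OF p y]] cfgs_len[OF y] by simp
  also have "\<dots> = (\<Prod>l<L. W $$ (x ! inv_into UNIV \<pi> l, y ! l))"
  proof -
    have "(\<Prod>l<L. W $$ (x ! inv_into UNIV \<pi> l, y ! l)) = (\<Prod>l<L. W $$ (x ! inv_into UNIV \<pi> (\<pi> l), y ! \<pi> l))"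
      by (rule prod.reindex_bij_betw[symmetric]) (rule permutes_imp_bij[OF p])
    also have "\<dots> = (\<Prod>l<L. W $$ (x ! l, y ! \<pi> l))"
      using permutes_inverses(2)[OF p] by simp
    finally show ?thesis by simp
  qed
  also have "\<dots> = op_mult n L (perm_op \<pi>) (tensor_op W) x y"
    using op_mult_perm_left[OF p x] tensor_op_cfgs[OF permute_list_cfgs[OF ip x] y] cfgs_len[OF x] permutes_lt[OF ip]
    by simp
  finally show "op_mult n L (tensor_op W) (perm_op \<pi>) x y = op_mult n L (perm_op \<pi>) (tensor_op W) x y" .
qed

lemma tensor_swap_intertw:
  assumes "a < L" "b < L"
  shows "intertw n L (tensor_op W) (swap_op a b) (swap_op a b)"
  unfolding swap_op_def by (rule tensor_perm_intertw) (use assms in \<open>auto intro: permutes_swap_id\<close>)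

lemma tensor_Rop_intertw:
  assumes "a < L" "b < L"
  shows "intertw n L (tensor_op W) (Rop \<eta> a b \<mu>) (Rop \<eta> a b \<mu>)"
  unfolding Rop_def by (rule intertw_lin[OF intertw_id tensor_swap_intertw[OF assms]])

lemma tensor_antisym_intertw:
  assumes "m \<le> L"
  shows "intertw n L (tensor_op W) (antisym m) (antisym m)"
  unfolding antisym_def
  by (rule intertw_sum, rule tensor_perm_intertw) (use assms permutes_mono in auto)

lemma tensor_loc_intertw:
  assumes W: "W \<in> carrier_mat n n" and K: "K \<in> carrier_mat n n" and KJ: "KJ \<in> carrier_mat n n"
    and KW: "K * W = W * KJ" and a: "a < L"
  shows "intertw n L (tensor_op W) (loc_op KJ a) (loc_op K a)"
  unfolding intertw_def op_eq_def
proof (intro ballI)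
  fix x y assume x: "x \<in> cfgs n L" and y: "y \<in> cfgs n L"
  let ?R = "\<Prod>l\<in>{..<L} - {a}. W $$ (x ! l, y ! l)"
  have xa: "x ! a < n" and ya: "y ! a < n" using x y a by (auto intro: cfgs_nth)
  have "op_mult n L (tensor_op W) (loc_op KJ a) x y = (\<Sum>k<n. KJ $$ (k, y ! a) * tensor_op W x (y[a := k]))"
    unfolding op_mult_def using sum_loc_right[OF y a, of KJ "tensor_op W x"] by (simp add: mult.commute)
  also have "\<dots> = (\<Sum>k<n. KJ $$ (k, y ! a) * (W $$ (x ! a, k) * ?R))"
  proof (rule sum.cong[OF refl])
    fix k assume k: "k \<in> {..<n}"
    have "tensor_op W x (y[a := k]) = (\<Prod>l<L. W $$ (x ! l, y[a := k] ! l))"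
      using tensor_op_cfgs[OF x cfgs_upd[OF y]] k by simp
    also have "\<dots> = W $$ (x ! a, y[a := k] ! a) * (\<Prod>l\<in>{..<L} - {a}. W $$ (x ! l, y[a := k] ! l))"
      using a by (subst prod.remove[of _ a]) auto
    also have "\<dots> = W $$ (x ! a, k) * ?R"
      using a cfgs_len[OF y] by (auto simp: nth_list_update intro!: prod.cong)
    finally show "KJ $$ (k, y ! a) * tensor_op W x (y[a := k]) = KJ $$ (k, y ! a) * (W $$ (x ! a, k) * ?R)" by simp
  qed
  also have "\<dots> = (\<Sum>k<n. W $$ (x ! a, k) * KJ $$ (k, y ! a)) * ?R"
    unfolding sum_distrib_right by (rule sum.cong) (simp_all add: algebra_simps)
  also have "\<dots> = (W * KJ) $$ (x ! a, y ! a) * ?R"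
    using mat_mult_entry[OF W KJ xa ya] by simp
  also have "\<dots> = (K * W) $$ (x ! a, y ! a) * ?R" using KW by simp
  also have "\<dots> = (\<Sum>k<n. K $$ (x ! a, k) * W $$ (k, y ! a)) * ?R"
    using mat_mult_entry[OF K W xa ya] by simp
  also have "\<dots> = (\<Sum>k<n. (W $$ (k, y ! a) * ?R) * K $$ (x ! a, k))"
    unfolding sum_distrib_right by (rule sum.cong) (simp_all add: algebra_simps)
  also have "\<dots> = (\<Sum>k<n. tensor_op W (x[a := k]) y * K $$ (x ! a, k))"
  proof (rule sum.cong[OF refl])
    fix k assume k: "k \<in> {..<n}"
    have "tensor_op W (x[a := k]) y = (\<Prod>l<L. W $$ (x[a := k] ! l, y ! l))"
      using tensor_op_cfgs[OF cfgs_upd[OF x] y] k by simp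
    also have "\<dots> = W $$ (x[a := k] ! a, y ! a) * (\<Prod>l\<in>{..<L} - {a}. W $$ (x[a := k] ! l, y ! l))"
      using a by (subst prod.remove[of _ a]) auto
    also have "\<dots> = W $$ (k, y ! a) * ?R"
      using a cfgs_len[OF x] by (auto simp: nth_list_update intro!: prod.cong)
    finally show "W $$ (k, y ! a) * ?R * K $$ (x ! a, k) = tensor_op W (x[a := k]) y * K $$ (x ! a, k)" by simp
  qed
  also have "\<dots> = op_mult n L (loc_op K a) (tensor_op W) x y"
    unfolding op_mult_def using sum_loc_left[OF x a, of "\<lambda>z. tensor_op W z y" K] by (simp add: mult.commute)
  finally show "op_mult n L (tensor_op W) (loc_op KJ a) x y = op_mult n L (loc_op K a) (tensor_op W) x y" .
qed

lemma op_app_mult: "op_app n L (op_mult n L A B) v x = op_app n L A (op_app n L B v) x"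
  unfolding op_app_def op_mult_def
  by (simp add: sum_distrib_left sum_distrib_right mult.assoc) (rule sum.swap)

lemma op_app_cong: "op_eq n L A B \<Longrightarrow> x \<in> cfgs n L \<Longrightarrow> op_app n L A v x = op_app n L B v x"
  unfolding op_app_def op_eq_def by auto

lemma tensor_op_Cons: "tensor_op W (c # x) (d # y) = W $$ (c, d) * tensor_op W x y"
  unfolding tensor_op_def by (simp add: prod.lessThan_Suc_shift del: prod.lessThan_Suc)

lemma tensor_op_append:
  "length a = length b \<Longrightarrow> tensor_op W (a @ x) (b @ y) = tensor_op W a b * tensor_op W x y"
proof (induction a b rule: list_induct2)
  case Nil thus ?case by (simp add: tensor_op_def)
next
  case (Cons c a d b) thus ?case by (simp add: tensor_op_Cons)
qed

lemma ptrace_intertw: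
  assumes W: "W \<in> carrier_mat n n" and V: "V \<in> carrier_mat n n"
    and WV: "W * V = 1\<^sub>m n" and VW: "V * W = 1\<^sub>m n"
    and intertw: "intertw n (m + N) (tensor_op W) A B"
  shows "op_eq n N (op_mult n N (ptrace n m B) (tensor_op W)) (op_mult n N (tensor_op W) (ptrace n m A))"
  unfolding op_eq_def
proof (intro ballI)
  fix x u assume x: "x \<in> cfgs n N" and u: "u \<in> cfgs n N"
  let ?G = "tensor_op W" and ?V = "tensor_op V"
  have GV: "\<And>b a. b \<in> cfgs n m \<Longrightarrow> a \<in> cfgs n m \<Longrightarrow> (\<Sum>c\<in>cfgs n m. ?G b c * ?V c a) = (if b = a then 1 else 0)"
    using op_eqD[OF tensor_op_inverse[OF W V WV]] unfolding op_mult_def op_id_def by blast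
  have VG: "\<And>c b. c \<in> cfgs n m \<Longrightarrow> b \<in> cfgs n m \<Longrightarrow> (\<Sum>a\<in>cfgs n m. ?V c a * ?G a b) = (if c = b then 1 else 0)"
    using op_eqD[OF tensor_op_inverse[OF V W VW]] unfolding op_mult_def op_id_def by blast
  have lenc: "\<And>c. c \<in> cfgs n m \<Longrightarrow> length c = m" by (rule cfgs_len)
  have star: "(\<Sum>b\<in>cfgs n m. \<Sum>y\<in>cfgs n N. B (a @ x) (b @ y) * (?G b c * ?G y u))
     = (\<Sum>b\<in>cfgs n m. \<Sum>y\<in>cfgs n N. (?G a b * ?G x y) * A (b @ y) (c @ u))"
    if a: "a \<in> cfgs n m" and c: "c \<in> cfgs n m" for a c
  proof -
    have "op_mult n (m + N) ?G A (a @ x) (c @ u) = op_mult n (m + N) B ?G (a @ x) (c @ u)"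
      using op_eqD[OF intertw[unfolded intertw_def] append_cfgs[OF a x] append_cfgs[OF c u]] by simp
    thus ?thesis unfolding op_mult_def sum_cfgs_append
      using a c x u by (simp add: tensor_op_append lenc cfgs_len)
  qed
  have "op_mult n N (ptrace n m B) ?G x u = (\<Sum>y\<in>cfgs n N. \<Sum>a\<in>cfgs n m. B (a @ x) (a @ y) * ?G y u)"
    unfolding op_mult_def ptrace_def by (simp add: sum_distrib_right)
  also have "\<dots> = (\<Sum>a\<in>cfgs n m. \<Sum>b\<in>cfgs n m. \<Sum>y\<in>cfgs n N.
        B (a @ x) (b @ y) * ?G y u * (if b = a then 1 else 0))"
  proof (subst sum.swap, rule sum.cong[OF refl])
    fix a assume a: "a \<in> cfgs n m"
    have "(\<Sum>b\<in>cfgs n m. \<Sum>y\<in>cfgs n N. B (a @ x) (b @ y) * ?G y u * (if b = a then 1 else 0))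
       = (\<Sum>b\<in>cfgs n m. if b = a then (\<Sum>y\<in>cfgs n N. B (a @ x) (a @ y) * ?G y u) else 0)"
      by (rule sum.cong) auto
    thus "(\<Sum>y\<in>cfgs n N. B (a @ x) (a @ y) * ?G y u) = (\<Sum>b\<in>cfgs n m. \<Sum>y\<in>cfgs n N. B (a @ x) (b @ y) * ?G y u * (if b = a then 1 else 0))"
      using a by simp
  qed
  also have "\<dots> = (\<Sum>a\<in>cfgs n m. \<Sum>b\<in>cfgs n m. \<Sum>y\<in>cfgs n N.
        B (a @ x) (b @ y) * ?G y u * (\<Sum>c\<in>cfgs n m. ?G b c * ?V c a))"
    by (intro sum.cong refl) (simp add: GV)
  also have "\<dots> = (\<Sum>a\<in>cfgs n m. \<Sum>c\<in>cfgs n m. ?V c a *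
        (\<Sum>b\<in>cfgs n m. \<Sum>y\<in>cfgs n N. B (a @ x) (b @ y) * (?G b c * ?G y u)))"
  proof (rule sum.cong[OF refl])
    fix a
    show "(\<Sum>b\<in>cfgs n m. \<Sum>y\<in>cfgs n N. B (a @ x) (b @ y) * ?G y u * (\<Sum>c\<in>cfgs n m. ?G b c * ?V c a))
      = (\<Sum>c\<in>cfgs n m. ?V c a * (\<Sum>b\<in>cfgs n m. \<Sum>y\<in>cfgs n N. B (a @ x) (b @ y) * (?G b c * ?G y u)))"
      by (simp add: sum_distrib_left sum_distrib_right algebra_simps)
         (subst sum.swap, rule sum.cong[OF refl], subst sum.swap, simp)
  qed
  also have "\<dots> = (\<Sum>a\<in>cfgs n m. \<Sum>c\<in>cfgs n m. ?V c a *
        (\<Sum>b\<in>cfgs n m. \<Sum>y\<in>cfgs n N. (?G a b * ?G x y) * A (b @ y) (c @ u)))"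
    by (intro sum.cong refl) (simp add: star)
  also have "\<dots> = (\<Sum>c\<in>cfgs n m. \<Sum>b\<in>cfgs n m. \<Sum>y\<in>cfgs n N.
        (\<Sum>a\<in>cfgs n m. ?V c a * ?G a b) * (?G x y * A (b @ y) (c @ u)))"
    by (subst sum.swap) (simp add: sum_distrib_left sum_distrib_right algebra_simps,
        rule sum.cong[OF refl], subst sum.swap, rule sum.cong[OF refl], subst sum.swap, simp)
  also have "\<dots> = (\<Sum>c\<in>cfgs n m. \<Sum>b\<in>cfgs n m. \<Sum>y\<in>cfgs n N.
        (if c = b then 1 else 0) * (?G x y * A (b @ y) (c @ u)))"
    by (intro sum.cong refl) (simp add: VG)
  also have "\<dots> = (\<Sum>c\<in>cfgs n m. \<Sum>y\<in>cfgs n N. ?G x y * A (c @ y) (c @ u))"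
  proof (rule sum.cong[OF refl])
    fix c assume c: "c \<in> cfgs n m"
    have "(\<Sum>b\<in>cfgs n m. \<Sum>y\<in>cfgs n N. (if c = b then 1 else 0) * (?G x y * A (b @ y) (c @ u)))
       = (\<Sum>b\<in>cfgs n m. if b = c then (\<Sum>y\<in>cfgs n N. ?G x y * A (c @ y) (c @ u)) else 0)"
      by (rule sum.cong) auto
    thus "(\<Sum>b\<in>cfgs n m. \<Sum>y\<in>cfgs n N. (if c = b then 1 else 0) * (?G x y * A (b @ y) (c @ u)))
       = (\<Sum>y\<in>cfgs n N. ?G x y * A (c @ y) (c @ u))" using c by simp
  qed
  also have "\<dots> = op_mult n N ?G (ptrace n m A) x u"
    unfolding op_mult_def ptrace_def by (simp add: sum_distrib_left) (rule sum.swap)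
  finally show "op_mult n N (ptrace n m B) ?G x u = op_mult n N ?G (ptrace n m A) x u" .
qed

lemma list_all2_map_same: "(\<And>j. j \<in> set js \<Longrightarrow> P (f j) (g j)) \<Longrightarrow> list_all2 P (map f js) (map g js)"
  by (induction js) auto

lemma Tm_tensor_conj:
  assumes W: "W \<in> carrier_mat n n" and V: "V \<in> carrier_mat n n"
    and WV: "W * V = 1\<^sub>m n" and VW: "V * W = 1\<^sub>m n"
    and K: "K \<in> carrier_mat n n" and KJ: "KJ \<in> carrier_mat n n" and KW: "K * W = W * KJ"
    and x: "x \<in> cfgs n N"
  shows "op_app n N (Tm n K \<eta> \<xi> N m lam) (op_app n N (tensor_op W) v) x
       = op_app n N (tensor_op W) (op_app n N (Tm n KJ \<eta> \<xi> N m lam) v) x"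
proof -
  let ?L = "m + N"
  have mon: "intertw n ?L (tensor_op W) (Mon n KJ \<eta> \<xi> N m j mu) (Mon n K \<eta> \<xi> N m j mu)" if j: "j < m" for j mu
  proof -
    have l1: "intertw n ?L (tensor_op W) (loc_op KJ j) (loc_op K j)"
      by (rule tensor_loc_intertw[OF W K KJ KW]) (use j in simp)
    have l2: "list_all2 (intertw n ?L (tensor_op W))
       (map (\<lambda>l. Rop \<eta> j (m + l - 1) (mu - \<xi> l)) (rev [1..<N + 1]))
       (map (\<lambda>l. Rop \<eta> j (m + l - 1) (mu - \<xi> l)) (rev [1..<N + 1]))"
      by (rule list_all2_map_same, rule tensor_Rop_intertw) (use j in auto)
    show ?thesis unfolding Mon_def
      by (rule intertw_prod, rule list_all2_Cons[THEN iffD2], rule conjI[OF l1 l2])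
  qed
  have intertw: "intertw n ?L (tensor_op W)
      (op_prod n ?L (antisym m # map (\<lambda>j. Mon n KJ \<eta> \<xi> N m j (lam - of_nat j * \<eta>)) [0..<m]))
      (op_prod n ?L (antisym m # map (\<lambda>j. Mon n K \<eta> \<xi> N m j (lam - of_nat j * \<eta>)) [0..<m]))"
    by (rule intertw_prod, rule list_all2_Cons[THEN iffD2], intro conjI tensor_antisym_intertw list_all2_map_same mon) auto
  have "op_app n N (Tm n K \<eta> \<xi> N m lam) (op_app n N (tensor_op W) v) x
      = op_app n N (op_mult n N (Tm n K \<eta> \<xi> N m lam) (tensor_op W)) v x"
    by (simp add: op_app_mult)
  also have "\<dots> = op_app n N (op_mult n N (tensor_op W) (Tm n KJ \<eta> \<xi> N m lam)) v x"
    unfolding Tm_def by (rule op_app_cong[OF ptrace_intertw[OF W V WV VW intertw] x])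
  also have "\<dots> = op_app n N (tensor_op W) (op_app n N (Tm n KJ \<eta> \<xi> N m lam) v) x"
    by (simp add: op_app_mult)
  finally show ?thesis .
qed

section \<open>Weight of a configuration\<close>

lemma sum_list_permute_list:
  fixes y :: "'a::comm_monoid_add list"
  assumes "\<pi> permutes {..<length y}"
  shows "sum_list (permute_list \<pi> y) = sum_list y"
proof -
  have "mset (permute_list \<pi> y) = mset y" using assms by (rule mset_permute_list)
  hence "sum_mset (mset (permute_list \<pi> y)) = sum_mset (mset y)" by simp
  thus ?thesis by (simp only: sum_mset_sum_list)
qed

lemma sum_list_remove_nth: "a < length x \<Longrightarrow> sum_list x = x ! a + (\<Sum>i\<in>{..<length x} - {a}. x ! i)"
  unfolding sum_list_sum_nth atLeast0LessThan by (subst sum.remove[of _ a]) auto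

lemma sum_list_eq_0_cfgs: "x \<in> cfgs n N \<Longrightarrow> sum_list x = 0 \<Longrightarrow> x = replicate N 0"
  unfolding cfgs_def by (auto intro: replicate_eqI)

definition weight_nonincr :: "nat \<Rightarrow> nat \<Rightarrow> op \<Rightarrow> bool" where
  "weight_nonincr n L A \<longleftrightarrow> (\<forall>x\<in>cfgs n L. \<forall>y\<in>cfgs n L. A x y \<noteq> 0 \<longrightarrow> sum_list x \<le> sum_list y)"

definition weight_pres :: "nat \<Rightarrow> nat \<Rightarrow> op \<Rightarrow> bool" where
  "weight_pres n L A \<longleftrightarrow> (\<forall>x\<in>cfgs n L. \<forall>y\<in>cfgs n L. A x y \<noteq> 0 \<longrightarrow> sum_list x = sum_list y)"

definition weight_diag :: "op \<Rightarrow> op" where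
  "weight_diag A = (\<lambda>x y. if sum_list x = sum_list y then A x y else 0)"

lemma weight_pres_nonincr: "weight_pres n L A \<Longrightarrow> weight_nonincr n L A"
  unfolding weight_pres_def weight_nonincr_def by auto

lemma weight_pres_diag: "weight_pres n L A \<Longrightarrow> op_eq n L (weight_diag A) A"
  unfolding weight_pres_def op_eq_def weight_diag_def by auto

lemma sum_nonzero: "(\<Sum>z\<in>S. f z) \<noteq> (0::complex) \<Longrightarrow> \<exists>z\<in>S. f z \<noteq> 0"
  by (meson sum.neutral)

lemma weight_nonincr_mult: "weight_nonincr n L A \<Longrightarrow> weight_nonincr n L B \<Longrightarrow> weight_nonincr n L (op_mult n L A B)"
  unfolding weight_nonincr_def op_mult_def
  by (auto dest!: sum_nonzero) (meson le_trans mult_not_zero)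

lemma weight_nonincr_id: "weight_nonincr n L op_id" unfolding weight_nonincr_def op_id_def by auto

lemma weight_nonincr_prod: "(\<And>A. A \<in> set As \<Longrightarrow> weight_nonincr n L A) \<Longrightarrow> weight_nonincr n L (op_prod n L As)"
  by (induction As) (auto intro: weight_nonincr_mult weight_nonincr_id)

lemma weight_diag_mult:
  assumes A: "weight_nonincr n L A" and B: "weight_nonincr n L B"
  shows "op_eq n L (weight_diag (op_mult n L A B)) (op_mult n L (weight_diag A) (weight_diag B))"
  unfolding op_eq_def
proof (intro ballI)
  fix x y assume x: "x \<in> cfgs n L" and y: "y \<in> cfgs n L"
  show "weight_diag (op_mult n L A B) x y = op_mult n L (weight_diag A) (weight_diag B) x y"
  proof (cases "sum_list x = sum_list y")
    case True
    have "A x z * B z y = weight_diag A x z * weight_diag B z y" if z: "z \<in> cfgs n L" for z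
    proof (cases "A x z = 0 \<or> B z y = 0")
      case False
      hence "sum_list x \<le> sum_list z" "sum_list z \<le> sum_list y" using A B x y z unfolding weight_nonincr_def by auto
      thus ?thesis using True by (auto simp: weight_diag_def)
    qed (auto simp: weight_diag_def)
    thus ?thesis using True unfolding op_mult_def weight_diag_def by (auto intro: sum.cong)
  next
    case False
    have "weight_diag A x z * weight_diag B z y = 0" if z: "z \<in> cfgs n L" for z
      using False by (auto simp: weight_diag_def)
    thus ?thesis using False unfolding op_mult_def by (auto simp: weight_diag_def intro!: sum.neutral)
  qed
qed


lemma weight_diag_id: "op_eq n L (weight_diag op_id) op_id" unfolding op_eq_def weight_diag_def op_id_def by auto

lemma weight_diag_prod: "(\<And>A. A \<in> set As \<Longrightarrow> weight_nonincr n L A) \<Longrightarrow> op_eq n L (weight_diag (op_prod n L As)) (op_prod n L (map weight_diag As))"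
proof (induction As)
  case Nil thus ?case by (simp add: weight_diag_id)
next
  case (Cons A As)
  have "op_eq n L (weight_diag (op_prod n L (A # As))) (op_mult n L (weight_diag A) (weight_diag (op_prod n L As)))"
    using weight_diag_mult[of n L A "op_prod n L As"] Cons.prems weight_nonincr_prod[of As n L] by simp
  also have "op_eq n L \<dots> (op_mult n L (weight_diag A) (op_prod n L (map weight_diag As)))"
    by (rule op_mult_cong_r, rule Cons.IH) (use Cons.prems in auto)
  finally show ?case by simp
qed

lemma weight_pres_perm: "\<pi> permutes {..<L} \<Longrightarrow> weight_pres n L (perm_op \<pi>)"
  unfolding weight_pres_def perm_op_permute_list by (auto simp: sum_list_permute_list cfgs_len split: if_splits)

lemma weight_pres_id: "weight_pres n L op_id" unfolding weight_pres_def op_id_def by auto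

lemma weight_pres_lin: "weight_pres n L A \<Longrightarrow> weight_pres n L B \<Longrightarrow> weight_pres n L (\<lambda>x y. c * A x y + d * B x y)"
  unfolding weight_pres_def by (metis add.right_neutral mult_zero_right)

lemma weight_pres_sum: "(\<And>i. i \<in> I \<Longrightarrow> weight_pres n L (A i)) \<Longrightarrow> weight_pres n L (\<lambda>x y. c * (\<Sum>i\<in>I. f i * A i x y))"
  unfolding weight_pres_def by (auto dest!: sum_nonzero)

lemma weight_pres_antisym: "m \<le> L \<Longrightarrow> weight_pres n L (antisym m)"
  unfolding antisym_def by (rule weight_pres_sum, rule weight_pres_perm) (auto intro: permutes_mono)

lemma weight_pres_Rop: "a < L \<Longrightarrow> b < L \<Longrightarrow> weight_pres n L (Rop \<eta> a b \<mu>)"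
  unfolding Rop_def swap_op_def by (rule weight_pres_lin[OF weight_pres_id weight_pres_perm]) (auto intro: permutes_swap_id)

definition diag_op :: "(nat list \<Rightarrow> complex) \<Rightarrow> op" where
  "diag_op f x y = (if x = y then f x else 0)"

lemma loc_op_upper_weight:
  assumes ut: "\<And>i j. i < n \<Longrightarrow> j < n \<Longrightarrow> j < i \<Longrightarrow> KJ $$ (i, j) = 0" and a: "a < L"
  shows "weight_nonincr n L (loc_op KJ a)" "op_eq n L (weight_diag (loc_op KJ a)) (diag_op (\<lambda>x. KJ $$ (x ! a, x ! a)))"
proof -
  have key: "loc_op KJ a x y \<noteq> 0 \<Longrightarrow> sum_list x \<le> sum_list y \<and> (sum_list x = sum_list y \<longrightarrow> x = y)"
    if x: "x \<in> cfgs n L" and y: "y \<in> cfgs n L" for x y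
  proof -
    assume ne: "loc_op KJ a x y \<noteq> 0"
    have lx: "length x = L" and ly: "length y = L" using x y by (auto simp: cfgs_len)
    have agree: "\<And>i. i < L \<Longrightarrow> i \<noteq> a \<Longrightarrow> x ! i = y ! i" and kne: "KJ $$ (x ! a, y ! a) \<noteq> 0"
      using ne lx ly unfolding loc_op_def by (auto split: if_splits)
    have le: "x ! a \<le> y ! a" using kne ut[of "x ! a" "y ! a"] cfgs_nth[OF x a] cfgs_nth[OF y a] by force
    have rest: "(\<Sum>i\<in>{..<L} - {a}. x ! i) = (\<Sum>i\<in>{..<L} - {a}. y ! i)"
      by (rule sum.cong) (auto simp: agree)
    have wx: "sum_list x = x ! a + (\<Sum>i\<in>{..<L} - {a}. x ! i)" using sum_list_remove_nth[of a x] a lx by simp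
    have wy: "sum_list y = y ! a + (\<Sum>i\<in>{..<L} - {a}. y ! i)" using sum_list_remove_nth[of a y] a ly by simp
    have "sum_list x = sum_list y \<longrightarrow> x = y"
    proof
      assume "sum_list x = sum_list y"
      hence "x ! a = y ! a" using wx wy rest by simp
      thus "x = y" using agree lx ly by (metis nth_equalityI)
    qed
    thus ?thesis using wx wy rest le by simp
  qed
  show "weight_nonincr n L (loc_op KJ a)" unfolding weight_nonincr_def using key by blast
  show "op_eq n L (weight_diag (loc_op KJ a)) (diag_op (\<lambda>x. KJ $$ (x ! a, x ! a)))"
    unfolding op_eq_def
  proof (intro ballI)
    fix x y assume x: "x \<in> cfgs n L" and y: "y \<in> cfgs n L"
    show "weight_diag (loc_op KJ a) x y = diag_op (\<lambda>x. KJ $$ (x ! a, x ! a)) x y"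
    proof (cases "x = y")
      case True thus ?thesis using x by (simp add: weight_diag_def diag_op_def loc_op_def)
    next
      case False thus ?thesis using key[OF x y] by (auto simp: weight_diag_def diag_op_def)
    qed
  qed
qed

definition Mon_diag :: "nat \<Rightarrow> (nat \<Rightarrow> complex) \<Rightarrow> complex \<Rightarrow> (nat \<Rightarrow> complex) \<Rightarrow> nat \<Rightarrow> nat \<Rightarrow> nat \<Rightarrow> complex \<Rightarrow> op" where
  "Mon_diag n d \<eta> \<xi> N m a lam = op_prod n (m + N)
     (diag_op (\<lambda>x. d (x ! a)) # map (\<lambda>l. Rop \<eta> a (m + l - 1) (lam - \<xi> l)) (rev [1..<N+1]))"

definition fused_diag :: "nat \<Rightarrow> (nat \<Rightarrow> complex) \<Rightarrow> complex \<Rightarrow> (nat \<Rightarrow> complex) \<Rightarrow> nat \<Rightarrow> nat \<Rightarrow> complex \<Rightarrow> op" where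
  "fused_diag n d \<eta> \<xi> N m lam = op_prod n (m + N)
     (antisym m # map (\<lambda>j. Mon_diag n d \<eta> \<xi> N m j (lam - of_nat j * \<eta>)) [0..<m])"

lemma op_prod_cong: "list_all2 (op_eq n L) As Bs \<Longrightarrow> op_eq n L (op_prod n L As) (op_prod n L Bs)"
  by (induction As Bs rule: list_all2_induct) (auto intro: op_mult_cong)

lemma vac_cfgs: "y \<in> cfgs n N \<Longrightarrow> vac y = (if y = replicate N 0 then 1 else 0)"
proof -
  assume y: "y \<in> cfgs n N"
  have "set y \<subseteq> {0} \<longleftrightarrow> y = replicate N 0"
  proof
    assume "set y \<subseteq> {0}" thus "y = replicate N 0" using cfgs_len[OF y] by (auto intro: replicate_eqI)
  next
    assume "y = replicate N 0" thus "set y \<subseteq> {0}" by (simp add: set_replicate_conv_if)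
  qed
  thus ?thesis unfolding vac_def by simp
qed

lemma zeros_cfgs: "0 < n \<Longrightarrow> replicate N 0 \<in> cfgs n N" unfolding cfgs_def by auto

lemma Mon_upper_weight:
  assumes ut: "\<And>i j. i < n \<Longrightarrow> j < n \<Longrightarrow> j < i \<Longrightarrow> KJ $$ (i, j) = 0"
    and d: "\<And>i. d i = KJ $$ (i, i)" and j: "j < m"
  shows "weight_nonincr n (m + N) (Mon n KJ \<eta> \<xi> N m j \<mu>)"
    and "op_eq n (m + N) (weight_diag (Mon n KJ \<eta> \<xi> N m j \<mu>)) (Mon_diag n d \<eta> \<xi> N m j \<mu>)"
proof -
  let ?ls = "loc_op KJ j # map (\<lambda>l. Rop \<eta> j (m + l - 1) (\<mu> - \<xi> l)) (rev [1..<N+1])"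
  have nn: "\<And>A. A \<in> set ?ls \<Longrightarrow> weight_nonincr n (m + N) A"
    using loc_op_upper_weight(1)[OF ut, where a=j and L="m + N"] j weight_pres_nonincr[OF weight_pres_Rop] by auto
  show "weight_nonincr n (m + N) (Mon n KJ \<eta> \<xi> N m j \<mu>)" unfolding Mon_def by (rule weight_nonincr_prod[OF nn])
  have "op_eq n (m + N) (weight_diag (Mon n KJ \<eta> \<xi> N m j \<mu>)) (op_prod n (m + N) (map weight_diag ?ls))"
    unfolding Mon_def by (rule weight_diag_prod[OF nn])
  also have "op_eq n (m + N) (op_prod n (m + N) (map weight_diag ?ls)) (Mon_diag n d \<eta> \<xi> N m j \<mu>)"
  proof -
    have l1: "op_eq n (m + N) (weight_diag (loc_op KJ j)) (diag_op (\<lambda>x. d (x ! j)))"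
      using loc_op_upper_weight(2)[OF ut, where a=j and L="m + N"] j d by simp
    have l2: "list_all2 (op_eq n (m + N)) (map weight_diag (map (\<lambda>l. Rop \<eta> j (m + l - 1) (\<mu> - \<xi> l)) (rev [1..<N+1])))
        (map (\<lambda>l. Rop \<eta> j (m + l - 1) (\<mu> - \<xi> l)) (rev [1..<N+1]))"
      unfolding map_map o_def
      by (rule list_all2_map_same, rule weight_pres_diag, rule weight_pres_Rop) (use j in auto)
    show ?thesis unfolding Mon_diag_def list.map(2)
      by (rule op_prod_cong, rule list_all2_Cons[THEN iffD2], rule conjI[OF l1 l2])
  qed
  finally show "op_eq n (m + N) (weight_diag (Mon n KJ \<eta> \<xi> N m j \<mu>)) (Mon_diag n d \<eta> \<xi> N m j \<mu>)" .
qed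

lemma Tm_body_upper_weight:
  assumes ut: "\<And>i j. i < n \<Longrightarrow> j < n \<Longrightarrow> j < i \<Longrightarrow> KJ $$ (i, j) = 0"
    and d: "\<And>i. d i = KJ $$ (i, i)"
  shows "weight_nonincr n (m + N) (op_prod n (m + N) (antisym m # map (\<lambda>j. Mon n KJ \<eta> \<xi> N m j (lam - of_nat j * \<eta>)) [0..<m]))"
    and "op_eq n (m + N) (weight_diag (op_prod n (m + N) (antisym m # map (\<lambda>j. Mon n KJ \<eta> \<xi> N m j (lam - of_nat j * \<eta>)) [0..<m])))
           (fused_diag n d \<eta> \<xi> N m lam)"
proof -
  let ?ls = "antisym m # map (\<lambda>j. Mon n KJ \<eta> \<xi> N m j (lam - of_nat j * \<eta>)) [0..<m]"
  let ?A = "op_prod n (m + N) ?ls"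
  have nn: "\<And>A. A \<in> set ?ls \<Longrightarrow> weight_nonincr n (m + N) A"
    using Mon_upper_weight(1)[OF ut d] weight_pres_nonincr[OF weight_pres_antisym, of m "m + N"] by auto
  show "weight_nonincr n (m + N) ?A"
    by (rule weight_nonincr_prod[OF nn])
  have "op_eq n (m + N) (weight_diag ?A) (op_prod n (m + N) (map weight_diag ?ls))"
    by (rule weight_diag_prod[OF nn])
  also have "op_eq n (m + N) (op_prod n (m + N) (map weight_diag ?ls)) (fused_diag n d \<eta> \<xi> N m lam)"
    unfolding fused_diag_def
    by (rule op_prod_cong, simp, intro conjI weight_pres_diag weight_pres_antisym list_all2_map_same)
       (auto intro: Mon_upper_weight(2)[OF ut d])
  finally show "op_eq n (m + N) (weight_diag ?A) (fused_diag n d \<eta> \<xi> N m lam)" .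
qed

lemma Tm_vac_weight_diag:
  assumes ut: "\<And>i j. i < n \<Longrightarrow> j < n \<Longrightarrow> j < i \<Longrightarrow> KJ $$ (i, j) = 0"
    and d: "\<And>i. d i = KJ $$ (i, i)" and n: "0 < n" and x: "x \<in> cfgs n N"
  shows "op_app n N (Tm n KJ \<eta> \<xi> N m lam) vac x
       = (\<Sum>a\<in>cfgs n m. fused_diag n d \<eta> \<xi> N m lam (a @ replicate N 0) (a @ replicate N 0)) * vac x"
proof -
  let ?L = "m + N"
  let ?A = "op_prod n ?L (antisym m # map (\<lambda>j. Mon n KJ \<eta> \<xi> N m j (lam - of_nat j * \<eta>)) [0..<m])"
  let ?z = "replicate N (0::nat)"
  have An: "weight_nonincr n ?L ?A" and Ad: "op_eq n ?L (weight_diag ?A) (fused_diag n d \<eta> \<xi> N m lam)"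
    using Tm_body_upper_weight[OF ut d] by auto
  have "op_app n N (Tm n KJ \<eta> \<xi> N m lam) vac x = (\<Sum>y\<in>cfgs n N. (\<Sum>a\<in>cfgs n m. ?A (a @ x) (a @ y)) * (if y = ?z then 1 else 0))"
    unfolding op_app_def Tm_def ptrace_def by (rule sum.cong) (auto simp: vac_cfgs)
  also have "\<dots> = (\<Sum>a\<in>cfgs n m. ?A (a @ x) (a @ ?z))"
    using zeros_cfgs[OF n, of N] by (simp add: if_distrib cong: if_cong)
  also have "\<dots> = (\<Sum>a\<in>cfgs n m. fused_diag n d \<eta> \<xi> N m lam (a @ ?z) (a @ ?z)) * vac x"
  proof (cases "x = ?z")
    case True
    have "?A (a @ ?z) (a @ ?z) = fused_diag n d \<eta> \<xi> N m lam (a @ ?z) (a @ ?z)" if a: "a \<in> cfgs n m" for a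
    proof -
      have c: "a @ ?z \<in> cfgs n ?L" by (rule append_cfgs[OF a zeros_cfgs[OF n]])
      have "?A (a @ ?z) (a @ ?z) = weight_diag ?A (a @ ?z) (a @ ?z)" by (simp add: weight_diag_def)
      also have "\<dots> = fused_diag n d \<eta> \<xi> N m lam (a @ ?z) (a @ ?z)" by (rule op_eqD[OF Ad c c])
      finally show ?thesis .
    qed
    thus ?thesis using True x by (simp add: vac_cfgs)
  next
    case False
    have wx: "sum_list x \<noteq> 0" using sum_list_eq_0_cfgs[OF x] False by blast
    have "?A (a @ x) (a @ ?z) = 0" if a: "a \<in> cfgs n m" for a
    proof (rule ccontr)
      assume "?A (a @ x) (a @ ?z) \<noteq> 0"
      hence "sum_list (a @ x) \<le> sum_list (a @ ?z)"
        using An append_cfgs[OF a x] append_cfgs[OF a zeros_cfgs[OF n]] unfolding weight_nonincr_def by blast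
      moreover have "sum_list ?z = 0" by simp
      ultimately show False using wx by simp
    qed
    thus ?thesis using False x by (simp add: vac_cfgs)
  qed
  finally show ?thesis .
qed

definition op_comm :: "nat \<Rightarrow> nat \<Rightarrow> op \<Rightarrow> op \<Rightarrow> bool" where
  "op_comm n L A B \<longleftrightarrow> op_eq n L (op_mult n L A B) (op_mult n L B A)"

lemma op_comm_sym: "op_comm n L A B \<Longrightarrow> op_comm n L B A" unfolding op_comm_def by (rule op_eq_sym)

lemma op_comm_id: "op_comm n L A op_id"
  unfolding op_comm_def op_eq_def by (simp add: op_id_left op_id_right)

lemma op_comm_mult_right:
  assumes "op_comm n L A B" "op_comm n L A C"
  shows "op_comm n L A (op_mult n L B C)"
  unfolding op_comm_def
proof -
  have "op_mult n L A (op_mult n L B C) = op_mult n L (op_mult n L A B) C" by (simp add: op_mult_assoc)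
  also have "op_eq n L \<dots> (op_mult n L (op_mult n L B A) C)"
    by (rule op_mult_cong_l) (use assms(1) in \<open>simp add: op_comm_def\<close>)
  also have "op_mult n L (op_mult n L B A) C = op_mult n L B (op_mult n L A C)" by (simp add: op_mult_assoc)
  also have "op_eq n L \<dots> (op_mult n L B (op_mult n L C A))"
    by (rule op_mult_cong_r) (use assms(2) in \<open>simp add: op_comm_def\<close>)
  also have "op_mult n L B (op_mult n L C A) = op_mult n L (op_mult n L B C) A" by (simp add: op_mult_assoc)
  finally show "op_eq n L (op_mult n L A (op_mult n L B C)) (op_mult n L (op_mult n L B C) A)" .
qed

lemma op_comm_prod_right: "(\<And>B. B \<in> set Bs \<Longrightarrow> op_comm n L A B) \<Longrightarrow> op_comm n L A (op_prod n L Bs)"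
  by (induction Bs) (auto intro: op_comm_mult_right op_comm_id)

lemma op_comm_prod_left: "(\<And>B. B \<in> set Bs \<Longrightarrow> op_comm n L B A) \<Longrightarrow> op_comm n L (op_prod n L Bs) A"
  by (rule op_comm_sym, rule op_comm_prod_right) (auto intro: op_comm_sym)

lemma op_prod_ids: "op_eq n L (op_prod n L (map (\<lambda>l. op_id) ls)) op_id"
proof (induction ls)
  case (Cons l ls)
  have "op_eq n L (op_mult n L op_id (op_prod n L (map (\<lambda>l. op_id) ls))) (op_prod n L (map (\<lambda>l. op_id) ls))"
    by (rule op_eq_id_left)
  thus ?case using Cons op_eq_trans by simp
qed simp

lemma op_prod_zip:
  assumes "distinct ls" "\<And>l l'. l \<in> set ls \<Longrightarrow> l' \<in> set ls \<Longrightarrow> l \<noteq> l' \<Longrightarrow> op_comm n L (Q l') (P l)"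
  shows "op_eq n L (op_mult n L (op_prod n L (map P ls)) (op_prod n L (map Q ls)))
                 (op_prod n L (map (\<lambda>l. op_mult n L (P l) (Q l)) ls))"
  using assms
proof (induction ls)
  case Nil thus ?case by (simp add: op_eq_id_left)
next
  case (Cons l0 ls)
  let ?P = "op_prod n L (map P ls)" and ?Q = "op_prod n L (map Q ls)"
  have c: "op_comm n L (Q l0) ?P"
    by (rule op_comm_prod_right) (use Cons.prems in auto)
  have "op_mult n L (op_prod n L (map P (l0 # ls))) (op_prod n L (map Q (l0 # ls)))
      = op_mult n L (P l0) (op_mult n L (op_mult n L ?P (Q l0)) ?Q)" by (simp add: op_mult_assoc)
  also have "op_eq n L \<dots> (op_mult n L (P l0) (op_mult n L (op_mult n L (Q l0) ?P) ?Q))"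
    by (intro op_mult_cong_r op_mult_cong_l) (use c in \<open>simp add: op_comm_def op_eq_sym\<close>)
  also have "\<dots> = op_mult n L (op_mult n L (P l0) (Q l0)) (op_mult n L ?P ?Q)" by (simp add: op_mult_assoc)
  also have "op_eq n L \<dots> (op_mult n L (op_mult n L (P l0) (Q l0)) (op_prod n L (map (\<lambda>l. op_mult n L (P l) (Q l)) ls)))"
    by (rule op_mult_cong_r, rule Cons.IH) (use Cons.prems in auto)
  finally show ?case by simp
qed

lemma op_prod_interchange:
  assumes dj: "distinct js" and dl: "distinct ls"
    and cC: "\<And>j j' l. j \<in> set js \<Longrightarrow> j' \<in> set js \<Longrightarrow> l \<in> set ls \<Longrightarrow> j \<noteq> j' \<Longrightarrow> op_comm n L (C j) (A j' l)"
    and cA: "\<And>j j' l l'. j \<in> set js \<Longrightarrow> j' \<in> set js \<Longrightarrow> l \<in> set ls \<Longrightarrow> l' \<in> set ls \<Longrightarrow> j \<noteq> j' \<Longrightarrow> l \<noteq> l'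
              \<Longrightarrow> op_comm n L (A j l) (A j' l')"
  shows "op_eq n L (op_prod n L (map (\<lambda>j. op_prod n L (C j # map (A j) ls)) js))
     (op_mult n L (op_prod n L (map C js)) (op_prod n L (map (\<lambda>l. op_prod n L (map (\<lambda>j. A j l) js)) ls)))"
  using dj cC cA
proof (induction js)
  case Nil
  have "op_eq n L op_id (op_mult n L op_id (op_prod n L (map (\<lambda>l. op_id) ls)))"
    using op_eq_trans[OF op_eq_id_left op_prod_ids] by (rule op_eq_sym)
  thus ?case by simp
next
  case (Cons j js)
  let ?Cs = "op_prod n L (map C js)"
  let ?Aj = "op_prod n L (map (A j) ls)"
  let ?B = "\<lambda>l. op_prod n L (map (\<lambda>j. A j l) js)"
  have IH: "op_eq n L (op_prod n L (map (\<lambda>j. op_prod n L (C j # map (A j) ls)) js))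
     (op_mult n L ?Cs (op_prod n L (map ?B ls)))"
    by (rule Cons.IH) (use Cons.prems in \<open>auto intro: Cons.prems(2,3)\<close>)
  have c1: "op_comm n L ?Aj ?Cs"
    by (rule op_comm_prod_left, rule op_comm_prod_right)
       (use Cons.prems in \<open>auto intro!: op_comm_sym[OF Cons.prems(2)]\<close>)
  have "op_prod n L (map (\<lambda>j. op_prod n L (C j # map (A j) ls)) (j # js))
      = op_mult n L (op_mult n L (C j) ?Aj) (op_prod n L (map (\<lambda>j. op_prod n L (C j # map (A j) ls)) js))"
    by simp
  also have "op_eq n L \<dots> (op_mult n L (op_mult n L (C j) ?Aj) (op_mult n L ?Cs (op_prod n L (map ?B ls))))"
    by (rule op_mult_cong_r[OF IH])
  also have "\<dots> = op_mult n L (C j) (op_mult n L (op_mult n L ?Aj ?Cs) (op_prod n L (map ?B ls)))"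
    by (simp add: op_mult_assoc)
  also have "op_eq n L \<dots> (op_mult n L (C j) (op_mult n L (op_mult n L ?Cs ?Aj) (op_prod n L (map ?B ls))))"
    by (intro op_mult_cong_r op_mult_cong_l) (use c1 in \<open>simp add: op_comm_def\<close>)
  also have "\<dots> = op_mult n L (op_mult n L (C j) ?Cs) (op_mult n L ?Aj (op_prod n L (map ?B ls)))"
    by (simp add: op_mult_assoc)
  also have "op_eq n L \<dots> (op_mult n L (op_mult n L (C j) ?Cs) (op_prod n L (map (\<lambda>l. op_mult n L (A j l) (?B l)) ls)))"
  proof (rule op_mult_cong_r, rule op_prod_zip[OF dl])
    fix l l' assume l: "l \<in> set ls" and l': "l' \<in> set ls" and ne: "l \<noteq> l'"
    show "op_comm n L (?B l') (A j l)"
      by (rule op_comm_prod_left) (use Cons.prems l l' ne in \<open>auto intro!: Cons.prems(3)\<close>)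
  qed
  finally show ?case by simp
qed

lemma op_comm_lin_right:
  assumes "op_comm n L A B" "op_comm n L A C"
  shows "op_comm n L A (\<lambda>x y. c * B x y + d * C x y)"
  using assms unfolding op_comm_def op_eq_def
  by (simp add: op_mult_add_left op_mult_add_right op_mult_smult_left op_mult_smult_right)

lemma op_comm_lin_left:
  assumes "op_comm n L B A" "op_comm n L C A"
  shows "op_comm n L (\<lambda>x y. c * B x y + d * C x y) A"
  by (rule op_comm_sym, rule op_comm_lin_right) (use assms in \<open>auto intro: op_comm_sym\<close>)

lemma op_comm_perm_perm:
  assumes "\<sigma> permutes {..<L}" "\<pi> permutes {..<L}" "\<pi> o \<sigma> = \<sigma> o \<pi>"
  shows "op_comm n L (perm_op \<sigma>) (perm_op \<pi>)"
  unfolding op_comm_def using perm_mult[OF assms(1,2)] perm_mult[OF assms(2,1)] assms(3)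
  by (metis op_eq_sym op_eq_trans)

lemma op_comm_diag_perm:
  assumes p: "\<pi> permutes {..<L}" and f: "\<And>x. x \<in> cfgs n L \<Longrightarrow> f (permute_list \<pi> x) = f x"
  shows "op_comm n L (diag_op f) (perm_op \<pi>)"
  unfolding op_comm_def op_eq_def
proof (intro ballI)
  fix x y assume x: "x \<in> cfgs n L" and y: "y \<in> cfgs n L"
  have "op_mult n L (diag_op f) (perm_op \<pi>) x y = (if x = permute_list \<pi> y then f x else 0)"
    using op_mult_perm_right[OF p y] by (simp add: diag_op_def)
  also have "\<dots> = (if permute_list (inv_into UNIV \<pi>) x = y then f y else 0)"
    using eq_permute_list_iff[OF p cfgs_len[OF y], of x] cfgs_len[OF x] f[OF y] by auto
  also have "\<dots> = op_mult n L (perm_op \<pi>) (diag_op f) x y"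
    using op_mult_perm_left[OF p x] by (simp add: diag_op_def)
  finally show "op_mult n L (diag_op f) (perm_op \<pi>) x y = op_mult n L (perm_op \<pi>) (diag_op f) x y" .
qed


lemma op_comm_diag_Rop:
  assumes "a < L" "b < L" "j < L" "j \<noteq> a" "j \<noteq> b"
  shows "op_comm n L (diag_op (\<lambda>x. d (x ! j))) (Rop \<eta> a b \<mu>)"
  unfolding Rop_def swap_op_def
proof (rule op_comm_lin_right[OF op_comm_id op_comm_diag_perm])
  show "Transposition.transpose a b permutes {..<L}" using assms by (auto intro: permutes_swap_id)
  fix x assume "x \<in> cfgs n L"
  thus "d (permute_list (Transposition.transpose a b) x ! j) = d (x ! j)" using assms by (simp add: cfgs_len)
qed

lemma op_comm_Rop_Rop:
  assumes "a < L" "b < L" "a' < L" "b' < L" "a \<noteq> a'" "a \<noteq> b'" "b \<noteq> a'" "b \<noteq> b'"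
  shows "op_comm n L (Rop \<eta> a b \<mu>) (Rop \<eta> a' b' \<mu>')"
  unfolding Rop_def swap_op_def
proof (rule op_comm_lin_right[OF _ op_comm_lin_left], rule op_comm_id)
  have p1: "Transposition.transpose a b permutes {..<L}" and p2: "Transposition.transpose a' b' permutes {..<L}"
    using assms by (auto intro: permutes_swap_id)
  have c: "Transposition.transpose a' b' o Transposition.transpose a b = Transposition.transpose a b o Transposition.transpose a' b'"
    using assms by (auto simp: fun_eq_iff Transposition.transpose_def)
  show "op_comm n L op_id (perm_op (Transposition.transpose a' b'))" by (rule op_comm_sym, rule op_comm_id)
  show "op_comm n L (perm_op (Transposition.transpose a b)) (perm_op (Transposition.transpose a' b'))"
    by (rule op_comm_perm_perm[OF p1 p2 c])
qed

text \<open>All R-matrices coupling the auxiliary spaces to the site \<open>l\<close>; regrouping the product of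
  monodromies by sites only moves R-matrices acting on disjoint factors past each other.\<close>
definition site_R_chain :: "nat \<Rightarrow> complex \<Rightarrow> (nat \<Rightarrow> complex) \<Rightarrow> nat \<Rightarrow> nat \<Rightarrow> complex \<Rightarrow> nat \<Rightarrow> op" where
  "site_R_chain n \<eta> \<xi> N m lam l = op_prod n (m + N) (map (\<lambda>j. Rop \<eta> j (m + l - 1) (lam - of_nat j * \<eta> - \<xi> l)) [0..<m])"

lemma Mon_diag_regroup:
  "op_eq n (m + N) (op_prod n (m + N) (map (\<lambda>j. Mon_diag n d \<eta> \<xi> N m j (lam - of_nat j * \<eta>)) [0..<m]))
     (op_mult n (m + N) (op_prod n (m + N) (map (\<lambda>j. diag_op (\<lambda>x. d (x ! j))) [0..<m]))
        (op_prod n (m + N) (map (site_R_chain n \<eta> \<xi> N m lam) (rev [1..<N+1]))))"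
  unfolding Mon_diag_def site_R_chain_def
  by (rule op_prod_interchange[where A="\<lambda>j l. Rop \<eta> j (m + l - 1) (lam - of_nat j * \<eta> - \<xi> l)"
        and C="\<lambda>j. diag_op (\<lambda>x. d (x ! j))", unfolded o_def],
      auto intro!: op_comm_diag_Rop op_comm_Rop_Rop)

lemma ptrace_antisym_swap:
  assumes z: "z \<in> cfgs n N"
  shows "(\<Sum>a\<in>cfgs n m. op_mult n (m + N) (antisym m) Y (a @ z) (a @ z))
       = (\<Sum>a\<in>cfgs n m. op_mult n (m + N) Y (antisym m) (a @ z) (a @ z))"
proof -
  have l: "\<And>a. a \<in> cfgs n m \<Longrightarrow> length a = m" by (rule cfgs_len)
  have e1: "op_mult n (m + N) (antisym m) Y (a @ z) (a @ z) = (\<Sum>b\<in>cfgs n m. antisym m a b * Y (b @ z) (a @ z))"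
    if a: "a \<in> cfgs n m" for a
    unfolding op_mult_def sum_cfgs_append
  proof (rule sum.cong[OF refl])
    fix b assume b: "b \<in> cfgs n m"
    have "(\<Sum>y\<in>cfgs n N. antisym m (a @ z) (b @ y) * Y (b @ y) (a @ z))
        = (\<Sum>y\<in>cfgs n N. if y = z then antisym m a b * Y (b @ z) (a @ z) else 0)"
      by (rule sum.cong) (use a b in \<open>auto simp: antisym_append l\<close>)
    thus "(\<Sum>y\<in>cfgs n N. antisym m (a @ z) (b @ y) * Y (b @ y) (a @ z)) = antisym m a b * Y (b @ z) (a @ z)"
      using z by simp
  qed
  have e2: "op_mult n (m + N) Y (antisym m) (a @ z) (a @ z) = (\<Sum>b\<in>cfgs n m. Y (a @ z) (b @ z) * antisym m b a)"
    if a: "a \<in> cfgs n m" for a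
    unfolding op_mult_def sum_cfgs_append
  proof (rule sum.cong[OF refl])
    fix b assume b: "b \<in> cfgs n m"
    have "(\<Sum>y\<in>cfgs n N. Y (a @ z) (b @ y) * antisym m (b @ y) (a @ z))
        = (\<Sum>y\<in>cfgs n N. if y = z then Y (a @ z) (b @ z) * antisym m b a else 0)"
      by (rule sum.cong) (use a b in \<open>auto simp: antisym_append l\<close>)
    thus "(\<Sum>y\<in>cfgs n N. Y (a @ z) (b @ y) * antisym m (b @ y) (a @ z)) = Y (a @ z) (b @ z) * antisym m b a"
      using z by simp
  qed
  show ?thesis
    by (simp add: e1 e2 cong: sum.cong) (subst sum.swap, simp add: mult.commute)
qed

section \<open>Fusion\<close>

abbreviation tp :: "nat \<Rightarrow> nat \<Rightarrow> nat \<Rightarrow> nat" where "tp \<equiv> Transposition.transpose"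

lemma tp_permutes: "a < L \<Longrightarrow> b < L \<Longrightarrow> tp a b permutes {..<L}"
  by (auto intro: permutes_swap_id)

lemma inv_tp: "inv_into UNIV (tp a b) = tp a b"
  using inv_transpose_eq by simp

lemma Rop_mult_row:
  assumes x: "x \<in> cfgs n L" and ab: "a < L" "b < L"
  shows "op_mult n L (Rop \<eta> a b \<nu>) Q x y = \<nu> * Q x y + \<eta> * Q (permute_list (tp a b) x) y"
  unfolding Rop_def swap_op_def op_mult_add_left op_mult_smult_left
  using op_id_left[OF x] op_mult_perm_left[OF tp_permutes[OF ab] x] by (simp add: inv_tp)

lemma antisym_row_sign:
  assumes x: "x \<in> cfgs n L" and y: "y \<in> cfgs n L" and p: "p < k" and kK: "k < K" and KL: "K \<le> L"
  shows "antisym K (permute_list (tp p k) x) y = - antisym K x y"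
proof -
  have s: "tp p k permutes {..<K}" using p kK by (intro tp_permutes) auto
  have sL: "tp p k permutes {..<L}" using permutes_mono[OF s KL] .
  have "antisym K (permute_list (tp p k) x) y = op_mult n L (perm_op (tp p k)) (antisym K) x y"
    using op_mult_perm_left[OF sL x] by (simp add: inv_tp)
  also have "\<dots> = of_int (sign (tp p k)) * antisym K x y"
    using op_eqD[OF perm_antisym[OF s KL] x y] .
  finally show ?thesis using p by (simp add: sign_swap_id)
qed

lemma op_comm_sum_left:
  assumes "\<And>i. i \<in> I \<Longrightarrow> op_comm n L (A i) B"
  shows "op_comm n L (\<lambda>x y. c * (\<Sum>i\<in>I. f i * A i x y)) B"
  using assms unfolding op_comm_def op_eq_def
  by (simp add: op_mult_sum_left op_mult_sum_right op_mult_smult_left op_mult_smult_right)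

lemma op_comm_antisym_Rop:
  assumes "k \<le> L" "s < L" "k \<le> s" "k < L"
  shows "op_comm n L (antisym k) (Rop \<eta> k s \<nu>)"
  unfolding antisym_def
proof (rule op_comm_sum_left)
  fix \<sigma> assume "\<sigma> \<in> Perms k"
  hence s: "\<sigma> permutes {..<k}" by simp
  show "op_comm n L (perm_op \<sigma>) (Rop \<eta> k s \<nu>)"
    unfolding Rop_def swap_op_def
  proof (rule op_comm_lin_right[OF op_comm_id op_comm_perm_perm])
    show "\<sigma> permutes {..<L}" using permutes_mono[OF s assms(1)] .
    show "tp k s permutes {..<L}" using assms by (intro tp_permutes) auto
    have fix1: "\<sigma> k = k" "\<sigma> s = s" using s assms by (auto intro: permutes_not_in)
    have lt: "\<And>i. i < k \<Longrightarrow> \<sigma> i < k" using permutes_lt[OF s] .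
    have ge: "\<And>i. \<not> i < k \<Longrightarrow> \<sigma> i = i" using s by (auto intro: permutes_not_in)
    show "tp k s o \<sigma> = \<sigma> o tp k s"
    proof
      fix i show "(tp k s o \<sigma>) i = (\<sigma> o tp k s) i"
        using fix1 lt[of i] ge[of i] assms by (cases "i < k") (auto simp: Transposition.transpose_def)
    qed
  qed
qed

lemma op_prod_snoc: "op_eq n L (op_prod n L (As @ [B])) (op_mult n L (op_prod n L As) B)"
proof -
  have "op_eq n L (op_prod n L (As @ [B])) (op_mult n L (op_prod n L As) (op_prod n L [B]))" by (rule op_prod_append)
  also have "op_eq n L \<dots> (op_mult n L (op_prod n L As) B)" by (rule op_mult_cong_r) (simp add: op_eq_id_right)
  finally show ?thesis .
qed

lemma row_lin:
  assumes "\<And>z. z \<in> cfgs n L \<Longrightarrow> A x z = c * (\<mu> * B x z + \<eta> * (\<Sum>p<k. B (f p) z))"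
  shows "op_mult n L A Q x y = c * (\<mu> * op_mult n L B Q x y + \<eta> * (\<Sum>p<k. op_mult n L B Q (f p) y))"
  unfolding op_mult_def using assms
  by (simp add: sum_distrib_left sum_distrib_right algebra_simps sum.distrib)
     (subst sum.swap, simp add: sum_distrib_left mult.assoc)

definition R_chain :: "nat \<Rightarrow> nat \<Rightarrow> complex \<Rightarrow> nat \<Rightarrow> complex \<Rightarrow> nat \<Rightarrow> op" where
  "R_chain n L \<eta> s \<mu> k = op_prod n L (map (\<lambda>j. Rop \<eta> j s (\<mu> - of_nat j * \<eta>)) [0..<k])"

lemma antisym_Rop_antisym_absorb:
  assumes "k < s" "s < L"
  shows "op_eq n L (op_mult n L (antisym k) (op_mult n L (Rop \<eta> k s \<nu>) (antisym (Suc k))))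
           (op_mult n L (Rop \<eta> k s \<nu>) (antisym (Suc k)))"
proof -
  let ?R = "Rop \<eta> k s \<nu>" and ?P = "antisym (Suc k)" and ?Pk = "antisym k"
  have "op_mult n L ?Pk (op_mult n L ?R ?P) = op_mult n L (op_mult n L ?Pk ?R) ?P" by (simp add: op_mult_assoc)
  also have "op_eq n L \<dots> (op_mult n L (op_mult n L ?R ?Pk) ?P)"
    by (rule op_mult_cong_l) (use op_comm_antisym_Rop[of k L s n \<eta> \<nu>] assms in \<open>simp add: op_comm_def\<close>)
  also have "\<dots> = op_mult n L ?R (op_mult n L ?Pk ?P)" by (simp add: op_mult_assoc)
  also have "op_eq n L \<dots> (op_mult n L ?R ?P)" by (rule op_mult_cong_r, rule antisym_absorb) (use assms in auto)
  finally show ?thesis .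
qed

text \<open>Since \<open>(p s)(k s) = (k s)(p k)\<close>, the transposition \<open>(p s)\<close> acts on the antisymmetrizer
  \<open>P\<^sup>-\<^sub>1\<^sub>.\<^sub>.\<^sub>k\<^sub>+\<^sub>1\<close> after \<open>(k s)\<close> like the sign change \<open>(p k)\<close>.\<close>
lemma antisym_swap_swap:
  assumes x: "x \<in> cfgs n L" and y: "y \<in> cfgs n L" and p: "p < k" and k: "k < s" "s < L"
  shows "antisym (Suc k) (permute_list (tp k s) (permute_list (tp p s) x)) y
       = - antisym (Suc k) (permute_list (tp k s) x) y"
proof -
  have "permute_list (tp k s) (permute_list (tp p s) x) = permute_list (tp p s o tp k s) x"
    using permute_list_compose[of "tp k s" x "tp p s", symmetric] tp_permutes[of k L s] k cfgs_len[OF x] by simp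
  also have "tp p s o tp k s = tp k s o tp p k"
    using p k by (auto simp: fun_eq_iff Transposition.transpose_def)
  also have "permute_list (tp k s o tp p k) x = permute_list (tp p k) (permute_list (tp k s) x)"
    using permute_list_compose[of "tp p k" x "tp k s", symmetric] tp_permutes[of p L k] p k cfgs_len[OF x] by simp
  finally have e: "permute_list (tp k s) (permute_list (tp p s) x) = permute_list (tp p k) (permute_list (tp k s) x)" .
  have "permute_list (tp k s) x \<in> cfgs n L" using permute_list_cfgs[OF tp_permutes x] k by auto
  thus ?thesis unfolding e by (rule antisym_row_sign[OF _ y p]) (use k in auto)
qed

text \<open>In the induction step the new
  factor \<open>R\<^sub>k\<^sub>s\<close> commutes with \<open>P\<^sup>-\<^sub>1\<^sub>.\<^sub>.\<^sub>k\<close>, and each term \<open>P\<^sub>p\<^sub>s P\<^sub>k\<^sub>s\<close> with \<open>p < k\<close>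
  contributes \<open>-\<eta>\<close> times the new swap term (\<open>antisym_swap_swap\<close>).\<close>
lemma R_chain_antisym:
  assumes k1: "1 \<le> k" and km: "k \<le> m" and ms: "m \<le> s" and sL: "s < L"
  shows "\<forall>x\<in>cfgs n L. \<forall>y\<in>cfgs n L. op_mult n L (R_chain n L \<eta> s \<mu> k) (antisym k) x y
      = (\<Prod>j\<in>{1..<k}. \<mu> - of_nat j * \<eta>) * (\<mu> * antisym k x y + \<eta> * (\<Sum>p<k. antisym k (permute_list (tp p s) x) y))"
  using k1 km
proof (induction k rule: nat_induct_at_least)
  case base
  show ?case
  proof (intro ballI)
    fix x y assume x: "x \<in> cfgs n L" and y: "y \<in> cfgs n L"
    have "op_mult n L (R_chain n L \<eta> s \<mu> 1) (antisym 1) x y = op_mult n L (op_mult n L (Rop \<eta> 0 s \<mu>) op_id) (antisym 1) x y"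
      by (simp add: R_chain_def)
    also have "\<dots> = op_mult n L (Rop \<eta> 0 s \<mu>) (antisym 1) x y"
      using op_eqD[OF op_mult_cong_l[OF op_eq_id_right] x y] .
    also have "\<dots> = \<mu> * antisym 1 x y + \<eta> * antisym 1 (permute_list (tp 0 s) x) y"
      by (rule Rop_mult_row[OF x]) (use base ms sL in auto)
    finally show "op_mult n L (R_chain n L \<eta> s \<mu> 1) (antisym 1) x y
      = (\<Prod>j\<in>{1..<1}. \<mu> - of_nat j * \<eta>) * (\<mu> * antisym 1 x y + \<eta> * (\<Sum>p<1. antisym 1 (permute_list (tp p s) x) y))"
      by simp
  qed
next
  case (Suc k)
  have IH: "\<forall>x\<in>cfgs n L. \<forall>y\<in>cfgs n L. op_mult n L (R_chain n L \<eta> s \<mu> k) (antisym k) x y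
      = (\<Prod>j\<in>{1..<k}. \<mu> - of_nat j * \<eta>) * (\<mu> * antisym k x y + \<eta> * (\<Sum>p<k. antisym k (permute_list (tp p s) x) y))"
    using Suc by simp
  have kL: "Suc k \<le> L" "k < s" "s < L" using Suc.prems ms sL by auto
  let ?R = "Rop \<eta> k s (\<mu> - of_nat k * \<eta>)"
  let ?P = "antisym (Suc k)" and ?Pk = "antisym k"
  let ?Q = "op_mult n L ?R ?P"
  let ?c = "\<Prod>j\<in>{1..<k}. \<mu> - of_nat j * \<eta>"
  have PkQ: "op_eq n L (op_mult n L ?Pk ?Q) ?Q"
    by (rule antisym_Rop_antisym_absorb) (use kL in auto)
  have Xs: "op_eq n L (R_chain n L \<eta> s \<mu> (Suc k)) (op_mult n L (R_chain n L \<eta> s \<mu> k) ?R)"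
    unfolding R_chain_def by (simp add: op_prod_snoc)
  show ?case
  proof (intro ballI)
    fix x y assume x: "x \<in> cfgs n L" and y: "y \<in> cfgs n L"
    have Qrow: "op_mult n L ?Pk ?Q w y = (\<mu> - of_nat k * \<eta>) * ?P w y + \<eta> * ?P (permute_list (tp k s) w) y"
      if w: "w \<in> cfgs n L" for w
      using op_eqD[OF PkQ w y] Rop_mult_row[OF w, of k s \<eta> "\<mu> - of_nat k * \<eta>" ?P y] kL sL by simp
    have sign: "?P (permute_list (tp k s) (permute_list (tp p s) x)) y = - ?P (permute_list (tp k s) x) y"
      if "p < k" for p by (rule antisym_swap_swap[OF x y that]) (use kL in auto)
    have "op_mult n L (R_chain n L \<eta> s \<mu> (Suc k)) ?P x y = op_mult n L (op_mult n L (R_chain n L \<eta> s \<mu> k) ?R) ?P x y"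
      using op_eqD[OF op_mult_cong_l[OF Xs] x y] .
    also have "\<dots> = op_mult n L (R_chain n L \<eta> s \<mu> k) ?Q x y" by (simp add: op_mult_assoc)
    also have "\<dots> = op_mult n L (R_chain n L \<eta> s \<mu> k) (op_mult n L ?Pk ?Q) x y"
      using op_eqD[OF op_mult_cong_r[OF op_eq_sym[OF PkQ]] x y] .
    also have "\<dots> = op_mult n L (op_mult n L (R_chain n L \<eta> s \<mu> k) ?Pk) ?Q x y" by (simp add: op_mult_assoc)
    also have "\<dots> = ?c * (\<mu> * op_mult n L ?Pk ?Q x y + \<eta> * (\<Sum>p<k. op_mult n L ?Pk ?Q (permute_list (tp p s) x) y))"
      by (rule row_lin) (use IH x in auto)
    also have "\<dots> = ?c * (\<mu> * ((\<mu> - of_nat k * \<eta>) * ?P x y + \<eta> * ?P (permute_list (tp k s) x) y)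
        + \<eta> * (\<Sum>p<k. (\<mu> - of_nat k * \<eta>) * ?P (permute_list (tp p s) x) y - \<eta> * ?P (permute_list (tp k s) x) y))"
    proof -
      have "(\<Sum>p<k. op_mult n L ?Pk ?Q (permute_list (tp p s) x) y)
          = (\<Sum>p<k. (\<mu> - of_nat k * \<eta>) * ?P (permute_list (tp p s) x) y - \<eta> * ?P (permute_list (tp k s) x) y)"
      proof (rule sum.cong[OF refl])
        fix p assume "p \<in> {..<k}"
        hence p: "p < k" by simp
        have w: "permute_list (tp p s) x \<in> cfgs n L" using permute_list_cfgs[OF tp_permutes x] p kL by auto
        show "op_mult n L ?Pk ?Q (permute_list (tp p s) x) y = (\<mu> - of_nat k * \<eta>) * ?P (permute_list (tp p s) x) y - \<eta> * ?P (permute_list (tp k s) x) y"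
          using Qrow[OF w] sign[OF p] by simp
      qed
      thus ?thesis using Qrow[OF x] by simp
    qed
    also have "\<dots> = ?c * (\<mu> - of_nat k * \<eta>) * (\<mu> * ?P x y + \<eta> * (\<Sum>p<Suc k. ?P (permute_list (tp p s) x) y))"
    proof -
      let ?S = "\<Sum>p<k. ?P (permute_list (tp p s) x) y" and ?T = "?P (permute_list (tp k s) x) y"
      have e: "(\<Sum>p<k. (\<mu> - of_nat k * \<eta>) * ?P (permute_list (tp p s) x) y - \<eta> * ?T)
          = (\<mu> - of_nat k * \<eta>) * ?S - of_nat k * (\<eta> * ?T)"
        by (simp add: sum_subtractf sum_distrib_left)
      have e2: "(\<Sum>p<Suc k. ?P (permute_list (tp p s) x) y) = ?S + ?T" by simp
      show ?thesis unfolding e e2 by (simp add: algebra_simps)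
    qed
    also have "?c * (\<mu> - of_nat k * \<eta>) = (\<Prod>j\<in>{1..<Suc k}. \<mu> - of_nat j * \<eta>)"
      using Suc.hyps by (simp add: prod.atLeastLessThan_Suc)
    finally show "op_mult n L (R_chain n L \<eta> s \<mu> (Suc k)) ?P x y
      = (\<Prod>j\<in>{1..<Suc k}. \<mu> - of_nat j * \<eta>) * (\<mu> * ?P x y + \<eta> * (\<Sum>p<Suc k. ?P (permute_list (tp p s) x) y))" .
  qed
qed

definition fused_R :: "nat \<Rightarrow> complex \<Rightarrow> nat \<Rightarrow> complex \<Rightarrow> op" where
  "fused_R m \<eta> s \<mu> = (\<lambda>x y. \<mu> * op_id x y + \<eta> * (\<Sum>p<m. swap_op p s x y))"

lemma fused_R_mult_row:
  assumes x: "x \<in> cfgs n L" and ms: "m \<le> s" and sL: "s < L"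
  shows "op_mult n L (fused_R m \<eta> s \<mu>) Q x y = \<mu> * Q x y + \<eta> * (\<Sum>p<m. Q (permute_list (tp p s) x) y)"
proof -
  have "op_mult n L (fused_R m \<eta> s \<mu>) Q x y = \<mu> * op_mult n L op_id Q x y + \<eta> * (\<Sum>p<m. op_mult n L (swap_op p s) Q x y)"
    unfolding fused_R_def op_mult_add_left op_mult_smult_left
    by (simp add: op_mult_sum_left[where A="\<lambda>p. swap_op p s", unfolded op_mult_smult_left])
  also have "\<dots> = \<mu> * Q x y + \<eta> * (\<Sum>p<m. Q (permute_list (tp p s) x) y)"
    using op_id_left[OF x] op_mult_perm_left[OF tp_permutes x] ms sL
    by (simp add: swap_op_def inv_tp)
  finally show ?thesis .
qed

lemma op_eq_smult: "op_eq n L A B \<Longrightarrow> op_eq n L (\<lambda>x y. c * A x y) (\<lambda>x y. c * B x y)"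
  unfolding op_eq_def by auto

lemma site_R_chain_antisym:
  assumes m1: "1 \<le> m" and l: "1 \<le> l" "l \<le> N"
  shows "op_eq n (m + N) (op_mult n (m + N) (site_R_chain n \<eta> \<xi> N m lam l) (antisym m))
     (\<lambda>x y. (\<Prod>j\<in>{1..<m}. (lam - \<xi> l) - of_nat j * \<eta>) * op_mult n (m + N) (fused_R m \<eta> (m + l - 1) (lam - \<xi> l)) (antisym m) x y)"
proof -
  have X: "site_R_chain n \<eta> \<xi> N m lam l = R_chain n (m + N) \<eta> (m + l - 1) (lam - \<xi> l) m"
    unfolding site_R_chain_def R_chain_def by (rule arg_cong[where f="op_prod n (m+N)"]) (simp add: algebra_simps)
  show ?thesis unfolding op_eq_def X
    using R_chain_antisym[OF m1 order.refl, of "m + l - 1" "m + N" n \<eta> "lam - \<xi> l"] l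
      fused_R_mult_row[of _ n "m + N" m "m + l - 1" \<eta> "lam - \<xi> l" "antisym m"] by auto
qed

lemma op_comm_perm_sumswap:
  assumes s: "\<sigma> permutes {..<m}" and ms: "m \<le> s" and sL: "s < L"
  shows "op_comm n L (perm_op \<sigma>) (\<lambda>x y. \<Sum>p<m. swap_op p s x y)"
  unfolding op_comm_def op_eq_def
proof (intro ballI)
  fix x y assume x: "x \<in> cfgs n L" and y: "y \<in> cfgs n L"
  have mL: "m \<le> L" using ms sL by simp
  have sgL: "\<sigma> permutes {..<L}" using permutes_mono[OF s mL] .
  have bs: "bij \<sigma>" using permutes_bij[OF s] .
  have isv: "inv_into UNIV \<sigma> s = s"
    using permutes_inv[OF s] ms by (auto intro: permutes_not_in)
  have "op_mult n L (perm_op \<sigma>) (\<lambda>x y. \<Sum>p<m. swap_op p s x y) x y = (\<Sum>p<m. perm_op (tp p s o \<sigma>) x y)"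
    unfolding op_mult_sum_right swap_op_def
    by (rule sum.cong[OF refl], rule op_eqD[OF perm_mult[OF sgL tp_permutes] x y]) (use ms sL in auto)
  also have "\<dots> = (\<Sum>p<m. perm_op (\<sigma> o tp (inv_into UNIV \<sigma> p) s) x y)"
    by (rule sum.cong[OF refl]) (simp add: transpose_comp_eq[OF bs] isv)
  also have "\<dots> = (\<Sum>q<m. perm_op (\<sigma> o tp q s) x y)"
    by (rule sum.reindex_bij_betw[of "inv_into UNIV \<sigma>" "{..<m}" "{..<m}" "\<lambda>q. perm_op (\<sigma> o tp q s) x y"])
       (rule permutes_imp_bij[OF permutes_inv[OF s]])
  also have "\<dots> = op_mult n L (\<lambda>x y. \<Sum>p<m. swap_op p s x y) (perm_op \<sigma>) x y"
    unfolding op_mult_sum_left swap_op_def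
    by (rule sum.cong[OF refl], rule op_eqD[OF perm_mult[OF tp_permutes sgL] x y, symmetric]) (use ms sL in auto)
  finally show "op_mult n L (perm_op \<sigma>) (\<lambda>x y. \<Sum>p<m. swap_op p s x y) x y
      = op_mult n L (\<lambda>x y. \<Sum>p<m. swap_op p s x y) (perm_op \<sigma>) x y" .
qed

lemma op_comm_antisym_fused_R:
  assumes ms: "m \<le> s" and sL: "s < L"
  shows "op_comm n L (antisym m) (fused_R m \<eta> s \<mu>)"
  unfolding antisym_def
proof (rule op_comm_sum_left)
  fix \<sigma> assume "\<sigma> \<in> Perms m"
  hence s: "\<sigma> permutes {..<m}" by simp
  have "op_comm n L (perm_op \<sigma>) (\<lambda>x y. \<mu> * op_id x y + \<eta> * (\<Sum>p<m. swap_op p s x y))"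
    by (rule op_comm_lin_right[OF op_comm_id op_comm_perm_sumswap[OF s ms sL]])
  thus "op_comm n L (perm_op \<sigma>) (fused_R m \<eta> s \<mu>)" unfolding fused_R_def .
qed

lemma R_chains_antisym:
  assumes X: "\<And>l. l \<in> set ls \<Longrightarrow> op_eq n L (op_mult n L (X l) P) (\<lambda>x y. c l * op_mult n L (Z l) P x y)"
    and C: "\<And>l. l \<in> set ls \<Longrightarrow> op_comm n L P (Z l)"
  shows "op_eq n L (op_mult n L (op_prod n L (map X ls)) P)
           (\<lambda>x y. prod_list (map c ls) * op_mult n L (op_prod n L (map Z ls)) P x y)"
  using X C
proof (induction ls)
  case Nil thus ?case by simp
next
  case (Cons l ls)
  let ?Zs = "op_prod n L (map Z ls)" and ?c' = "prod_list (map c ls)"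
  have cZ: "op_comm n L P ?Zs" by (rule op_comm_prod_right) (use Cons.prems in auto)
  have IH: "op_eq n L (op_mult n L (op_prod n L (map X ls)) P) (\<lambda>x y. ?c' * op_mult n L ?Zs P x y)"
    by (rule Cons.IH) (use Cons.prems in auto)
  have "op_mult n L (op_prod n L (map X (l # ls))) P = op_mult n L (X l) (op_mult n L (op_prod n L (map X ls)) P)"
    by (simp add: op_mult_assoc)
  also have "op_eq n L \<dots> (op_mult n L (X l) (\<lambda>x y. ?c' * op_mult n L ?Zs P x y))"
    by (rule op_mult_cong_r[OF IH])
  also have "\<dots> = (\<lambda>x y. ?c' * op_mult n L (X l) (op_mult n L ?Zs P) x y)"
    by (simp add: op_mult_smult_right)
  also have "op_eq n L \<dots> (\<lambda>x y. ?c' * op_mult n L (X l) (op_mult n L P ?Zs) x y)"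
    by (rule op_eq_smult, rule op_mult_cong_r) (use cZ in \<open>simp add: op_comm_def op_eq_sym\<close>)
  also have "\<dots> = (\<lambda>x y. ?c' * op_mult n L (op_mult n L (X l) P) ?Zs x y)"
    by (simp add: op_mult_assoc)
  also have "op_eq n L \<dots> (\<lambda>x y. ?c' * op_mult n L (\<lambda>x y. c l * op_mult n L (Z l) P x y) ?Zs x y)"
    by (rule op_eq_smult, rule op_mult_cong_l, rule Cons.prems) simp
  also have "\<dots> = (\<lambda>x y. (?c' * c l) * op_mult n L (Z l) (op_mult n L P ?Zs) x y)"
    by (simp add: op_mult_smult_left op_mult_assoc mult.assoc)
  also have "op_eq n L \<dots> (\<lambda>x y. (?c' * c l) * op_mult n L (Z l) (op_mult n L ?Zs P) x y)"
    by (rule op_eq_smult, rule op_mult_cong_r) (use cZ in \<open>simp add: op_comm_def\<close>)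
  also have "\<dots> = (\<lambda>x y. prod_list (map c (l # ls)) * op_mult n L (op_prod n L (map Z (l # ls))) P x y)"
    by (simp add: op_mult_assoc mult.commute)
  finally show ?case .
qed

lemma op_prod_diag:
  "op_eq n L (op_prod n L (map (\<lambda>j. diag_op (f j)) js)) (diag_op (\<lambda>x. \<Prod>j\<leftarrow>js. f j x))"
proof (induction js)
  case Nil thus ?case by (simp add: op_eq_def op_id_def diag_op_def)
next
  case (Cons j js)
  have "op_eq n L (op_mult n L (diag_op (f j)) (op_prod n L (map (\<lambda>j. diag_op (f j)) js)))
       (op_mult n L (diag_op (f j)) (diag_op (\<lambda>x. \<Prod>j\<leftarrow>js. f j x)))"
    by (rule op_mult_cong_r[OF Cons.IH])
  also have "op_eq n L \<dots> (diag_op (\<lambda>x. \<Prod>j\<leftarrow>j # js. f j x))"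
  proof -
    have "op_mult n L (diag_op (f j)) (diag_op (\<lambda>x. \<Prod>j\<leftarrow>js. f j x)) x y = diag_op (\<lambda>x. \<Prod>j\<leftarrow>j # js. f j x) x y"
      if "x \<in> cfgs n L" for x y
    proof -
      have "op_mult n L (diag_op (f j)) (diag_op (\<lambda>x. \<Prod>j\<leftarrow>js. f j x)) x y
          = (\<Sum>z\<in>cfgs n L. if z = x then f j x * (if x = y then \<Prod>j\<leftarrow>js. f j x else 0) else 0)"
        unfolding op_mult_def diag_op_def by (rule sum.cong) auto
      thus ?thesis using that by (simp add: diag_op_def)
    qed
    thus ?thesis unfolding op_eq_def by auto
  qed
  finally show ?case by simp
qed

lemma diag_op_mult: "x \<in> cfgs n L \<Longrightarrow> op_mult n L (diag_op f) Q x y = f x * Q x y"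
proof -
  assume x: "x \<in> cfgs n L"
  have "op_mult n L (diag_op f) Q x y = (\<Sum>z\<in>cfgs n L. if z = x then f x * Q x y else 0)"
    unfolding op_mult_def diag_op_def by (rule sum.cong) auto
  thus ?thesis using x by simp
qed

definition zero_count :: "nat list \<Rightarrow> nat" where "zero_count b = card {p. p < length b \<and> b ! p = 0}"

lemma sum_indicator_card:
  "(\<Sum>p<(m::nat). if Q p then 1 else (0::complex)) = of_nat (card {p. p < m \<and> Q p})"
proof -
  have "(\<Sum>p<m. if Q p then 1 else (0::complex)) = (\<Sum>p\<in>{p. p < m \<and> Q p}. 1)"
    by (rule sum.mono_neutral_cong_right) auto
  thus ?thesis by simp
qed

lemma swap_vac_iff:
  assumes a: "a \<in> cfgs n m" and b: "b \<in> cfgs n m" and p: "p < m" and l: "1 \<le> l" "l \<le> N"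
  shows "(a @ replicate N 0 = permute_list (tp p (m + l - 1)) (b @ replicate N 0)) \<longleftrightarrow> (a = b \<and> b ! p = 0)"
proof -
  let ?z = "replicate N (0::nat)" and ?s = "m + l - 1"
  have la: "length a = m" and lb: "length b = m" using a b by (auto simp: cfgs_len)
  have bs: "(b @ ?z) ! ?s = 0" using l lb by (simp add: nth_append)
  have as: "(a @ ?z) ! ?s = 0" using l la by (simp add: nth_append)
  have ps: "p \<noteq> ?s" using p l by simp
  show ?thesis
  proof
    assume e: "a @ ?z = permute_list (tp p ?s) (b @ ?z)"
    have en: "(a @ ?z) ! i = (b @ ?z) ! (tp p ?s i)" if "i < m + N" for i
      using e that la lb by (metis length_append length_replicate nth_permute_list)
    have bp: "b ! p = 0" using en[of ?s] l as p lb by (simp add: nth_append)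
    have "a = b"
    proof (rule nth_equalityI)
      show "length a = length b" using la lb by simp
      fix i assume i: "i < length a"
      show "a ! i = b ! i"
      proof (cases "i = p")
        case True
        thus ?thesis using en[of p] p la l bs bp by (simp add: nth_append)
      next
        case False
        hence "tp p ?s i = i" using i la l by (auto simp: Transposition.transpose_def)
        thus ?thesis using en[of i] i la lb by (simp add: nth_append)
      qed
    qed
    thus "a = b \<and> b ! p = 0" using bp by simp
  next
    assume "a = b \<and> b ! p = 0"
    hence ab: "a = b" and bp: "b ! p = 0" by auto
    show "a @ ?z = permute_list (tp p ?s) (b @ ?z)"
    proof (rule nth_equalityI)
      fix i assume i: "i < length (a @ ?z)"
      show "(a @ ?z) ! i = permute_list (tp p ?s) (b @ ?z) ! i"
        using i ab bp p lb l bs by (auto simp: Transposition.transpose_def nth_append)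
    qed (use ab in simp)
  qed
qed

lemma fused_R_vac:
  assumes a: "a \<in> cfgs n m" and b: "b \<in> cfgs n m" and l: "1 \<le> l" "l \<le> N"
  shows "fused_R m \<eta> (m + l - 1) \<mu> (a @ replicate N 0) (b @ replicate N 0)
       = (if a = b then \<mu> + \<eta> * of_nat (zero_count b) else 0)"
proof -
  have "(\<Sum>p<m. swap_op p (m + l - 1) (a @ replicate N 0) (b @ replicate N 0))
      = (\<Sum>p<m. if a = b \<and> b ! p = 0 then 1 else 0)"
    unfolding swap_op_def perm_op_permute_list by (rule sum.cong[OF refl]) (use swap_vac_iff[OF a b _ l] in auto)
  also have "\<dots> = (if a = b then of_nat (zero_count b) else 0)"
    using sum_indicator_card[where m=m and Q="\<lambda>p. a = b \<and> b ! p = 0"] cfgs_len[OF b] by (auto simp: zero_count_def)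
  finally show ?thesis unfolding fused_R_def op_id_def by auto
qed

definition fixpos :: "nat \<Rightarrow> nat \<Rightarrow> nat \<Rightarrow> op \<Rightarrow> bool" where
  "fixpos n L q A \<longleftrightarrow> (\<forall>x\<in>cfgs n L. \<forall>y\<in>cfgs n L. A x y \<noteq> 0 \<longrightarrow> x ! q = y ! q)"

lemma fixpos_mult: assumes A: "fixpos n L q A" and B: "fixpos n L q B" shows "fixpos n L q (op_mult n L A B)"
  unfolding fixpos_def
proof (intro ballI impI)
  fix x y assume x: "x \<in> cfgs n L" and y: "y \<in> cfgs n L" and ne: "op_mult n L A B x y \<noteq> 0"
  then obtain z where z: "z \<in> cfgs n L" "A x z \<noteq> 0" "B z y \<noteq> 0"
    unfolding op_mult_def by (auto dest!: sum_nonzero)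
  thus "x ! q = y ! q" using A B x y unfolding fixpos_def by metis
qed

lemma fixpos_id: "fixpos n L q op_id" unfolding fixpos_def op_id_def by auto

lemma fixpos_prod: "(\<And>A. A \<in> set As \<Longrightarrow> fixpos n L q A) \<Longrightarrow> fixpos n L q (op_prod n L As)"
  by (induction As) (auto intro: fixpos_mult fixpos_id)

lemma fixpos_fused_R:
  assumes "q < L" "q \<noteq> s" "m \<le> q" "s < L"
  shows "fixpos n L q (fused_R m \<eta> s \<mu>)"
  unfolding fixpos_def
proof (intro ballI impI)
  fix x y assume x: "x \<in> cfgs n L" and y: "y \<in> cfgs n L" and ne: "fused_R m \<eta> s \<mu> x y \<noteq> 0"
  show "x ! q = y ! q"
  proof (cases "x = y")
    case False
    then obtain p where p: "p < m" "swap_op p s x y \<noteq> 0"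
      using ne unfolding fused_R_def op_id_def by (auto dest!: sum_nonzero)
    hence "x = permute_list (tp p s) y" unfolding swap_op_def perm_op_permute_list by (auto split: if_splits)
    thus ?thesis using assms p cfgs_len[OF y] by simp
  qed simp
qed

text \<open>A fused R-matrix at site \<open>l\<close> only exchanges labels between the auxiliary spaces and that
  site, and the later factors never touch site \<open>l\<close>; so a path leaving the all-zero sites
  cannot return to them.\<close>
lemma fused_R_prod_leaves_vac:
  assumes n0: "0 < n" and l: "1 \<le> l" "l \<le> N"
    and fP: "fixpos n (m + N) (m + l - 1) P"
    and a: "a \<in> cfgs n m" and b: "b \<in> cfgs n m" and c: "c \<in> cfgs n m"
    and y: "y \<in> cfgs n N" and yz: "y \<noteq> replicate N 0"
  shows "fused_R m \<eta> (m + l - 1) \<mu> (a @ replicate N 0) (c @ y) * P (c @ y) (b @ replicate N 0) = 0"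
proof (rule ccontr)
  assume "fused_R m \<eta> (m + l - 1) \<mu> (a @ replicate N 0) (c @ y) * P (c @ y) (b @ replicate N 0) \<noteq> 0"
  hence n1: "fused_R m \<eta> (m + l - 1) \<mu> (a @ replicate N 0) (c @ y) \<noteq> 0" and n2: "P (c @ y) (b @ replicate N 0) \<noteq> 0" by auto
  have az: "a @ replicate N 0 \<in> cfgs n (m + N)" "c @ y \<in> cfgs n (m + N)" "b @ replicate N 0 \<in> cfgs n (m + N)"
    using append_cfgs[OF a zeros_cfgs[OF n0]] append_cfgs[OF c y] append_cfgs[OF b zeros_cfgs[OF n0]] by auto
  have la: "length a = m" and lc: "length c = m" and ly: "length y = N"
    using a c y by (auto simp: cfgs_len)
  have "y = replicate N 0"
  proof (rule nth_equalityI)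
    show "length y = length (replicate N 0)" using ly by simp
    fix i assume i: "i < length y"
    show "y ! i = replicate N 0 ! i"
    proof (cases "i = l - 1")
      case True
      have "(c @ y) ! (m + l - 1) = (b @ replicate N 0) ! (m + l - 1)"
        using fP n2 az unfolding fixpos_def by blast
      moreover have "m + l - 1 = length c + (l - 1)" "m + l - 1 = length b + (l - 1)"
        using l lc cfgs_len[OF b] by auto
      ultimately have "(c @ y) ! (length c + (l - 1)) = (b @ replicate N 0) ! (length b + (l - 1))" by metis
      thus ?thesis using True by (simp only: nth_append_length_plus)
    next
      case False
      have "fixpos n (m + N) (m + i) (fused_R m \<eta> (m + l - 1) \<mu>)"
        by (rule fixpos_fused_R) (use False i ly l in auto)
      hence "(a @ replicate N 0) ! (m + i) = (c @ y) ! (m + i)" using n1 az unfolding fixpos_def by blast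
      thus ?thesis using la lc i ly by (simp add: nth_append)
    qed
  qed
  thus False using yz by simp
qed

lemma fused_R_prod_vac:
  assumes ls: "distinct ls" "set ls \<subseteq> {1..N}" and n0: "0 < n"
  shows "\<forall>a\<in>cfgs n m. \<forall>b\<in>cfgs n m.
     op_prod n (m + N) (map (\<lambda>l. fused_R m \<eta> (m + l - 1) (mu l)) ls) (a @ replicate N 0) (b @ replicate N 0)
       = (if a = b then (\<Prod>l\<leftarrow>ls. mu l + \<eta> * of_nat (zero_count b)) else 0)"
  using ls
proof (induction ls)
  case Nil thus ?case by (auto simp: op_id_def)
next
  case (Cons l ls)
  let ?z = "replicate N (0::nat)"
  let ?P = "op_prod n (m + N) (map (\<lambda>l. fused_R m \<eta> (m + l - 1) (mu l)) ls)"
  have IH: "\<forall>a\<in>cfgs n m. \<forall>b\<in>cfgs n m. ?P (a @ ?z) (b @ ?z) = (if a = b then (\<Prod>l\<leftarrow>ls. mu l + \<eta> * of_nat (zero_count b)) else 0)"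
    using Cons by auto
  have l: "1 \<le> l" "l \<le> N" "l \<notin> set ls" using Cons.prems by auto
  have fP: "fixpos n (m + N) (m + l - 1) ?P"
  proof (rule fixpos_prod)
    fix A assume "A \<in> set (map (\<lambda>l. fused_R m \<eta> (m + l - 1) (mu l)) ls)"
    then obtain l' where l': "l' \<in> set ls" "A = fused_R m \<eta> (m + l' - 1) (mu l')" by auto
    have "1 \<le> l'" "l' \<le> N" "l' \<noteq> l" using l' Cons.prems by auto
    thus "fixpos n (m + N) (m + l - 1) A" unfolding l'(2) by (intro fixpos_fused_R) (use l in auto)
  qed
  show ?case
  proof (intro ballI)
    fix a b assume a: "a \<in> cfgs n m" and b: "b \<in> cfgs n m"
    have vz: "fused_R m \<eta> (m + l - 1) (mu l) (a @ ?z) (c @ y) * ?P (c @ y) (b @ ?z) = 0"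
      if "c \<in> cfgs n m" "y \<in> cfgs n N" "y \<noteq> ?z" for c y
      by (rule fused_R_prod_leaves_vac[OF n0 l(1,2) fP a b that])
    have "op_prod n (m + N) (map (\<lambda>l. fused_R m \<eta> (m + l - 1) (mu l)) (l # ls)) (a @ ?z) (b @ ?z)
        = (\<Sum>c\<in>cfgs n m. \<Sum>y\<in>cfgs n N. fused_R m \<eta> (m + l - 1) (mu l) (a @ ?z) (c @ y) * ?P (c @ y) (b @ ?z))"
      by (simp add: op_mult_def sum_cfgs_append)
    also have "\<dots> = (\<Sum>c\<in>cfgs n m. fused_R m \<eta> (m + l - 1) (mu l) (a @ ?z) (c @ ?z) * ?P (c @ ?z) (b @ ?z))"
    proof (rule sum.cong[OF refl])
      fix c assume c: "c \<in> cfgs n m"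
      have zN: "?z \<in> cfgs n N" using zeros_cfgs[OF n0] .
      show "(\<Sum>y\<in>cfgs n N. fused_R m \<eta> (m + l - 1) (mu l) (a @ ?z) (c @ y) * ?P (c @ y) (b @ ?z))
          = fused_R m \<eta> (m + l - 1) (mu l) (a @ ?z) (c @ ?z) * ?P (c @ ?z) (b @ ?z)"
        by (rule sum.mono_neutral_cong_right[where S="{?z}", simplified]) (use zN vz[OF c] in auto)
    qed
    also have "\<dots> = (\<Sum>c\<in>cfgs n m. if c = b then fused_R m \<eta> (m + l - 1) (mu l) (a @ ?z) (b @ ?z) * (\<Prod>l\<leftarrow>ls. mu l + \<eta> * of_nat (zero_count b)) else 0)"
      by (rule sum.cong[OF refl]) (use IH b in auto)
    also have "\<dots> = (if a = b then (\<Prod>l\<leftarrow>l # ls. mu l + \<eta> * of_nat (zero_count b)) else 0)"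
      using b fused_R_vac[OF a b l(1,2)] by simp
    finally show "op_prod n (m + N) (map (\<lambda>l. fused_R m \<eta> (m + l - 1) (mu l)) (l # ls)) (a @ ?z) (b @ ?z)
        = (if a = b then (\<Prod>l\<leftarrow>l # ls. mu l + \<eta> * of_nat (zero_count b)) else 0)" .
  qed
qed

lemma fused_R_prod_antisym_vac:
  assumes n0: "0 < n" and a: "a \<in> cfgs n m"
  shows "op_mult n (m + N) (op_prod n (m + N) (map (\<lambda>l. fused_R m \<eta> (m + l - 1) (lam - \<xi> l)) (rev [1..<N+1])))
           (antisym m) (a @ replicate N 0) (a @ replicate N 0)
       = (\<Prod>l\<leftarrow>rev [1..<N+1]. (lam - \<xi> l) + \<eta> * of_nat (zero_count a)) * antisym m a a"
proof -
  let ?L = "m + N" and ?z = "replicate N (0::nat)" and ?P = "antisym m" and ?ls = "rev [1..<N+1]"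
  let ?Zs = "op_prod n ?L (map (\<lambda>l. fused_R m \<eta> (m + l - 1) (lam - \<xi> l)) ?ls)"
  have zN: "?z \<in> cfgs n N" by (rule zeros_cfgs[OF n0])
  have la: "length a = m" by (rule cfgs_len[OF a])
  have "op_mult n ?L ?Zs ?P (a @ ?z) (a @ ?z) = (\<Sum>b\<in>cfgs n m. ?Zs (a @ ?z) (b @ ?z) * antisym m b a)"
    unfolding op_mult_def sum_cfgs_append
  proof (rule sum.cong[OF refl])
    fix b assume b: "b \<in> cfgs n m"
    have "(\<Sum>y\<in>cfgs n N. ?Zs (a @ ?z) (b @ y) * ?P (b @ y) (a @ ?z))
        = (\<Sum>y\<in>cfgs n N. if y = ?z then ?Zs (a @ ?z) (b @ ?z) * antisym m b a else 0)"
      by (rule sum.cong) (use b la in \<open>auto simp: antisym_append cfgs_len\<close>)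
    thus "(\<Sum>y\<in>cfgs n N. ?Zs (a @ ?z) (b @ y) * ?P (b @ y) (a @ ?z)) = ?Zs (a @ ?z) (b @ ?z) * antisym m b a"
      using zN by simp
  qed
  also have "\<dots> = (\<Sum>b\<in>cfgs n m. if b = a then (\<Prod>l\<leftarrow>?ls. (lam - \<xi> l) + \<eta> * of_nat (zero_count a)) * antisym m a a else 0)"
  proof (rule sum.cong[OF refl])
    fix b assume b: "b \<in> cfgs n m"
    have "?Zs (a @ ?z) (b @ ?z) = (if a = b then (\<Prod>l\<leftarrow>?ls. (lam - \<xi> l) + \<eta> * of_nat (zero_count b)) else 0)"
    proof -
      have "distinct ?ls" "set ?ls \<subseteq> {1..N}" by auto
      from fused_R_prod_vac[OF this n0, where m=m and \<eta>=\<eta> and mu="\<lambda>l. lam - \<xi> l"] a b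
      show ?thesis by auto
    qed
    thus "?Zs (a @ ?z) (b @ ?z) * antisym m b a = (if b = a then (\<Prod>l\<leftarrow>?ls. (lam - \<xi> l) + \<eta> * of_nat (zero_count a)) * antisym m a a else 0)"
      by auto
  qed
  also have "\<dots> = (\<Prod>l\<leftarrow>?ls. (lam - \<xi> l) + \<eta> * of_nat (zero_count a)) * antisym m a a" using a by simp
  finally show ?thesis .
qed

lemma fused_diag_vac_trace:
  assumes n0: "0 < n" and m1: "1 \<le> m"
  shows "(\<Sum>a\<in>cfgs n m. fused_diag n d \<eta> \<xi> N m lam (a @ replicate N 0) (a @ replicate N 0))
    = (\<Sum>a\<in>cfgs n m. (\<Prod>j\<leftarrow>[0..<m]. d (a ! j)) *
        ((\<Prod>l\<leftarrow>rev [1..<N+1]. \<Prod>j\<in>{1..<m}. (lam - \<xi> l) - of_nat j * \<eta>) *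
         ((\<Prod>l\<leftarrow>rev [1..<N+1]. (lam - \<xi> l) + \<eta> * of_nat (zero_count a)) * antisym m a a)))"
proof -
  let ?L = "m + N" and ?z = "replicate N (0::nat)"
  let ?P = "antisym m"
  let ?Y = "op_prod n ?L (map (\<lambda>j. Mon_diag n d \<eta> \<xi> N m j (lam - of_nat j * \<eta>)) [0..<m])"
  let ?DD = "op_prod n ?L (map (\<lambda>j. diag_op (\<lambda>x. d (x ! j))) [0..<m])"
  let ?ls = "rev [1..<N+1]"
  let ?Xs = "op_prod n ?L (map (site_R_chain n \<eta> \<xi> N m lam) ?ls)"
  let ?Z = "\<lambda>l. fused_R m \<eta> (m + l - 1) (lam - \<xi> l)"
  let ?Zs = "op_prod n ?L (map ?Z ?ls)"
  let ?c = "\<lambda>l. \<Prod>j\<in>{1..<m}. (lam - \<xi> l) - of_nat j * \<eta>"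
  have zN: "?z \<in> cfgs n N" by (rule zeros_cfgs[OF n0])
  have sp: "op_eq n ?L (op_mult n ?L ?Xs ?P) (\<lambda>x y. prod_list (map ?c ?ls) * op_mult n ?L ?Zs ?P x y)"
  proof (rule R_chains_antisym)
    fix l assume "l \<in> set ?ls"
    hence l: "1 \<le> l" "l \<le> N" by auto
    show "op_eq n ?L (op_mult n ?L (site_R_chain n \<eta> \<xi> N m lam l) ?P) (\<lambda>x y. ?c l * op_mult n ?L (?Z l) ?P x y)"
      by (rule site_R_chain_antisym[OF m1 l])
    show "op_comm n ?L ?P (?Z l)" by (rule op_comm_antisym_fused_R) (use l in auto)
  qed
  have row: "op_mult n ?L ?Y ?P (a @ ?z) (a @ ?z)
     = (\<Prod>j\<leftarrow>[0..<m]. d (a ! j)) * (prod_list (map ?c ?ls) *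
         ((\<Prod>l\<leftarrow>?ls. (lam - \<xi> l) + \<eta> * of_nat (zero_count a)) * antisym m a a))"
    if a: "a \<in> cfgs n m" for a
  proof -
    have az: "a @ ?z \<in> cfgs n ?L" by (rule append_cfgs[OF a zN])
    have la: "length a = m" by (rule cfgs_len[OF a])
    have "op_mult n ?L ?Y ?P (a @ ?z) (a @ ?z) = op_mult n ?L (op_mult n ?L ?DD ?Xs) ?P (a @ ?z) (a @ ?z)"
      by (rule op_eqD[OF op_mult_cong_l[OF Mon_diag_regroup] az az])
    also have "\<dots> = op_mult n ?L ?DD (op_mult n ?L ?Xs ?P) (a @ ?z) (a @ ?z)"
      by (simp add: op_mult_assoc)
    also have "\<dots> = op_mult n ?L ?DD (\<lambda>x y. prod_list (map ?c ?ls) * op_mult n ?L ?Zs ?P x y) (a @ ?z) (a @ ?z)"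
      by (rule op_eqD[OF op_mult_cong_r[OF sp] az az])
    also have "\<dots> = op_mult n ?L (diag_op (\<lambda>x. \<Prod>j\<leftarrow>[0..<m]. d (x ! j))) (\<lambda>x y. prod_list (map ?c ?ls) * op_mult n ?L ?Zs ?P x y) (a @ ?z) (a @ ?z)"
      by (rule op_eqD[OF op_mult_cong_l[OF op_prod_diag] az az])
    also have "\<dots> = (\<Prod>j\<leftarrow>[0..<m]. d ((a @ ?z) ! j)) * (prod_list (map ?c ?ls) * op_mult n ?L ?Zs ?P (a @ ?z) (a @ ?z))"
      by (rule diag_op_mult[OF az])
    also have "(\<Prod>j\<leftarrow>[0..<m]. d ((a @ ?z) ! j)) = (\<Prod>j\<leftarrow>[0..<m]. d (a ! j))"
      by (rule arg_cong[where f=prod_list], rule map_cong) (auto simp: nth_append la)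
    also have "op_mult n ?L ?Zs ?P (a @ ?z) (a @ ?z)
        = (\<Prod>l\<leftarrow>?ls. (lam - \<xi> l) + \<eta> * of_nat (zero_count a)) * antisym m a a"
      by (rule fused_R_prod_antisym_vac[OF n0 a])
    finally show ?thesis .
  qed
  have "(\<Sum>a\<in>cfgs n m. fused_diag n d \<eta> \<xi> N m lam (a @ ?z) (a @ ?z)) = (\<Sum>a\<in>cfgs n m. op_mult n ?L ?P ?Y (a @ ?z) (a @ ?z))"
    unfolding fused_diag_def by simp
  also have "\<dots> = (\<Sum>a\<in>cfgs n m. op_mult n ?L ?Y ?P (a @ ?z) (a @ ?z))" by (rule ptrace_antisym_swap[OF zN])
  finally show ?thesis using row by simp
qed

lemma bij_Perms_lcomp:
  assumes t: "\<tau> permutes {..<m}" and inv: "\<tau> o \<tau> = id"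
  shows "bij_betw (\<lambda>\<sigma>. \<tau> o \<sigma>) (Perms m) (Perms m)"
proof (rule bij_betw_byWitness[where f' = "\<lambda>\<sigma>. \<tau> o \<sigma>"])
  show "\<forall>a\<in>Perms m. \<tau> o (\<tau> o a) = a" using inv by (simp add: o_assoc)
  thus "\<forall>a\<in>Perms m. \<tau> o (\<tau> o a) = a" .
  show "(\<lambda>\<sigma>. \<tau> o \<sigma>) ` Perms m \<subseteq> Perms m" using t by (auto intro: permutes_compose)
  thus "(\<lambda>\<sigma>. \<tau> o \<sigma>) ` Perms m \<subseteq> Perms m" .
qed

lemma antisym_diag:
  assumes a: "length a = m"
  shows "antisym m a a = (if distinct a then 1 / of_nat (fact m) else 0)"
proof (cases "distinct a")
  case True
  have "(\<Sum>\<sigma>\<in>Perms m. of_int (sign \<sigma>) * perm_op \<sigma> a a) = (\<Sum>\<sigma>\<in>Perms m. if \<sigma> = id then 1 else (0::complex))"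
  proof (rule sum.cong[OF refl])
    fix \<sigma> assume "\<sigma> \<in> Perms m"
    hence s: "\<sigma> permutes {..<m}" by simp
    have "a = permute_list \<sigma> a \<longleftrightarrow> \<sigma> = id"
    proof
      assume e: "a = permute_list \<sigma> a"
      show "\<sigma> = id"
      proof
        fix i show "\<sigma> i = id i"
        proof (cases "i < m")
          case True
          have "a ! i = a ! \<sigma> i" using e True a by (metis nth_permute_list)
          thus ?thesis using nth_eq_iff_index_eq[OF \<open>distinct a\<close>] True permutes_lt[OF s True] a by auto
        next
          case False thus ?thesis using s by (auto intro: permutes_not_in)
        qed
      qed
    qed simp
    thus "of_int (sign \<sigma>) * perm_op \<sigma> a a = (if \<sigma> = id then 1 else 0)"
      by (auto simp: perm_op_permute_list sign_id)
  qed
  also have "\<dots> = 1" using permutes_id[of "{..<m}"] by simp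
  finally show ?thesis using True unfolding antisym_def by simp
next
  case False
  then obtain i j where ij: "i < m" "j < m" "i \<noteq> j" "a ! i = a ! j"
    using a by (auto simp: distinct_conv_nth)
  let ?t = "tp i j"
  have t: "?t permutes {..<m}" using ij by (intro tp_permutes) auto
  have tt: "?t o ?t = id" by simp
  let ?f = "\<lambda>\<sigma>. of_int (sign \<sigma>) * perm_op \<sigma> a a :: complex"
  have neg: "?f (?t o \<sigma>) = - ?f \<sigma>" if s: "\<sigma> \<in> Perms m" for \<sigma>
  proof -
    have sp: "\<sigma> permutes {..<m}" using s by simp
    have "sign (?t o \<sigma>) = sign ?t * sign \<sigma>"
    proof -
      have "permutation ?t" "permutation \<sigma>" using t sp permutation_permutes by blast+
      thus ?thesis by (rule sign_compose)
    qed
    hence sg: "sign (?t o \<sigma>) = - sign \<sigma>" using ij by (simp add: sign_swap_id)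
    have pta: "permute_list ?t a = a"
      by (rule nth_equalityI) (use ij a in \<open>auto simp: Transposition.transpose_def\<close>)
    have "permute_list (?t o \<sigma>) a = permute_list \<sigma> (permute_list ?t a)" using permute_list_compose[of \<sigma> a ?t, symmetric] sp a by simp
    hence "permute_list (?t o \<sigma>) a = permute_list \<sigma> a" using pta by simp
    thus ?thesis using sg by (simp add: perm_op_permute_list)
  qed
  have "(\<Sum>\<sigma>\<in>Perms m. ?f \<sigma>) = (\<Sum>\<sigma>\<in>Perms m. ?f (?t o \<sigma>))"
    by (rule sum.reindex_bij_betw[symmetric, OF bij_Perms_lcomp[OF t tt]])
  also have "\<dots> = - (\<Sum>\<sigma>\<in>Perms m. ?f \<sigma>)" by (simp add: neg sum_negf)
  finally have "(\<Sum>\<sigma>\<in>Perms m. ?f \<sigma>) = 0" by simp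
  thus ?thesis using False unfolding antisym_def by simp
qed

lemma sum_antisym_diag_subsets:
  fixes G :: "nat set \<Rightarrow> complex"
  assumes H: "\<And>a. a \<in> cfgs n m \<Longrightarrow> distinct a \<Longrightarrow> H a = G (set a)"
  shows "(\<Sum>a\<in>cfgs n m. H a * antisym m a a) = (\<Sum>S\<in>{S. S \<subseteq> {..<n} \<and> card S = m}. G S)"
proof -
  let ?D = "{a\<in>cfgs n m. distinct a}"
  let ?I = "{S. S \<subseteq> {..<n} \<and> card S = m}"
  have fI: "finite ?I" by (rule finite_subset[of _ "Pow {..<n}"]) auto
  have "(\<Sum>a\<in>cfgs n m. H a * antisym m a a) = (\<Sum>a\<in>?D. G (set a) / of_nat (fact m))"
    by (rule sum.mono_neutral_cong_right) (auto simp: antisym_diag cfgs_len H split: if_splits)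
  also have "?D = (\<Union>S\<in>?I. permutations_of_set S)"
  proof
    show "?D \<subseteq> (\<Union>S\<in>?I. permutations_of_set S)"
    proof
      fix a assume a: "a \<in> ?D"
      hence "set a \<in> ?I" "a \<in> permutations_of_set (set a)"
        using distinct_card[of a] by (auto simp: cfgs_def permutations_of_set_def)
      thus "a \<in> (\<Union>S\<in>?I. permutations_of_set S)" by blast
    qed
    show "(\<Union>S\<in>?I. permutations_of_set S) \<subseteq> ?D"
    proof
      fix a assume "a \<in> (\<Union>S\<in>?I. permutations_of_set S)"
      then obtain S where S: "S \<in> ?I" "set a = S" "distinct a" by (auto simp: permutations_of_set_def)
      thus "a \<in> ?D" using distinct_card[of a] by (auto simp: cfgs_def)
    qed
  qed
  also have "(\<Sum>a\<in>(\<Union>S\<in>?I. permutations_of_set S). G (set a) / of_nat (fact m))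
      = (\<Sum>S\<in>?I. \<Sum>a\<in>permutations_of_set S. G (set a) / of_nat (fact m))"
  proof (rule sum.UNION_disjoint[OF fI])
    show "\<forall>S\<in>?I. finite (permutations_of_set S)" by simp
    show "\<forall>S\<in>?I. \<forall>S'\<in>?I. S \<noteq> S' \<longrightarrow> permutations_of_set S \<inter> permutations_of_set S' = {}"
      unfolding permutations_of_set_def by blast
  qed
  also have "\<dots> = (\<Sum>S\<in>?I. G S)"
  proof (rule sum.cong[OF refl])
    fix S assume S: "S \<in> ?I"
    have fS: "finite S" using S finite_subset by blast
    have "(\<Sum>a\<in>permutations_of_set S. G (set a) / of_nat (fact m)) = (\<Sum>a\<in>permutations_of_set S. G S / of_nat (fact m))"
      by (rule sum.cong) (auto simp: permutations_of_set_def)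
    also have "\<dots> = G S" using S fS by simp
    finally show "(\<Sum>a\<in>permutations_of_set S. G (set a) / of_nat (fact m)) = G S" .
  qed
  finally show ?thesis .
qed

lemma zero_count_distinct: "distinct a \<Longrightarrow> zero_count a = (if 0 \<in> set a then 1 else 0)"
proof -
  assume d: "distinct a"
  show ?thesis
  proof (cases "0 \<in> set a")
    case True
    then obtain p where p: "p < length a" "a ! p = 0" by (auto simp: in_set_conv_nth)
    have "{q. q < length a \<and> a ! q = 0} = {p}"
      using p nth_eq_iff_index_eq[OF d] by force
    thus ?thesis using True by (simp add: zero_count_def)
  next
    case False
    hence "{q. q < length a \<and> a ! q = 0} = {}" by (auto simp: in_set_conv_nth)
    thus ?thesis using False by (simp add: zero_count_def)
  qed
qed

lemma prod_distinct_nth: "distinct a \<Longrightarrow> length a = m \<Longrightarrow> (\<Prod>j\<leftarrow>[0..<m]. d (a ! j)) = (\<Prod>i\<in>set a. d i)"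
proof -
  assume d: "distinct a" and l: "length a = m"
  have "map (\<lambda>j. d (a ! j)) [0..<m] = map d a" using l by (intro nth_equalityI) auto
  thus ?thesis using prod.distinct_set_conv_list[OF d, of d] by simp
qed

definition site_prod :: "nat \<Rightarrow> (nat \<Rightarrow> complex) \<Rightarrow> complex \<Rightarrow> complex" where
  "site_prod N \<xi> \<mu> = (\<Prod>b=1..N. \<mu> - \<xi> b)"

definition elem_sym :: "nat \<Rightarrow> (nat \<Rightarrow> complex) \<Rightarrow> nat \<Rightarrow> complex" where
  "elem_sym n d k = (\<Sum>S\<in>{S. S \<subseteq> {1..<n} \<and> card S = k}. \<Prod>i\<in>S. d i)"

text \<open>The closed form of the eigenvalue \<open>t\<^sub>m\<^sub>,\<^sub>0(\<lambda>)\<close>; \<open>e\<close> is the sequence of elementary symmetric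
  polynomials in the diagonal entries of \<open>K\<^sub>J\<close> other than \<open>k\<^sub>1\<close>.\<close>
definition tm_closed ::
    "nat \<Rightarrow> complex \<Rightarrow> (nat \<Rightarrow> complex) \<Rightarrow> complex \<Rightarrow> (nat \<Rightarrow> complex) \<Rightarrow> nat \<Rightarrow> complex \<Rightarrow> complex" where
  "tm_closed N \<eta> \<xi> k1 e m lam = (\<Prod>j\<in>{1..<m}. site_prod N \<xi> (lam - of_nat j * \<eta>)) *
     (k1 * e (m - 1) * site_prod N \<xi> (lam + \<eta>) + e m * site_prod N \<xi> lam)"

lemma site_prod_0 [simp]: "site_prod 0 \<xi> \<mu> = 1"
  by (simp add: site_prod_def)

lemma site_prod_node: "a \<in> {1..N} \<Longrightarrow> site_prod N \<xi> (\<xi> a) = 0"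
  unfolding site_prod_def by (auto intro: prod_zero)

lemma prod_list_rev_upt: "prod_list (map f (rev [1..<N+1])) = (\<Prod>l=1..N. f l :: complex)"
proof -
  have "prod_list (map f (rev [1..<N+1])) = prod_list (map f [1..<N+1])"
    by (simp add: rev_map[symmetric] prod_list.rev)
  also have "\<dots> = prod f (set [1..<N+1])" by (rule prod.distinct_set_conv_list[symmetric]) simp
  also have "set [1..<N+1] = {1..N}" by auto
  finally show ?thesis .
qed

lemma finite_card_subsets: "finite A \<Longrightarrow> finite {S. S \<subseteq> A \<and> card S = k}"
  by (rule finite_subset[of _ "Pow A"]) auto

lemma card_subsets_without_0:
  fixes n m :: nat
  shows "{S. S \<subseteq> {..<n} \<and> card S = m} - {S. 0 \<in> S} = {S. S \<subseteq> {1..<n} \<and> card S = m}"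
proof -
  have "S \<subseteq> {1..<n}" if "S \<subseteq> {..<n}" "0 \<notin> S" for S :: "nat set"
  proof
    fix i assume "i \<in> S"
    moreover have "i \<noteq> 0" using \<open>i \<in> S\<close> that(2) by (cases i) auto
    ultimately show "i \<in> {1..<n}" using that(1) by auto
  qed
  thus ?thesis by auto
qed

lemma card_subsets_with_0:
  fixes n m :: nat
  assumes "0 < n" "1 \<le> m"
  shows "{S. S \<subseteq> {..<n} \<and> card S = m} \<inter> {S. 0 \<in> S} = insert 0 ` {S. S \<subseteq> {1..<n} \<and> card S = m - 1}"
proof
  show "{S. S \<subseteq> {..<n} \<and> card S = m} \<inter> {S. 0 \<in> S} \<subseteq> insert 0 ` {S. S \<subseteq> {1..<n} \<and> card S = m - 1}"
  proof
    fix S assume S: "S \<in> {S. S \<subseteq> {..<n} \<and> card S = m} \<inter> {S. 0 \<in> S}"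
    have "S \<subseteq> {..<n}" "card S = m" "0 \<in> S" using S by auto
    have "S - {0} \<subseteq> {1..<n}"
    proof
      fix i assume "i \<in> S - {0}"
      thus "i \<in> {1..<n}" using \<open>S \<subseteq> {..<n}\<close> by auto
    qed
    moreover have "card (S - {0}) = m - 1"
      using \<open>S \<subseteq> {..<n}\<close> \<open>card S = m\<close> \<open>0 \<in> S\<close> finite_subset by fastforce
    ultimately show "S \<in> insert 0 ` {S. S \<subseteq> {1..<n} \<and> card S = m - 1}"
      using \<open>0 \<in> S\<close> by (intro image_eqI[of _ _ "S - {0}"]) auto
  qed
  show "insert 0 ` {S. S \<subseteq> {1..<n} \<and> card S = m - 1} \<subseteq> {S. S \<subseteq> {..<n} \<and> card S = m} \<inter> {S. 0 \<in> S}"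
  proof
    fix S assume "S \<in> insert 0 ` {S. S \<subseteq> {1..<n} \<and> card S = m - 1}"
    then obtain T where T: "T \<subseteq> {1..<n}" "card T = m - 1" "S = insert 0 T" by auto
    have "finite T" "0 \<notin> T" using T(1) finite_subset by auto
    hence "card S = m" using T(2,3) assms(2) by simp
    moreover have "S \<subseteq> {..<n}" using T(1,3) assms(1) by auto
    ultimately show "S \<in> {S. S \<subseteq> {..<n} \<and> card S = m} \<inter> {S. 0 \<in> S}" using T(3) by simp
  qed
qed

lemma sum_card_subsets_split_0:
  fixes F :: "bool \<Rightarrow> complex"
  assumes n0: "0 < n" and m1: "1 \<le> m"
  shows "(\<Sum>S\<in>{S. S \<subseteq> {..<n} \<and> card S = m}. (\<Prod>i\<in>S. d i) * F (0 \<in> S))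
       = d 0 * elem_sym n d (m - 1) * F True + elem_sym n d m * F False"
proof -
  let ?I = "{S. S \<subseteq> {..<n} \<and> card S = m}" and ?I1 = "{S. S \<subseteq> {1..<n} \<and> card S = m - 1}"
  let ?f = "\<lambda>S. (\<Prod>i\<in>S. d i) * F (0 \<in> S)"
  have inj: "inj_on (insert 0) ?I1"
  proof (rule inj_onI)
    fix S T assume "S \<in> ?I1" "T \<in> ?I1" and "insert 0 S = insert 0 T"
    moreover have "0 \<notin> S" "0 \<notin> T" using calculation(1,2) by auto
    ultimately show "S = T" by (metis Diff_insert_absorb)
  qed
  have "sum ?f ?I = sum ?f (?I \<inter> {S. 0 \<in> S}) + sum ?f (?I - {S. 0 \<in> S})"
    by (rule sum.Int_Diff) (simp add: finite_card_subsets)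
  also have "sum ?f (?I \<inter> {S. 0 \<in> S}) = (\<Sum>T\<in>?I1. d 0 * (\<Prod>i\<in>T. d i) * F True)"
  proof -
    have "sum ?f (?I \<inter> {S. 0 \<in> S}) = sum (?f \<circ> insert 0) ?I1"
      unfolding card_subsets_with_0[OF n0 m1] by (rule sum.reindex[OF inj])
    also have "\<dots> = (\<Sum>T\<in>?I1. d 0 * (\<Prod>i\<in>T. d i) * F True)"
    proof (rule sum.cong[OF refl])
      fix T assume "T \<in> ?I1"
      hence "finite T" "0 \<notin> T" using finite_subset[of T "{1..<n}"] by auto
      thus "(?f \<circ> insert 0) T = d 0 * (\<Prod>i\<in>T. d i) * F True" by simp
    qed
    finally show ?thesis .
  qed
  also have "sum ?f (?I - {S. 0 \<in> S}) = elem_sym n d m * F False"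
    unfolding card_subsets_without_0 elem_sym_def sum_distrib_right
  proof (rule sum.cong[OF refl])
    fix S assume "S \<in> {S. S \<subseteq> {1..<n} \<and> card S = m}"
    hence "0 \<notin> S" by auto
    thus "?f S = (\<Prod>i\<in>S. d i) * F False" by simp
  qed
  finally show ?thesis
    by (simp add: elem_sym_def sum_distrib_left sum_distrib_right mult.assoc)
qed

lemma elem_sym_0 [simp]: "elem_sym n d 0 = 1"
proof -
  have "{S. S \<subseteq> {1..<n} \<and> card S = 0} = {{}}"
  proof
    show "{S. S \<subseteq> {1..<n} \<and> card S = 0} \<subseteq> {{}}"
      using finite_subset[of _ "{1..<n}"] by fastforce
  qed auto
  thus ?thesis unfolding elem_sym_def by simp
qed

lemma elem_sym_1: "elem_sym n d 1 = (\<Sum>i\<in>{1..<n}. d i)"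
proof -
  have "{S. S \<subseteq> {1..<n} \<and> card S = 1} = (\<lambda>i. {i}) ` {1..<n}" by (auto simp: card_Suc_eq)
  thus ?thesis unfolding elem_sym_def by (simp add: sum.reindex inj_on_def)
qed

lemma elem_sym_top: "elem_sym n d (n - 1) = (\<Prod>i\<in>{1..<n}. d i)"
proof -
  have "{S. S \<subseteq> {1..<n} \<and> card S = n - 1} = {{1..<n}}"
  proof
    show "{S. S \<subseteq> {1..<n} \<and> card S = n - 1} \<subseteq> {{1..<n}}"
    proof
      fix S assume S: "S \<in> {S. S \<subseteq> {1..<n} \<and> card S = n - 1}"
      have "S = {1..<n}" by (rule card_subset_eq) (use S in auto)
      thus "S \<in> {{1..<n}}" by simp
    qed
  qed auto
  thus ?thesis unfolding elem_sym_def by simp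
qed

lemma elem_sym_beyond: "0 < n \<Longrightarrow> elem_sym n d n = 0"
proof -
  assume n0: "0 < n"
  have e: "{S. S \<subseteq> {1..<n} \<and> card S = n} = {}"
  proof (rule ccontr)
    assume "{S. S \<subseteq> {1..<n} \<and> card S = n} \<noteq> {}"
    then obtain S where "S \<subseteq> {1..<n}" "card S = n" by auto
    moreover have "card S \<le> card {1..<n}" by (rule card_mono) (use calculation in auto)
    ultimately show False using n0 by simp
  qed
  show ?thesis unfolding elem_sym_def e by simp
qed

lemma Tm_diag_vac_trace:
  assumes n0: "0 < n" and m1: "1 \<le> m"
  shows "(\<Sum>a\<in>cfgs n m. fused_diag n d \<eta> \<xi> N m lam (a @ replicate N 0) (a @ replicate N 0))
       = tm_closed N \<eta> \<xi> (d 0) (elem_sym n d) m lam"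
proof -
  let ?C = "\<Prod>j\<in>{1..<m}. site_prod N \<xi> (lam - of_nat j * \<eta>)"
  let ?F = "\<lambda>b. if b then site_prod N \<xi> (lam + \<eta>) else site_prod N \<xi> lam"
  have C: "(\<Prod>l\<leftarrow>rev [1..<N+1]. \<Prod>j\<in>{1..<m}. (lam - \<xi> l) - of_nat j * \<eta>) = ?C"
    unfolding prod_list_rev_upt site_prod_def by (subst prod.swap) (simp add: algebra_simps)
  have F: "(\<Prod>l\<leftarrow>rev [1..<N+1]. (lam - \<xi> l) + \<eta> * of_nat (zero_count a)) = ?F (0 \<in> set a)"
    if "distinct a" for a
    unfolding prod_list_rev_upt site_prod_def zero_count_distinct[OF that] by (simp add: algebra_simps)
  have "(\<Sum>a\<in>cfgs n m. fused_diag n d \<eta> \<xi> N m lam (a @ replicate N 0) (a @ replicate N 0))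
      = (\<Sum>a\<in>cfgs n m. ((\<Prod>j\<leftarrow>[0..<m]. d (a ! j)) * (?C *
          (\<Prod>l\<leftarrow>rev [1..<N+1]. (lam - \<xi> l) + \<eta> * of_nat (zero_count a)))) * antisym m a a)"
    unfolding fused_diag_vac_trace[OF n0 m1] C by (simp only: mult.assoc)
  also have "\<dots> = (\<Sum>S\<in>{S. S \<subseteq> {..<n} \<and> card S = m}. (\<Prod>i\<in>S. d i) * (?C * ?F (0 \<in> S)))"
  proof (rule sum_antisym_diag_subsets)
    fix a assume a: "a \<in> cfgs n m" and d: "distinct a"
    show "(\<Prod>j\<leftarrow>[0..<m]. d (a ! j)) * (?C * (\<Prod>l\<leftarrow>rev [1..<N+1]. (lam - \<xi> l) + \<eta> * of_nat (zero_count a)))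
        = (\<Prod>i\<in>set a. d i) * (?C * ?F (0 \<in> set a))"
      by (simp only: prod_distinct_nth[OF d cfgs_len[OF a]] F[OF d])
  qed
  also have "\<dots> = ?C * (\<Sum>S\<in>{S. S \<subseteq> {..<n} \<and> card S = m}. (\<Prod>i\<in>S. d i) * ?F (0 \<in> S))"
    by (simp add: sum_distrib_left mult.left_commute)
  also have "\<dots> = ?C * (d 0 * elem_sym n d (m - 1) * ?F True + elem_sym n d m * ?F False)"
    using sum_card_subsets_split_0[OF n0 m1, of d ?F] by simp
  finally show ?thesis unfolding tm_closed_def by simp
qed

section \<open>Triangularisation of the twist\<close>

lemma mat_trace_mult_comm:
  assumes "A \<in> carrier_mat n n" "B \<in> carrier_mat n n"
  shows "mat_trace (A * B) = mat_trace (B * A)"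
proof -
  have tr: "mat_trace (X * Y) = (\<Sum>i<n. \<Sum>k<n. X $$ (i, k) * Y $$ (k, i))"
    if X: "X \<in> carrier_mat n n" and Y: "Y \<in> carrier_mat n n" for X Y :: "complex mat"
  proof -
    have "(X * Y) $$ (i, i) = (\<Sum>k<n. X $$ (i, k) * Y $$ (k, i))" if "i < n" for i
      by (rule mat_mult_entry[OF X Y that that])
    thus ?thesis unfolding mat_trace_def using X by simp
  qed
  show ?thesis unfolding tr[OF assms] tr[OF assms(2,1)] by (subst sum.swap) (simp add: mult.commute)
qed

lemma eigen_unit_vec_diag_entry:
  fixes A :: "'a :: semiring_1 mat"
  assumes A: "A \<in> carrier_mat n n" and i: "i < n" and eig: "A *\<^sub>v unit_vec n i = k \<cdot>\<^sub>v unit_vec n i"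
  shows "k = A $$ (i, i)"
proof -
  have "(A *\<^sub>v unit_vec n i) $ i = row A i \<bullet> unit_vec n i" using A i by (simp add: index_mult_mat_vec)
  also have "\<dots> = row A i $ i" using i by (rule scalar_prod_right_unit)
  also have "\<dots> = A $$ (i, i)" using A i by (intro index_row(1)) auto
  finally show ?thesis using eig i by simp
qed

lemma jordan_matrix_upper:
  assumes "jordan_matrix n_as \<in> carrier_mat n n" "i < n" "j < i"
  shows "jordan_matrix n_as $$ (i, j) = 0"
proof -
  have "sum_list (map fst n_as) = n" using assms(1) jordan_matrix_dim(1)[of n_as] by auto
  thus ?thesis using assms(2,3) by (intro jordan_matrix_upper_triangular) auto
qed

locale jordan_twist =
  fixes n :: nat and K KJ W V :: "complex mat"
  assumes n_pos: "0 < n" and K: "K \<in> carrier_mat n n"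
    and sim: "similar_mat_wit K KJ W V"
    and upper: "\<And>i j. i < n \<Longrightarrow> j < n \<Longrightarrow> j < i \<Longrightarrow> KJ $$ (i, j) = 0"
begin

lemma carriers: "KJ \<in> carrier_mat n n" "W \<in> carrier_mat n n" "V \<in> carrier_mat n n"
  and W_V: "W * V = 1\<^sub>m n" and V_W: "V * W = 1\<^sub>m n" and K_eq: "K = W * KJ * V"
  using similar_mat_witD2[OF K sim] by auto

lemma K_W: "K * W = W * KJ"
proof -
  have "K * W = (W * KJ) * (V * W)"
    unfolding K_eq by (rule assoc_mult_mat[of "W * KJ" n n V n W n]) (use carriers in simp_all)
  also have "\<dots> = W * KJ" using V_W carriers by simp
  finally show ?thesis .
qed

abbreviation esym :: "nat \<Rightarrow> complex" where
  "esym \<equiv> elem_sym n (\<lambda>i. KJ $$ (i, i))"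

lemma Tm_vac_eigen:
  assumes m: "1 \<le> m" and x: "x \<in> cfgs n N"
  shows "op_app n N (Tm n K \<eta> \<xi> N m lam) (op_app n N (tensor_op W) vac) x
       = tm_closed N \<eta> \<xi> (KJ $$ (0, 0)) esym m lam * op_app n N (tensor_op W) vac x"
proof -
  let ?t = "\<Sum>a\<in>cfgs n m. fused_diag n (\<lambda>i. KJ $$ (i, i)) \<eta> \<xi> N m lam (a @ replicate N 0) (a @ replicate N 0)"
  have "op_app n N (Tm n K \<eta> \<xi> N m lam) (op_app n N (tensor_op W) vac) x
      = op_app n N (tensor_op W) (op_app n N (Tm n KJ \<eta> \<xi> N m lam) vac) x"
    by (rule Tm_tensor_conj[OF carriers(2,3) W_V V_W K carriers(1) K_W x])
  also have "\<dots> = ?t * op_app n N (tensor_op W) vac x"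
    unfolding op_app_def[of n N "tensor_op W"] sum_distrib_left
    by (rule sum.cong[OF refl]) (simp add: Tm_vac_weight_diag[OF upper refl n_pos] algebra_simps)
  also have "?t = tm_closed N \<eta> \<xi> (KJ $$ (0, 0)) esym m lam"
    by (rule Tm_diag_vac_trace[OF n_pos m])
  finally show ?thesis .
qed

text \<open>\<open>T\<^sub>m\<^sup>(\<^sup>K\<^sup>,\<^sup>\<infinity>\<^sup>)\<close> is the fused transfer matrix of a chain without sites.\<close>
lemma Tinf_closed: "1 \<le> m \<Longrightarrow> Tinf n K m = KJ $$ (0, 0) * esym (m - 1) + esym m"
proof -
  assume m: "1 \<le> m"
  have app0: "op_app n 0 A v [] = A [] [] * v []" for A v unfolding op_app_def by simp
  have "Tm n K 0 (\<lambda>_. 0) 0 m 0 [] [] = tm_closed 0 0 (\<lambda>_. 0) (KJ $$ (0, 0)) esym m 0"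
    using Tm_vac_eigen[OF m, of "[]" 0 0 "\<lambda>_. 0" 0] by (simp add: app0 tensor_op_def vac_def)
  moreover have mon: "Mon n K 0 (\<lambda>_. 0) 0 m j \<mu> = op_mult n m (loc_op K j) op_id" for j \<mu>
    unfolding Mon_def by simp
  have "op_eq n m (op_prod n m (antisym m # map (\<lambda>j. Mon n K 0 (\<lambda>_. 0) 0 m j (0 - of_nat j * 0)) [0..<m]))
                (op_prod n m (antisym m # map (loc_op K) [0..<m]))"
    unfolding mon
    by (rule op_prod_cong, simp, intro conjI list_all2_map_same, simp_all add: op_eq_id_right)
  hence "Tm n K 0 (\<lambda>_. 0) 0 m 0 [] [] = Tinf n K m"
    unfolding Tm_def Tinf_def ptrace_def by (simp add: op_eqD)
  ultimately show ?thesis by (simp add: tm_closed_def)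
qed

lemma trace_K: "mat_trace K = KJ $$ (0, 0) + esym 1"
proof -
  have "mat_trace K = mat_trace ((W * KJ) * V)" using K_eq by simp
  also have "\<dots> = mat_trace (V * (W * KJ))" by (rule mat_trace_mult_comm) (use carriers in auto)
  also have "V * (W * KJ) = KJ" using carriers V_W by (simp add: assoc_mult_mat[symmetric, of V n n W n KJ n])
  also have "mat_trace KJ = (\<Sum>i\<in>insert 0 {1..<n}. KJ $$ (i, i))"
    unfolding mat_trace_def using carriers(1) n_pos by (intro sum.cong) auto
  finally show ?thesis unfolding elem_sym_1 by simp
qed

lemma det_K: "det K = KJ $$ (0, 0) * esym (n - 1)"
proof -
  have "det K = det KJ" by (rule det_similar) (use sim in \<open>auto simp: similar_mat_def\<close>)
  also have "\<dots> = prod_list (diag_mat KJ)"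
    by (rule det_upper_triangular[OF _ carriers(1)]) (use upper carriers in \<open>auto simp: upper_triangular_def\<close>)
  also have "\<dots> = (\<Prod>i\<in>{0..<n}. KJ $$ (i, i))"
    unfolding diag_mat_def using carriers(1) by (simp add: prod.distinct_set_conv_list[symmetric])
  also have "{0..<n} = insert 0 {1..<n}" using n_pos by auto
  finally show ?thesis unfolding elem_sym_top by simp
qed

lemma vac_image_nonzero: "\<exists>x\<in>cfgs n N. op_app n N (tensor_op W) vac x \<noteq> 0"
proof -
  obtain i where i: "i < n" "W $$ (i, 0) \<noteq> 0"
  proof (rule ccontr)
    assume "\<not> thesis"
    hence "\<forall>i<n. W $$ (i, 0) = 0" using that by blast
    have "(V * W) $$ (0, 0) = (\<Sum>k<n. V $$ (0, k) * W $$ (k, 0))"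
      by (rule mat_mult_entry[OF carriers(3,2) n_pos n_pos])
    also have "\<dots> = 0" using \<open>\<forall>i<n. W $$ (i, 0) = 0\<close> by simp
    finally show False using V_W n_pos by simp
  qed
  have "op_app n N (tensor_op W) vac (replicate N i)
      = (\<Sum>y\<in>cfgs n N. if y = replicate N 0 then tensor_op W (replicate N i) (replicate N 0) else 0)"
    unfolding op_app_def by (rule sum.cong[OF refl]) (auto simp: vac_cfgs)
  also have "\<dots> = W $$ (i, 0) ^ N" using zeros_cfgs[OF n_pos] by (simp add: tensor_op_def)
  finally show ?thesis using i by (intro bexI[of _ "replicate N i"]) (auto simp: cfgs_def)
qed

end

section \<open>Solving the recursion\<close>

lemma poly_eq_0_if_roots:
  fixes p :: "complex poly"
  assumes inj: "inj_on f A" and A: "finite A" and roots: "\<And>a. a \<in> A \<Longrightarrow> poly p (f a) = 0"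
    and deg: "degree p < card A"
  shows "p = 0"
proof (rule ccontr)
  assume "p \<noteq> 0"
  have "card (f ` A) \<le> card {x. poly p x = 0}"
    using roots poly_roots_finite[OF \<open>p \<noteq> 0\<close>] by (intro card_mono) auto
  also have "\<dots> \<le> degree p" by (rule card_poly_roots_bound[OF \<open>p \<noteq> 0\<close>])
  finally show False using deg card_image[OF inj] by simp
qed

lemma degree_diff_monic_le:
  fixes p q :: "'a :: comm_ring_1 poly"
  assumes "degree p = N" "degree q = N" "lead_coeff p = 1" "lead_coeff q = 1"
  shows "degree (p - q) \<le> N - 1"
proof (rule degree_le, intro allI impI)
  fix i assume i: "N - 1 < i"
  show "Polynomial.coeff (p - q) i = 0"
  proof (cases "i = N")
    case False
    hence "N < i" using i by simp
    thus ?thesis using assms(1,2) by (simp add: coeff_eq_0)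
  qed (use assms in simp)
qed

text \<open>Lagrange interpolation of the polynomial \<open>\<mu> \<mapsto> \<Prod>\<^sub>b (\<mu> - \<xi> b + \<eta>) - \<Prod>\<^sub>b (\<mu> - \<xi> b)\<close>,
  of degree \<open>< N\<close>, at the nodes \<open>\<xi> a\<close>.\<close>
lemma lagrange_shift:
  fixes \<xi> :: "nat \<Rightarrow> complex" and \<eta> lam :: complex
  assumes inj: "inj_on \<xi> {1..N}"
  shows "(\<Prod>b=1..N. lam - \<xi> b + \<eta>) = (\<Prod>b=1..N. lam - \<xi> b) +
     (\<Sum>a=1..N. (\<Prod>b\<in>{1..N}-{a}. (lam - \<xi> b) / (\<xi> a - \<xi> b)) * (\<Prod>b=1..N. \<xi> a - \<xi> b + \<eta>))"
proof (cases "N = 0")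
  case False
  define A where "A = (\<lambda>x. \<Prod>b=1..N. x - \<xi> b + \<eta>)"
  define c where "c = (\<lambda>a. A (\<xi> a) / (\<Prod>b\<in>{1..N}-{a}. \<xi> a - \<xi> b))"
  define P1 where "P1 = (\<Prod>b\<in>{1..N}. [:\<eta> - \<xi> b, 1:])"
  define P2 where "P2 = (\<Prod>b\<in>{1..N}. [:- \<xi> b, 1:])"
  define Q where "Q = (\<Sum>a\<in>{1..N}. Polynomial.smult (c a) (\<Prod>b\<in>{1..N}-{a}. [:- \<xi> b, 1:]))"
  define R where "R = P1 - P2 - Q"
  have polyR: "poly R x = A x - (\<Prod>b=1..N. x - \<xi> b) - (\<Sum>a=1..N. c a * (\<Prod>b\<in>{1..N}-{a}. x - \<xi> b))" for x
    unfolding R_def P1_def P2_def Q_def A_def by (simp add: poly_prod poly_sum algebra_simps)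
  have "degree P1 = N" "lead_coeff P1 = 1"
    unfolding P1_def by (subst degree_prod_sum_eq; simp) (simp add: lead_coeff_prod)
  moreover have "degree P2 = N" "lead_coeff P2 = 1"
    unfolding P2_def by (subst degree_prod_sum_eq; simp) (simp add: lead_coeff_prod)
  ultimately have "degree (P1 - P2) \<le> N - 1" by (intro degree_diff_monic_le)
  moreover have "degree Q \<le> N - 1"
    unfolding Q_def
  proof (rule degree_sum_le)
    fix a assume a: "a \<in> {1..N}"
    have "degree (\<Prod>b\<in>{1..N}-{a}. [:- \<xi> b, 1:]) = N - 1"
      by (subst degree_prod_sum_eq) (use a in auto)
    thus "degree (Polynomial.smult (c a) (\<Prod>b\<in>{1..N}-{a}. [:- \<xi> b, 1:])) \<le> N - 1"
      using degree_smult_le by metis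
  qed simp
  ultimately have "degree R \<le> N - 1" unfolding R_def by (rule degree_diff_le)
  hence deg: "degree R < card {1..N}" using False by simp
  have root: "poly R (\<xi> a) = 0" if a: "a \<in> {1..N}" for a
  proof -
    have D0: "(\<Prod>b=1..N. \<xi> a - \<xi> b) = 0" using a by (auto intro: prod_zero)
    have "(\<Sum>a'=1..N. c a' * (\<Prod>b\<in>{1..N}-{a'}. \<xi> a - \<xi> b)) = (\<Sum>a'=1..N. if a' = a then A (\<xi> a) else 0)"
    proof (rule sum.cong[OF refl])
      fix a' assume a': "a' \<in> {1..N}"
      show "c a' * (\<Prod>b\<in>{1..N}-{a'}. \<xi> a - \<xi> b) = (if a' = a then A (\<xi> a) else 0)"
      proof (cases "a' = a")
        case True
        have "\<xi> a - \<xi> b \<noteq> 0" if "b \<in> {1..N} - {a}" for b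
          using inj_onD[OF inj, of a b] a that by auto
        hence "(\<Prod>b\<in>{1..N}-{a}. \<xi> a - \<xi> b) \<noteq> 0" by simp
        thus ?thesis using True by (simp add: c_def)
      next
        case False
        have "(\<Prod>b\<in>{1..N}-{a'}. \<xi> a - \<xi> b) = 0" using False a by (auto intro: prod_zero)
        thus ?thesis using False by simp
      qed
    qed
    also have "\<dots> = A (\<xi> a)" using a by simp
    finally show ?thesis unfolding polyR D0 by simp
  qed
  have "R = 0" by (rule poly_eq_0_if_roots[OF inj _ root deg]) simp
  hence "A lam = (\<Prod>b=1..N. lam - \<xi> b) + (\<Sum>a=1..N. c a * (\<Prod>b\<in>{1..N}-{a}. lam - \<xi> b))"
    using polyR[of lam] by (simp add: algebra_simps)
  also have "(\<Sum>a=1..N. c a * (\<Prod>b\<in>{1..N}-{a}. lam - \<xi> b))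
     = (\<Sum>a=1..N. (\<Prod>b\<in>{1..N}-{a}. (lam - \<xi> b) / (\<xi> a - \<xi> b)) * (\<Prod>b=1..N. \<xi> a - \<xi> b + \<eta>))"
    by (rule sum.cong[OF refl]) (simp add: c_def A_def prod_dividef)
  finally show ?thesis unfolding A_def .
qed simp

lemma site_prod_plus: "site_prod N \<xi> (\<mu> + \<eta>) = (\<Prod>b=1..N. \<mu> - \<xi> b + \<eta>)"
  unfolding site_prod_def by (simp add: algebra_simps)

lemma prod_shift1:
  fixes f :: "nat \<Rightarrow> complex"
  shows "1 \<le> k \<Longrightarrow> (\<Prod>j\<in>{1..<k}. f (Suc j)) * f 1 = (\<Prod>r\<in>{1..k}. f r)"
proof (induction k rule: nat_induct_at_least)
  case (Suc k)
  have "(\<Prod>j\<in>{1..<Suc k}. f (Suc j)) = (\<Prod>j\<in>{1..<k}. f (Suc j)) * f (Suc k)"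
    using Suc.hyps by (simp add: prod.atLeastLessThan_Suc)
  moreover have "(\<Prod>r\<in>{1..Suc k}. f r) = (\<Prod>r\<in>{1..k}. f r) * f (Suc k)"
    using Suc.hyps by (simp add: prod.cl_ivl_Suc)
  ultimately show ?case using Suc.IH by (simp add: algebra_simps)
qed simp

lemma t10_site_prod: "t10 N \<eta> \<xi> k1 trK lam = k1 * site_prod N \<xi> (lam + \<eta>) + (trK - k1) * site_prod N \<xi> lam"
  unfolding t10_def site_prod_def by (simp add: algebra_simps)

lemma gfun_site_prod:
  "gfun N \<eta> \<xi> (Suc m) a lam = (\<Prod>b\<in>{1..N}-{a}. (lam - \<xi> b) / (\<xi> a - \<xi> b)) /
      (\<Prod>r\<in>{1..m}. site_prod N \<xi> (\<xi> a - of_nat r * \<eta>))"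
proof -
  have "(\<Prod>b=1..N. \<Prod>r=1..m. \<xi> a - \<xi> b - of_nat r * \<eta>) = (\<Prod>r\<in>{1..m}. site_prod N \<xi> (\<xi> a - of_nat r * \<eta>))"
    unfolding site_prod_def by (subst prod.swap) (simp add: algebra_simps)
  thus ?thesis unfolding gfun_def by (simp add: prod_dividef)
qed

lemma tm0_closed_form:
  fixes \<xi> :: "nat \<Rightarrow> complex" and e :: "nat \<Rightarrow> complex"
  assumes inj: "inj_on \<xi> {1..N}"
    and nz: "\<And>a r. a \<in> {1..N} \<Longrightarrow> 1 \<le> r \<Longrightarrow> r < n \<Longrightarrow> site_prod N \<xi> (\<xi> a - of_nat r * \<eta>) \<noteq> 0"
    and Tinf: "\<And>m. 1 \<le> m \<Longrightarrow> m \<le> n \<Longrightarrow> Tinfty m = k1 * e (m - 1) + e m"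
    and trK: "trK = k1 + e 1" and e0: "e 0 = 1"
  shows "1 \<le> m \<Longrightarrow> m \<le> n \<Longrightarrow> tm0 N \<eta> \<xi> k1 trK Tinfty m lam = tm_closed N \<eta> \<xi> k1 e m lam"
proof (induction m arbitrary: lam rule: nat_induct_at_least)
  case base
  show ?case by (simp add: tm_closed_def t10_site_prod trK e0 algebra_simps)
next
  case (Suc m)
  have IH: "tm0 N \<eta> \<xi> k1 trK Tinfty m \<mu> = tm_closed N \<eta> \<xi> k1 e m \<mu>" for \<mu>
    using Suc by simp
  define Q where "Q a = (\<Prod>r\<in>{1..m}. site_prod N \<xi> (\<xi> a - of_nat r * \<eta>))" for a
  define l where "l a = (\<Prod>b\<in>{1..N}-{a}. (lam - \<xi> b) / (\<xi> a - \<xi> b))" for a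
  have summand: "gfun N \<eta> \<xi> (Suc m) a lam * t10 N \<eta> \<xi> k1 trK (\<xi> a) * tm0 N \<eta> \<xi> k1 trK Tinfty m (\<xi> a - \<eta>)
      = k1 * e m * (l a * site_prod N \<xi> (\<xi> a + \<eta>))" if a: "a \<in> {1..N}" for a
  proof -
    have sh: "\<xi> a - \<eta> - of_nat j * \<eta> = \<xi> a - of_nat (Suc j) * \<eta>" for j by (simp add: algebra_simps)
    have CQ: "(\<Prod>j\<in>{1..<m}. site_prod N \<xi> (\<xi> a - \<eta> - of_nat j * \<eta>)) * site_prod N \<xi> (\<xi> a - \<eta>) = Q a"
      unfolding Q_def sh using prod_shift1[OF Suc.hyps, of "\<lambda>r. site_prod N \<xi> (\<xi> a - of_nat r * \<eta>)"] by simp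
    have "tm0 N \<eta> \<xi> k1 trK Tinfty m (\<xi> a - \<eta>)
        = (\<Prod>j\<in>{1..<m}. site_prod N \<xi> (\<xi> a - \<eta> - of_nat j * \<eta>)) * (e m * site_prod N \<xi> (\<xi> a - \<eta>))"
      unfolding IH tm_closed_def using site_prod_node[OF a] by simp
    hence "tm0 N \<eta> \<xi> k1 trK Tinfty m (\<xi> a - \<eta>) = e m * Q a"
      unfolding CQ[symmetric] by (simp add: mult_ac)
    moreover have "Q a \<noteq> 0" unfolding Q_def using nz[OF a] Suc.prems by auto
    ultimately show ?thesis
      unfolding gfun_site_prod t10_site_prod site_prod_node[OF a] Q_def[symmetric] l_def[symmetric]
      by (simp add: field_simps)
  qed
  have "tm0 N \<eta> \<xi> k1 trK Tinfty (Suc m) lam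
      = (\<Prod>j\<in>{1..<Suc m}. site_prod N \<xi> (lam - of_nat j * \<eta>)) * (Tinfty (Suc m) * site_prod N \<xi> lam +
          (\<Sum>a=1..N. gfun N \<eta> \<xi> (Suc m) a lam * t10 N \<eta> \<xi> k1 trK (\<xi> a) * tm0 N \<eta> \<xi> k1 trK Tinfty m (\<xi> a - \<eta>)))"
  proof -
    obtain m' where m': "m = Suc m'" using Suc.hyps by (cases m) auto
    have "(\<Prod>b=1..N. \<Prod>r=1..Suc m'. lam - \<xi> b - of_nat r * \<eta>) = (\<Prod>j\<in>{1..<Suc m}. site_prod N \<xi> (lam - of_nat j * \<eta>))"
      unfolding site_prod_def m' by (subst prod.swap) (simp add: atLeastLessThanSuc_atLeastAtMost algebra_simps)
    thus ?thesis unfolding m' by (simp add: site_prod_def)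
  qed
  also have "(\<Sum>a=1..N. gfun N \<eta> \<xi> (Suc m) a lam * t10 N \<eta> \<xi> k1 trK (\<xi> a) * tm0 N \<eta> \<xi> k1 trK Tinfty m (\<xi> a - \<eta>))
      = k1 * e m * (\<Sum>a=1..N. l a * site_prod N \<xi> (\<xi> a + \<eta>))"
    by (simp add: summand sum_distrib_left)
  also have "site_prod N \<xi> (lam + \<eta>) = site_prod N \<xi> lam + (\<Sum>a=1..N. l a * site_prod N \<xi> (\<xi> a + \<eta>))"
    using lagrange_shift[OF inj, of lam \<eta>] unfolding l_def site_prod_plus by (simp add: site_prod_def)
  hence "(\<Sum>a=1..N. l a * site_prod N \<xi> (\<xi> a + \<eta>)) = site_prod N \<xi> (lam + \<eta>) - site_prod N \<xi> lam"
    by simp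
  also have "Tinfty (Suc m) = k1 * e m + e (Suc m)" using Tinf[of "Suc m"] Suc.prems by simp
  finally show ?case by (simp add: tm_closed_def algebra_simps)
qed

lemma sum_alternating_telescope:
  fixes X :: "nat \<Rightarrow> complex"
  shows "1 \<le> k \<Longrightarrow> (\<Sum>b=1..k. (-1) ^ (b - 1) * (X b + X (Suc b))) = X 1 + (-1) ^ (k - 1) * X (Suc k)"
proof (induction k rule: nat_induct_at_least)
  case (Suc k)
  then obtain k' where k': "k = Suc k'" by (cases k) auto
  show ?case using Suc.IH by (simp add: sum.cl_ivl_Suc k' algebra_simps)
qed simp

lemma alpha_site_prod:
  "1 \<le> b \<Longrightarrow> alpha N \<eta> \<xi> k1 b lam = (-1) ^ (b - 1) * k1 ^ b * (\<Prod>h<b. site_prod N \<xi> (lam - of_nat h * \<eta> + \<eta>))"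
proof -
  assume b: "1 \<le> b"
  have "{0..b - 1} = {..<b}" using b by auto
  hence "(\<Prod>h=0..b - 1. alpha1 N \<eta> \<xi> k1 (lam - of_nat h * \<eta>)) = (\<Prod>h<b. k1 * site_prod N \<xi> (lam - of_nat h * \<eta> + \<eta>))"
    unfolding alpha1_def site_prod_def by (simp add: algebra_simps)
  thus ?thesis unfolding alpha_def using b by (simp add: prod.distrib)
qed

text \<open>The quantum spectral curve telescopes: with \<open>X b = k\<^sub>1\<^sup>b A\<^sub>b e\<^sub>n\<^sub>-\<^sub>b D\<^sub>n\<^sub>-\<^sub>b(\<lambda> - b\<eta>)\<close>,
  the \<open>b\<close>-th term equals \<open>(-1)\<^sup>b\<^sup>-\<^sup>1 (X b + X (b + 1))\<close>, and \<open>X 0 = 0\<close> because \<open>e\<^sub>n = 0\<close>.\<close>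
lemma tm_closed_spectral_curve:
  fixes t :: "nat \<Rightarrow> complex \<Rightarrow> complex" and e \<xi> :: "nat \<Rightarrow> complex" and n N :: nat
    and \<eta> lam k1 :: complex
  assumes n2: "2 \<le> n"
    and closed: "\<And>j lam. 1 \<le> j \<Longrightarrow> j \<le> n \<Longrightarrow> t j lam = tm_closed N \<eta> \<xi> k1 e j lam"
    and t0: "\<And>lam. t 0 lam = 1" and e0: "e 0 = 1" and en: "e n = 0"
  shows "(\<Sum>b=0..n. alpha N \<eta> \<xi> k1 b lam * t (n - b) (lam - of_nat b * \<eta>)) = 0"
proof -
  define A where "A b = (\<Prod>h<b. site_prod N \<xi> (lam - of_nat h * \<eta> + \<eta>))" for b
  define D where "D j \<mu> = (\<Prod>i<j. site_prod N \<xi> (\<mu> - of_nat i * \<eta>))" for j \<mu>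
  define X where "X b = k1 ^ b * A b * e (n - b) * D (n - b) (lam - of_nat b * \<eta>)" for b
  have C: "(\<Prod>i\<in>{1..<Suc j}. site_prod N \<xi> (\<mu> - of_nat i * \<eta>)) = D j (\<mu> - \<eta>)" for j \<mu>
  proof -
    have "(\<Prod>i\<in>{1..<Suc j}. site_prod N \<xi> (\<mu> - of_nat i * \<eta>))
        = (\<Prod>i\<in>{Suc 0..<Suc j}. site_prod N \<xi> (\<mu> - of_nat i * \<eta>))" by simp
    also have "\<dots> = (\<Prod>i\<in>{0..<j}. site_prod N \<xi> (\<mu> - of_nat (Suc i) * \<eta>))"
      by (subst prod.atLeast_Suc_lessThan_Suc_shift) (simp add: o_def)
    finally show ?thesis unfolding D_def atLeast0LessThan by (simp add: algebra_simps)
  qed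
  have CD: "(\<Prod>i\<in>{1..<Suc j}. site_prod N \<xi> (\<mu> - of_nat i * \<eta>)) * site_prod N \<xi> \<mu> = D (Suc j) \<mu>" for j \<mu>
    unfolding C D_def by (simp add: prod.lessThan_Suc_shift algebra_simps del: prod.lessThan_Suc)
  have step: "k1 ^ b * A b * t (n - b) (lam - of_nat b * \<eta>) = X (Suc b) + X b" if b: "b < n" for b
  proof -
    obtain j where j: "n - b = Suc j" using b by (cases "n - b") auto
    hence nb: "n - Suc b = j" by simp
    have "lam - of_nat b * \<eta> - \<eta> = lam - of_nat (Suc b) * \<eta>" by (simp add: algebra_simps)
    thus ?thesis
      using closed[of "Suc j" "lam - of_nat b * \<eta>"] j b C[where j=j and \<mu>="lam - of_nat b * \<eta>"]
        CD[where j=j and \<mu>="lam - of_nat b * \<eta>"]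
      unfolding X_def A_def tm_closed_def nb by (simp add: algebra_simps)
  qed
  obtain p where p: "n = Suc p" "1 \<le> p" using n2 by (cases n) auto
  have "(\<Sum>b=0..n. alpha N \<eta> \<xi> k1 b lam * t (n - b) (lam - of_nat b * \<eta>))
      = alpha N \<eta> \<xi> k1 0 lam * t n lam + (\<Sum>b=1..p. alpha N \<eta> \<xi> k1 b lam * t (n - b) (lam - of_nat b * \<eta>))
        + alpha N \<eta> \<xi> k1 n lam * t 0 (lam - of_nat n * \<eta>)"
    unfolding p(1) by (simp add: sum.atLeast0_atMost_Suc sum.atLeast_Suc_atMost)
  also have "alpha N \<eta> \<xi> k1 0 lam * t n lam = - (X 1 + X 0)"
    using step[of 0] p by (simp add: alpha_def A_def)
  also have "(\<Sum>b=1..p. alpha N \<eta> \<xi> k1 b lam * t (n - b) (lam - of_nat b * \<eta>))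
      = (\<Sum>b=1..p. (-1) ^ (b - 1) * (X b + X (Suc b)))"
  proof (rule sum.cong[OF refl])
    fix b assume "b \<in> {1..p}"
    hence b: "1 \<le> b" "b < n" using p by auto
    have "alpha N \<eta> \<xi> k1 b lam = (-1) ^ (b - 1) * (k1 ^ b * A b)"
      unfolding alpha_site_prod[OF b(1)] A_def by (simp add: mult.assoc)
    thus "alpha N \<eta> \<xi> k1 b lam * t (n - b) (lam - of_nat b * \<eta>) = (-1) ^ (b - 1) * (X b + X (Suc b))"
      using step[OF b(2)] by (simp add: mult.assoc add.commute)
  qed
  also have "\<dots> = X 1 + (-1) ^ (p - 1) * X (Suc p)" by (rule sum_alternating_telescope[OF p(2)])
  also have "alpha N \<eta> \<xi> k1 n lam * t 0 (lam - of_nat n * \<eta>) = (-1) ^ (n - 1) * X n"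
    using p t0 e0 by (simp add: alpha_site_prod A_def X_def D_def)
  also have "X 0 = 0" by (simp add: X_def en)
  finally show ?thesis using p by (cases p) simp_all
qed

lemma tm_closed_top:
  assumes "0 < n" "e n = 0"
  shows "tm_closed N \<eta> \<xi> k1 e n lam
       = k1 * e (n - 1) * (\<Prod>b=1..N. (lam - \<xi> b + \<eta>) * (\<Prod>m=1..n-1. lam - \<xi> b - of_nat m * \<eta>))"
proof -
  have "{1..<n} = {1..n-1}" using assms(1) by auto
  hence P1: "(\<Prod>j\<in>{1..<n}. site_prod N \<xi> (lam - of_nat j * \<eta>)) = (\<Prod>b=1..N. \<Prod>m=1..n-1. lam - \<xi> b - of_nat m * \<eta>)"
    unfolding site_prod_def by (subst prod.swap) (simp add: algebra_simps)
  have P2: "site_prod N \<xi> (lam + \<eta>) = (\<Prod>b=1..N. lam - \<xi> b + \<eta>)"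
    unfolding site_prod_def by (simp add: algebra_simps)
  have "tm_closed N \<eta> \<xi> k1 e n lam
      = k1 * e (n - 1) * (site_prod N \<xi> (lam + \<eta>) * (\<Prod>j\<in>{1..<n}. site_prod N \<xi> (lam - of_nat j * \<eta>)))"
    unfolding tm_closed_def using assms(2) by (simp add: mult_ac)
  also have "\<dots> = k1 * e (n - 1) * (\<Prod>b=1..N. (lam - \<xi> b + \<eta>) * (\<Prod>m=1..n-1. lam - \<xi> b - of_nat m * \<eta>))"
    unfolding P1 P2 prod.distrib ..
  finally show ?thesis .
qed

lemma generic_inj:
  assumes "\<And>a b (k::int). a \<in> {1..N} \<Longrightarrow> b \<in> {1..N} \<Longrightarrow> a \<noteq> b \<Longrightarrow> \<bar>k\<bar> \<le> int n \<Longrightarrow> \<xi> a - \<xi> b \<noteq> of_int k * \<eta>"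
  shows "inj_on \<xi> {1..N}"
proof (rule inj_onI)
  fix a b assume "a \<in> {1..N}" "b \<in> {1..N}" "\<xi> a = \<xi> b"
  thus "a = b" using assms[of a b 0] by (cases "a = b") auto
qed

lemma generic_site_prod_nonzero:
  assumes eta: "\<eta> \<noteq> 0"
    and generic: "\<And>a b (k::int). a \<in> {1..N} \<Longrightarrow> b \<in> {1..N} \<Longrightarrow> a \<noteq> b \<Longrightarrow> \<bar>k\<bar> \<le> int n \<Longrightarrow>
                    \<xi> a - \<xi> b \<noteq> of_int k * \<eta>"
    and a: "a \<in> {1..N}" and r: "1 \<le> r" "r < n"
  shows "site_prod N \<xi> (\<xi> a - of_nat r * \<eta>) \<noteq> 0"
proof -
  have "\<xi> a - of_nat r * \<eta> - \<xi> b \<noteq> 0" if b: "b \<in> {1..N}" for b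
  proof (cases "a = b")
    case False
    have "\<xi> a - \<xi> b \<noteq> of_int (int r) * \<eta>" by (rule generic[OF a b False]) (use r in simp)
    thus ?thesis by (simp add: algebra_simps)
  qed (use eta r in simp)
  thus ?thesis unfolding site_prod_def by simp
qed

theorem mainTheorem5:
  fixes n N :: nat and \<eta> :: complex and \<xi> :: "nat \<Rightarrow> complex"
    and K KJ W Winv :: "complex mat" and n_as :: "(nat \<times> complex) list" and k1 :: complex
  assumes n: "n \<ge> 2" and N: "N \<ge> 1"
    and eta: "\<eta> \<noteq> 0"
    and generic: "\<And>a b (k::int). a \<in> {1..N} \<Longrightarrow> b \<in> {1..N} \<Longrightarrow> a \<noteq> b \<Longrightarrow> \<bar>k\<bar> \<le> int n \<Longrightarrow>
                    \<xi> a - \<xi> b \<noteq> of_int k * \<eta>"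
    and K: "K \<in> carrier_mat n n"
    and wsimple: "w_simple K"
    and jordan: "KJ = jordan_matrix n_as"
    and sim: "similar_mat_wit K KJ W Winv"
    and k1: "KJ *\<^sub>v unit_vec n 0 = k1 \<cdot>\<^sub>v unit_vec n 0" "k1 \<noteq> 0"
  defines "t0 \<equiv> op_app n N (tensor_op W) vac"
    and "t \<equiv> tm0 N \<eta> \<xi> k1 (mat_trace K) (Tinf n K)"
  shows "(\<exists>x\<in>cfgs n N. t0 x \<noteq> 0)
    \<and> (\<forall>m\<in>{1..n}. \<forall>lam::complex. \<forall>x\<in>cfgs n N. op_app n N (Tm n K \<eta> \<xi> N m lam) t0 x = t m lam * t0 x)
    \<and> (\<forall>lam::complex. t n lam = det K * (\<Prod>b=1..N. (lam - \<xi> b + \<eta>) * (\<Prod>m=1..n-1. lam - \<xi> b - of_nat m * \<eta>)))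
    \<and> (\<forall>lam::complex. (\<Sum>b=0..n. alpha N \<eta> \<xi> k1 b lam * t (n - b) (lam - of_nat b * \<eta>)) = 0)"
proof -
  have n0: "0 < n" using n by simp
  interpret jordan_twist n K KJ W Winv
  proof
    show "KJ $$ (i, j) = 0" if "i < n" "j < n" "j < i" for i j
      using jordan_matrix_upper[of n_as n i j] similar_mat_witD2[OF K sim] that jordan by simp
  qed (use n0 K sim in auto)
  have k1_eq: "k1 = KJ $$ (0, 0)" by (rule eigen_unit_vec_diag_entry[OF carriers(1) n0 k1(1)])
  have closed: "t m lam = tm_closed N \<eta> \<xi> k1 esym m lam" if "1 \<le> m" "m \<le> n" for m lam
    unfolding t_def k1_eq
    by (rule tm0_closed_form[OF generic_inj[OF generic] generic_site_prod_nonzero[OF eta generic]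
          Tinf_closed trace_K elem_sym_0 that])
  show ?thesis
  proof (intro conjI ballI allI)
    show "\<exists>x\<in>cfgs n N. t0 x \<noteq> 0" unfolding t0_def by (rule vac_image_nonzero)
  next
    fix m lam x assume "m \<in> {1..n}" "x \<in> cfgs n N"
    thus "op_app n N (Tm n K \<eta> \<xi> N m lam) t0 x = t m lam * t0 x"
      unfolding t0_def using Tm_vac_eigen closed k1_eq by simp
  next
    fix lam
    show "t n lam = det K * (\<Prod>b=1..N. (lam - \<xi> b + \<eta>) * (\<Prod>m=1..n-1. lam - \<xi> b - of_nat m * \<eta>))"
      using closed[of n lam] n tm_closed_top[where e = esym, OF n0 elem_sym_beyond[OF n0]] det_K k1_eq by simp
  next
    fix lam
    show "(\<Sum>b=0..n. alpha N \<eta> \<xi> k1 b lam * t (n - b) (lam - of_nat b * \<eta>)) = 0"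
      by (rule tm_closed_spectral_curve[OF n closed]) (auto simp: t_def elem_sym_beyond[OF n0])
  qed
qed

end
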